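(* Let $\{Y_k\}$ be a mean-zero sequence with $n^{-1/2}\sum_{1\le j\le nt}Y_j\xrightarrow{d}\sigma W(t)$ in $D[0,1]$ for some $\sigma>0$ ($W$ a standard Wiener process). For each $n$ let $X_i=\mu+Y_i$ for $1\le i\le k^*$ and $X_i=\mu+\Delta+Y_i$ for $k^*<i\le n$, where $k^*=[n\theta]$ with $0<\theta<1$ and $\Delta=\Delta(n)$, and suppose $|\hat k/n-\theta|=o_P(1)$. Then the random vectors $$\Big(\hat k^{-1/2}\max_{1\le k\le\hat k}\Big|\sum_{1\le i\le k}Y_i-\frac k{\hat k}\sum_{1\le i\le\hat k}Y_i\Big|,\ (n-\hat k)^{-1/2}\max_{\hat k<k\le n}\Big|\sum_{\hat k<i\le k}Y_i-\frac{k-\hat k}{n-\hat k}\sum_{\hat k<i\le n}Y_i\Big|\Big)$$ converge in distribution to $\big(\sigma\sup_{0\le t\le1}|B^{(1)}(t)|,\ \sigma\sup_{0\le t\le1}|B^{(2)}(t)|\big)$, where $B^{(1)},B^{(2)}$ are independent Brownian bridges.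
   Context: $\hat k=\min\{k:\max_{1\le i\le n}|\sum_{j\le i}X_j-\frac in\sum_{j\le n}X_j|=|\sum_{j\le k}X_j-\frac kn\sum_{j\le n}X_j|\}$. *)

theory Defs
  imports "HOL-Probability.Probability"
begin

text \<open>Paths are functions real => real; only their values on [0,1] matter.\<close>

definition cadlag01 :: "(real \<Rightarrow> real) set" where
  "cadlag01 = {x. (\<forall>t\<in>{0..<1}. (x \<longlongrightarrow> x t) (at_right t)) \<and>
                  (\<forall>t\<in>{0<..1}. \<exists>l. (x \<longlongrightarrow> l) (at_left t))}"

definition time_changes01 :: "(real \<Rightarrow> real) set" where
  "time_changes01 = {l. strict_mono_on {0..1} l \<and> continuous_on {0..1} l \<and>
                        l ` {0..1} = {0..1}}"

definition skorokhod_dist :: "(real \<Rightarrow> real) \<Rightarrow> (real \<Rightarrow> real) \<Rightarrow> real" where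
  "skorokhod_dist x y = Inf {e. e \<ge> 0 \<and> (\<exists>l\<in>time_changes01.
        (\<forall>t\<in>{0..1}. \<bar>l t - t\<bar> \<le> e) \<and> (\<forall>t\<in>{0..1}. \<bar>x t - y (l t)\<bar> \<le> e))}"

definition bounded_continuous_wrt ::
  "('m \<Rightarrow> 'm \<Rightarrow> real) \<Rightarrow> 'm set \<Rightarrow> ('m \<Rightarrow> real) \<Rightarrow> bool" where
  "bounded_continuous_wrt d S f \<longleftrightarrow>
     (\<exists>B. \<forall>x\<in>S. \<bar>f x\<bar> \<le> B) \<and>
     (\<forall>x\<in>S. \<forall>e>0. \<exists>\<delta>>0. \<forall>y\<in>S. d x y < \<delta> \<longrightarrow> \<bar>f x - f y\<bar> < e)"

text \<open>Convergence in distribution of random elements of the metric space (S,d):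
  E f(X_n) -> E f(X) for every bounded d-continuous f (for which the compositions are
  random variables -- automatic for Borel random elements of D[0,1]).\<close>
definition conv_distr_wrt ::
  "('m \<Rightarrow> 'm \<Rightarrow> real) \<Rightarrow> 'm set \<Rightarrow> 'a measure \<Rightarrow> (nat \<Rightarrow> 'a \<Rightarrow> 'm) \<Rightarrow>
   'b measure \<Rightarrow> ('b \<Rightarrow> 'm) \<Rightarrow> bool" where
  "conv_distr_wrt d S M Xs N X \<longleftrightarrow>
     (\<forall>f. bounded_continuous_wrt d S f \<longrightarrow>
          (\<forall>n. (\<lambda>\<omega>. f (Xs n \<omega>)) \<in> borel_measurable M) \<longrightarrow>
          (\<lambda>\<omega>. f (X \<omega>)) \<in> borel_measurable N \<longrightarrow>
          (\<lambda>n. \<integral>\<omega>. f (Xs n \<omega>) \<partial>M) \<longlonglongrightarrow> (\<integral>\<omega>. f (X \<omega>) \<partial>N))"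

definition conv_distr_R2 ::
  "'a measure \<Rightarrow> (nat \<Rightarrow> 'a \<Rightarrow> real \<times> real) \<Rightarrow> 'b measure \<Rightarrow> ('b \<Rightarrow> real \<times> real) \<Rightarrow> bool" where
  "conv_distr_R2 M Zs N Z \<longleftrightarrow>
     (\<forall>f :: real \<times> real \<Rightarrow> real. continuous_on UNIV f \<longrightarrow> bounded (range f) \<longrightarrow>
          (\<lambda>n. \<integral>\<omega>. f (Zs n \<omega>) \<partial>M) \<longlonglongrightarrow> (\<integral>\<omega>. f (Z \<omega>) \<partial>N))"

definition wiener_process :: "'b measure \<Rightarrow> (real \<Rightarrow> 'b \<Rightarrow> real) \<Rightarrow> bool" where
  "wiener_process N W \<longleftrightarrow> prob_space N \<and>
     (\<forall>t\<in>{0..1}. W t \<in> borel_measurable N) \<and>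
     (\<forall>\<omega>\<in>space N. W 0 \<omega> = 0 \<and> continuous_on {0..1} (\<lambda>t. W t \<omega>)) \<and>
     (\<forall>s t. 0 \<le> s \<longrightarrow> s < t \<longrightarrow> t \<le> 1 \<longrightarrow>
        distributed N lborel (\<lambda>\<omega>. W t \<omega> - W s \<omega>)
          (\<lambda>x. ennreal (normal_density 0 (sqrt (t - s)) x))) \<and>
     (\<forall>(ts :: nat \<Rightarrow> real) m. 0 \<le> ts 0 \<longrightarrow> ts m \<le> 1 \<longrightarrow> (\<forall>i<m. ts i \<le> ts (Suc i)) \<longrightarrow>
        prob_space.indep_vars N (\<lambda>_. borel) (\<lambda>i \<omega>. W (ts (Suc i)) \<omega> - W (ts i) \<omega>) {..<m})"

definition bbridge :: "(real \<Rightarrow> 'b \<Rightarrow> real) \<Rightarrow> real \<Rightarrow> 'b \<Rightarrow> real" where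
  "bbridge W t \<omega> = W t \<omega> - t * W 1 \<omega>"

definition cusum :: "nat \<Rightarrow> (nat \<Rightarrow> real) \<Rightarrow> nat \<Rightarrow> real" where
  "cusum n x k = \<bar>(\<Sum>j=1..k. x j) - real k / real n * (\<Sum>j=1..n. x j)\<bar>"

definition khat :: "nat \<Rightarrow> (nat \<Rightarrow> real) \<Rightarrow> nat" where
  "khat n x = (LEAST k. 1 \<le> k \<and> k \<le> n \<and>
                 cusum n x k = Max ((cusum n x) ` {1..n}))"

end

(* Both statistics are, up to an error that vanishes in probability, continuous functionals of the
   partial-sum process evaluated at the split point khat/n, which tends to theta.  Each is squeezed
   between functionals of the form  x |-> sup over pairs of times u, v of Phi(u, v, x u, x v, x 1)
   with Phi continuous; these are continuous for the Skorokhod J1 metric, so the functional limit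
   theorem applies to them, and the squeezing error is governed by the oscillation of the path near
   theta, which vanishes for the continuous Brownian limit.  The limit is the pair of normalized
   bridge suprema of sigma W on [0, theta] and on [theta, 1]; the increments of W over the two
   intervals are independent with the scaling of a standard Wiener process on [0, 1], so grid
   approximations of this pair have the same law as those for two independent Brownian bridges. *)

theory Submission
  imports Defs
begin

section \<open>Sup functionals on D[0,1]\<close>

lemma cadlag01_locally_bounded:
  assumes x: "x \<in> cadlag01" and t: "t \<in> {0..1}"
  shows "\<exists>r>0. \<exists>B. \<forall>s\<in>{0..1}. dist t s < r \<longrightarrow> \<bar>x s\<bar> \<le> B"
proof -
  have "\<exists>r>0. \<forall>s. t < s \<and> s < t + r \<and> s \<le> 1 \<longrightarrow> \<bar>x s\<bar> \<le> \<bar>x t\<bar> + 1"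
  proof (cases "t < 1")
    case True
    then have "(x \<longlongrightarrow> x t) (at_right t)" using x t unfolding cadlag01_def by auto
    then have "eventually (\<lambda>s. dist (x s) (x t) < 1) (at_right t)" by (rule tendstoD) simp
    then obtain b where "b > t" "\<And>s. s > t \<Longrightarrow> s < b \<Longrightarrow> dist (x s) (x t) < 1"
      unfolding eventually_at_right_field by blast
    then show ?thesis by (intro exI[of _ "b - t"]) (force simp: dist_real_def)
  qed (intro exI[of _ 1], auto)
  then obtain r1 where r1: "r1 > 0" "\<forall>s. t < s \<and> s < t + r1 \<and> s \<le> 1 \<longrightarrow> \<bar>x s\<bar> \<le> \<bar>x t\<bar> + 1"
    by blast
  have "\<exists>r>0. \<exists>B. \<forall>s. t - r < s \<and> s < t \<and> 0 \<le> s \<longrightarrow> \<bar>x s\<bar> \<le> B"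
  proof (cases "t > 0")
    case True
    have "\<exists>l. (x \<longlongrightarrow> l) (at_left t)" using x t True unfolding cadlag01_def by auto
    then obtain l where "(x \<longlongrightarrow> l) (at_left t)" by blast
    then have "eventually (\<lambda>s. dist (x s) l < 1) (at_left t)" by (rule tendstoD) simp
    then obtain b where b: "b < t" "\<And>s. s > b \<Longrightarrow> s < t \<Longrightarrow> dist (x s) l < 1"
      unfolding eventually_at_left_field by blast
    then have "\<forall>s. t - (t - b) < s \<and> s < t \<and> 0 \<le> s \<longrightarrow> \<bar>x s\<bar> \<le> \<bar>l\<bar> + 1"
      by (force simp: dist_real_def)
    then show ?thesis using b(1) by (intro exI[of _ "t - b"]) auto
  qed (use t in \<open>intro exI[of _ 1], auto\<close>)
  then obtain r2 B2 where r2: "r2 > 0" "\<forall>s. t - r2 < s \<and> s < t \<and> 0 \<le> s \<longrightarrow> \<bar>x s\<bar> \<le> B2"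
    by blast
  show ?thesis
  proof (rule exI[of _ "min r1 r2"], intro conjI exI[of _ "max (\<bar>x t\<bar> + 1) B2"] ballI impI)
    fix s assume s: "s \<in> {0..1}" "dist t s < min r1 r2"
    show "\<bar>x s\<bar> \<le> max (\<bar>x t\<bar> + 1) B2"
      using r1(2)[rule_format, of s] r2(2)[rule_format, of s] s
      by (cases s t rule: linorder_cases) (auto simp: dist_real_def)
  qed (use r1 r2 in simp)
qed

lemma cadlag01_bounded:
  assumes x: "x \<in> cadlag01"
  shows "\<exists>B. \<forall>t\<in>{0..1}. \<bar>x t\<bar> \<le> B"
proof -
  obtain r B where rB: "\<And>t. t \<in> {0..1} \<Longrightarrow> r t > 0 \<and> (\<forall>s\<in>{0..1}. dist t s < r t \<longrightarrow> \<bar>x s\<bar> \<le> B t)"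
    using cadlag01_locally_bounded[OF x] by metis
  obtain D where D: "D \<subseteq> {0..1}" "finite D" "{0..1} \<subseteq> \<Union> ((\<lambda>t. ball t (r t)) ` D)"
    by (rule compactE_image[where C="{0..1}" and f="\<lambda>t. ball t (r t)"]) (use rB in auto)
  show ?thesis
  proof (intro exI[of _ "\<Sum>t\<in>D. \<bar>B t\<bar>"] ballI)
    fix s :: real assume s: "s \<in> {0..1}"
    then obtain t where t: "t \<in> D" "dist t s < r t" using D(3) by auto
    then have "\<bar>x s\<bar> \<le> \<bar>B t\<bar>" using rB[of t] D(1) s by force
    also have "\<dots> \<le> (\<Sum>t\<in>D. \<bar>B t\<bar>)" using t D(2) by (intro member_le_sum) auto
    finally show "\<bar>x s\<bar> \<le> (\<Sum>t\<in>D. \<bar>B t\<bar>)" .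
  qed
qed

lemma continuous_on_cadlag01:
  assumes "continuous_on {0..1} f"
  shows "f \<in> cadlag01"
proof -
  have "(f \<longlongrightarrow> f t) (at_right t)" if "t \<in> {0..<1}" for t
  proof -
    have "continuous_on {t..1} f" by (rule continuous_on_subset[OF assms]) (use that in auto)
    then have "(f \<longlongrightarrow> f t) (at t within {t..1})" using that unfolding continuous_on_def by auto
    then show ?thesis using that by (simp add: at_within_Icc_at_right)
  qed
  moreover have "(f \<longlongrightarrow> f t) (at_left t)" if "t \<in> {0<..1}" for t
  proof -
    have "continuous_on {0..t} f" by (rule continuous_on_subset[OF assms]) (use that in auto)
    then have "(f \<longlongrightarrow> f t) (at t within {0..t})" using that unfolding continuous_on_def by auto
    then show ?thesis using that by (simp add: at_within_Icc_at_left)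
  qed
  ultimately show ?thesis unfolding cadlag01_def by blast
qed

lemma floor_step_cadlag01:
  fixes g :: "nat \<Rightarrow> real" and c :: real
  assumes "c \<ge> 0"
  shows "(\<lambda>t. g (nat \<lfloor>c * t\<rfloor>)) \<in> cadlag01"
proof (cases "c = 0")
  case True then show ?thesis unfolding cadlag01_def by auto
next
  case False
  then have c: "c > 0" using assms by simp
  have "((\<lambda>t. g (nat \<lfloor>c * t\<rfloor>)) \<longlongrightarrow> g (nat \<lfloor>c * t\<rfloor>)) (at_right t)" for t
  proof (rule tendsto_eventually)
    let ?b = "(real_of_int \<lfloor>c * t\<rfloor> + 1) / c"
    have "t < ?b" using c real_of_int_floor_add_one_gt[of "c*t"] by (simp add: field_simps)
    moreover have "\<lfloor>c * y\<rfloor> = \<lfloor>c * t\<rfloor>" if "y > t" "y < ?b" for y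
    proof (rule floor_unique)
      show "real_of_int \<lfloor>c * t\<rfloor> \<le> c * y"
        using that c by (meson order.trans of_int_floor_le less_imp_le mult_left_mono)
    qed (use that c in \<open>simp add: field_simps\<close>)
    ultimately show "\<forall>\<^sub>F y in at_right t. g (nat \<lfloor>c * y\<rfloor>) = g (nat \<lfloor>c * t\<rfloor>)"
      unfolding eventually_at_right_field by (intro exI[of _ ?b]) auto
  qed
  moreover have "((\<lambda>t. g (nat \<lfloor>c * t\<rfloor>)) \<longlongrightarrow> g (nat (\<lceil>c * t\<rceil> - 1))) (at_left t)" for t
  proof (rule tendsto_eventually)
    let ?b = "(real_of_int \<lceil>c * t\<rceil> - 1) / c"
    have "?b < t" using c by (simp add: field_simps) linarith
    moreover have "\<lfloor>c * y\<rfloor> = \<lceil>c * t\<rceil> - 1" if "y > ?b" "y < t" for y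
    proof (rule floor_unique)
      have "c * y < c * t" using that c by simp
      then show "c * y < real_of_int (\<lceil>c * t\<rceil> - 1) + 1"
        using order.strict_trans2[OF _ le_of_int_ceiling] by simp
    qed (use that c in \<open>simp add: field_simps\<close>)
    ultimately show "\<forall>\<^sub>F y in at_left t. g (nat \<lfloor>c * y\<rfloor>) = g (nat (\<lceil>c * t\<rceil> - 1))"
      unfolding eventually_at_left_field by (intro exI[of _ ?b]) auto
  qed
  ultimately show ?thesis unfolding cadlag01_def by blast
qed

lemma time_changes01_fix_one:
  assumes "l \<in> time_changes01"
  shows "l 1 = 1"
proof -
  have sm: "strict_mono_on {0..1} l" and im: "l ` {0..1} = {0..1}"
    using assms unfolding time_changes01_def by auto
  have "(1::real) \<in> l ` {0..1}" using im by simp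
  then obtain s where s: "s \<in> {0..1}" "l s = 1" by (rule imageE) simp
  have "l 1 \<in> {0..1}" using im by auto
  moreover have "\<not> l 1 < 1"
  proof
    assume "l 1 < 1"
    then have "s < 1" using s by (cases "s = 1") auto
    then have "l s < l 1" using s by (intro strict_mono_onD[OF sm]) auto
    then show False using s \<open>l 1 < 1\<close> by simp
  qed
  ultimately show ?thesis by simp
qed

lemma id_in_time_changes01: "(\<lambda>t. t) \<in> time_changes01"
  unfolding time_changes01_def by (auto simp: strict_mono_on_def)

lemma skorokhod_dist_lessE:
  assumes x: "\<forall>t\<in>{0..1}. \<bar>x t\<bar> \<le> Bx" and y: "\<forall>t\<in>{0..1}. \<bar>y t\<bar> \<le> By"
    and d: "skorokhod_dist x y < d"
  obtains l e where "l \<in> time_changes01" "e < d"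
    "\<forall>t\<in>{0..1}. \<bar>l t - t\<bar> \<le> e" "\<forall>t\<in>{0..1}. \<bar>x t - y (l t)\<bar> \<le> e"
proof -
  let ?E = "{e. e \<ge> 0 \<and> (\<exists>l\<in>time_changes01.
        (\<forall>t\<in>{0..1}. \<bar>l t - t\<bar> \<le> e) \<and> (\<forall>t\<in>{0..1}. \<bar>x t - y (l t)\<bar> \<le> e))}"
  have "\<forall>t\<in>{0..1}. \<bar>x t - y t\<bar> \<le> Bx + By"
    using x y by (auto intro: order.trans[OF abs_triangle_ineq4] add_mono)
  moreover have "Bx \<ge> 0" "By \<ge> 0" using x[rule_format, of 0] y[rule_format, of 0] by auto
  ultimately have "Bx + By \<in> ?E" using id_in_time_changes01 by (auto intro!: bexI[of _ "\<lambda>t. t"])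
  then have "?E \<noteq> {}" by blast
  from cInf_lessD[OF this] d obtain e where e: "e \<in> ?E" "e < d"
    unfolding skorokhod_dist_def by blast
  then obtain l where "l \<in> time_changes01" "\<forall>t\<in>{0..1}. \<bar>l t - t\<bar> \<le> e"
    "\<forall>t\<in>{0..1}. \<bar>x t - y (l t)\<bar> \<le> e" by blast
  then show ?thesis using that e(2) by blast
qed

text \<open>Time changes fix 1 and map [0,1] onto itself, which makes functionals of this form continuous
  for the J1 metric.\<close>

definition pair_sup :: "(real \<times> real \<times> real \<times> real \<times> real \<Rightarrow> real) \<Rightarrow> (real \<Rightarrow> real) \<Rightarrow> real" where
  "pair_sup \<Phi> x = (SUP p\<in>{0..1}\<times>{0..1}. \<Phi> (fst p, snd p, x (fst p), x (snd p), x 1))"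

definition sample_box :: "real \<Rightarrow> (real \<times> real \<times> real \<times> real \<times> real) set" where
  "sample_box B = {0..1} \<times> {0..1} \<times> {-B..B} \<times> {-B..B} \<times> {-B..B}"

lemma compact_sample_box: "compact (sample_box B)"
  unfolding sample_box_def by (intro compact_Times compact_Icc)

lemma bdd_above_pair_sup:
  fixes \<Phi> :: "real \<times> real \<times> real \<times> real \<times> real \<Rightarrow> real" and B :: real
  assumes "continuous_on UNIV \<Phi>" "\<forall>t\<in>{0..1}. \<bar>x t\<bar> \<le> B"
  shows "bdd_above ((\<lambda>p. \<Phi> (fst p, snd p, x (fst p), x (snd p), x 1)) ` ({0..1}\<times>{0..1}))"
proof -
  have "compact (\<Phi> ` sample_box B)"
    using assms(1) by (intro compact_continuous_image compact_sample_box) (auto intro: continuous_on_subset)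
  then have "bdd_above (\<Phi> ` sample_box B)" by (intro bounded_imp_bdd_above compact_imp_bounded)
  moreover have "(\<lambda>p. \<Phi> (fst p, snd p, x (fst p), x (snd p), x 1)) ` ({0..1}\<times>{0..1}) \<subseteq> \<Phi> ` sample_box B"
    using assms(2) by (force simp: sample_box_def abs_le_iff)
  ultimately show ?thesis by (rule bdd_above_mono)
qed

lemma pair_sup_upper:
  assumes "continuous_on UNIV \<Phi>" "\<forall>t\<in>{0..1}. \<bar>x t\<bar> \<le> B" "u \<in> {0..1}" "v \<in> {0..1}"
  shows "\<Phi> (u, v, x u, x v, x 1) \<le> pair_sup \<Phi> x"
  unfolding pair_sup_def
  using cSUP_upper[OF _ bdd_above_pair_sup[OF assms(1,2)], of "(u,v)"] assms(3,4) by auto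

lemma pair_sup_least:
  assumes "\<And>u v. u \<in> {0..1} \<Longrightarrow> v \<in> {0..1} \<Longrightarrow> \<Phi> (u, v, x u, x v, x 1) \<le> c"
  shows "pair_sup \<Phi> x \<le> c"
  unfolding pair_sup_def using assms by (intro cSUP_least) auto

lemma dist_Pair_le: "dist (a, b) (c, d) \<le> dist a c + dist b d"
  unfolding dist_Pair_Pair by (rule sqrt_sum_squares_le_sum) auto

lemma uniformly_continuous_on_sample_box:
  fixes \<Phi> :: "real \<times> real \<times> real \<times> real \<times> real \<Rightarrow> real" and B :: real
  assumes "continuous_on UNIV \<Phi>" and e: "e > 0"
  obtains d where "d > 0" "\<And>p q. p \<in> sample_box B \<Longrightarrow> q \<in> sample_box B \<Longrightarrow>
      \<bar>fst q - fst p\<bar> \<le> d \<Longrightarrow> \<bar>fst (snd q) - fst (snd p)\<bar> \<le> d \<Longrightarrow>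
      \<bar>fst (snd (snd q)) - fst (snd (snd p))\<bar> \<le> d \<Longrightarrow>
      \<bar>fst (snd (snd (snd q))) - fst (snd (snd (snd p)))\<bar> \<le> d \<Longrightarrow>
      \<bar>snd (snd (snd (snd q))) - snd (snd (snd (snd p)))\<bar> \<le> d \<Longrightarrow> \<bar>\<Phi> q - \<Phi> p\<bar> < e"
proof -
  have "uniformly_continuous_on (sample_box B) \<Phi>"
    using assms(1) by (intro compact_uniformly_continuous compact_sample_box) (auto intro: continuous_on_subset)
  then obtain d0 where d0: "d0 > 0"
    "\<And>p q. p \<in> sample_box B \<Longrightarrow> q \<in> sample_box B \<Longrightarrow> dist q p < d0 \<Longrightarrow> dist (\<Phi> q) (\<Phi> p) < e"
    unfolding uniformly_continuous_on_def using e by metis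
  show ?thesis
  proof (rule that[of "d0/6"])
    fix p q :: "real \<times> real \<times> real \<times> real \<times> real"
    obtain a1 a2 a3 a4 a5 where p: "p = (a1, a2, a3, a4, a5)" by (cases p) auto
    obtain b1 b2 b3 b4 b5 where q: "q = (b1, b2, b3, b4, b5)" by (cases q) auto
    assume "p \<in> sample_box B" "q \<in> sample_box B" and close:
      "\<bar>fst q - fst p\<bar> \<le> d0/6" "\<bar>fst (snd q) - fst (snd p)\<bar> \<le> d0/6"
      "\<bar>fst (snd (snd q)) - fst (snd (snd p))\<bar> \<le> d0/6"
      "\<bar>fst (snd (snd (snd q))) - fst (snd (snd (snd p)))\<bar> \<le> d0/6"
      "\<bar>snd (snd (snd (snd q))) - snd (snd (snd (snd p)))\<bar> \<le> d0/6"
    have "dist q p \<le> \<bar>b1 - a1\<bar> + (\<bar>b2 - a2\<bar> + (\<bar>b3 - a3\<bar> + (\<bar>b4 - a4\<bar> + \<bar>b5 - a5\<bar>)))"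
      unfolding p q
      by (rule order.trans[OF dist_Pair_le] add_mono order.refl | simp add: dist_real_def)+
    also have "\<dots> < d0" using close d0 unfolding p q by simp
    finally show "\<bar>\<Phi> q - \<Phi> p\<bar> < e" using d0(2)[OF \<open>p \<in> _\<close> \<open>q \<in> _\<close>] by (simp add: dist_real_def)
  qed (use d0 in simp)
qed

lemma pair_sup_time_change:
  assumes l: "l ` {0..1} = {0..1}" "l 1 = 1"
    and close: "\<And>u v. u \<in> {0..1} \<Longrightarrow> v \<in> {0..1} \<Longrightarrow>
      \<bar>\<Phi> (l u, l v, y (l u), y (l v), y 1) - \<Phi> (u, v, x u, x v, x 1)\<bar> < e"
    and \<Phi>: "continuous_on UNIV \<Phi>" and Bx: "\<forall>t\<in>{0..1}. \<bar>x t\<bar> \<le> Bx" and By: "\<forall>t\<in>{0..1}. \<bar>y t\<bar> \<le> By"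
  shows "\<bar>pair_sup \<Phi> x - pair_sup \<Phi> y\<bar> \<le> e"
proof -
  have "pair_sup \<Phi> x \<le> pair_sup \<Phi> y + e"
  proof (rule pair_sup_least)
    fix u v :: real assume uv: "u \<in> {0..1}" "v \<in> {0..1}"
    have "l u \<in> l ` {0..1}" "l v \<in> l ` {0..1}" using uv by simp_all
    then have "\<Phi> (l u, l v, y (l u), y (l v), y 1) \<le> pair_sup \<Phi> y"
      using pair_sup_upper[OF \<Phi> By, of "l u" "l v"] l by simp
    then show "\<Phi> (u, v, x u, x v, x 1) \<le> pair_sup \<Phi> y + e" using close[OF uv] by linarith
  qed
  moreover have "pair_sup \<Phi> y \<le> pair_sup \<Phi> x + e"
  proof (rule pair_sup_least)
    fix u' v' :: real assume "u' \<in> {0..1}" "v' \<in> {0..1}"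
    then have "u' \<in> l ` {0..1}" "v' \<in> l ` {0..1}" using l(1) by simp_all
    then obtain u v where uv: "u \<in> {0..1}" "v \<in> {0..1}" "u' = l u" "v' = l v" by (elim imageE) simp
    have "\<Phi> (u, v, x u, x v, x 1) \<le> pair_sup \<Phi> x" using pair_sup_upper[OF \<Phi> Bx uv(1,2)] .
    then show "\<Phi> (u', v', y u', y v', y 1) \<le> pair_sup \<Phi> x + e"
      using close[OF uv(1,2)] unfolding uv(3,4) abs_less_iff by linarith
  qed
  ultimately show ?thesis by linarith
qed

lemma pair_sup_skorokhod_continuous:
  assumes \<Phi>: "continuous_on UNIV \<Phi>" and x: "x \<in> cadlag01" and e: "e > 0"
  shows "\<exists>d>0. \<forall>y\<in>cadlag01. skorokhod_dist x y < d \<longrightarrow> \<bar>pair_sup \<Phi> x - pair_sup \<Phi> y\<bar> < e"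
proof -
  obtain Bx where Bx: "\<forall>t\<in>{0..1}. \<bar>x t\<bar> \<le> Bx" using cadlag01_bounded[OF x] by blast
  obtain d where d: "d > 0" and box: "\<And>p q. p \<in> sample_box (Bx + 1) \<Longrightarrow> q \<in> sample_box (Bx + 1) \<Longrightarrow>
      \<bar>fst q - fst p\<bar> \<le> d \<Longrightarrow> \<bar>fst (snd q) - fst (snd p)\<bar> \<le> d \<Longrightarrow>
      \<bar>fst (snd (snd q)) - fst (snd (snd p))\<bar> \<le> d \<Longrightarrow>
      \<bar>fst (snd (snd (snd q))) - fst (snd (snd (snd p)))\<bar> \<le> d \<Longrightarrow>
      \<bar>snd (snd (snd (snd q))) - snd (snd (snd (snd p)))\<bar> \<le> d \<Longrightarrow> \<bar>\<Phi> q - \<Phi> p\<bar> < e/2"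
    using uniformly_continuous_on_sample_box[OF \<Phi>, of "e/2"] e by (metis half_gt_zero)
  show ?thesis
  proof (intro exI[of _ "min 1 d"] conjI ballI impI)
    fix y assume y: "y \<in> cadlag01" and dxy: "skorokhod_dist x y < min 1 d"
    obtain By where By: "\<forall>t\<in>{0..1}. \<bar>y t\<bar> \<le> By" using cadlag01_bounded[OF y] by blast
    obtain l c where l: "l \<in> time_changes01" "c < min 1 d" "\<forall>t\<in>{0..1}. \<bar>l t - t\<bar> \<le> c"
      "\<forall>t\<in>{0..1}. \<bar>x t - y (l t)\<bar> \<le> c"
      using skorokhod_dist_lessE[OF Bx By dxy] by blast
    have l1: "l 1 = 1" by (rule time_changes01_fix_one[OF l(1)])
    have lim: "l ` {0..1} = {0..1}" using l(1) unfolding time_changes01_def by auto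
    have cd: "c \<le> d" "c \<le> 1" using l(2) by auto
    have near: "\<bar>l t - t\<bar> \<le> d" "\<bar>y (l t) - x t\<bar> \<le> d" "\<bar>y (l t) - x t\<bar> \<le> 1"
      if "t \<in> {0..1}" for t
      using l(3,4) that cd by (force simp: abs_minus_commute)+
    have inbox: "(t, t', x t, x t', x 1) \<in> sample_box (Bx + 1)"
      "(l t, l t', y (l t), y (l t'), y 1) \<in> sample_box (Bx + 1)"
      if "t \<in> {0..1}" "t' \<in> {0..1}" for t t'
    proof -
      have "\<bar>x s\<bar> \<le> Bx + 1" "\<bar>y (l s)\<bar> \<le> Bx + 1" "l s \<in> {0..1}" if "s \<in> {0..1}" for s
        using Bx near(3)[OF that] lim that by (force simp: abs_le_iff)+
      from this[OF that(1)] this[OF that(2)] this[of 1] that l1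
      show "(t, t', x t, x t', x 1) \<in> sample_box (Bx + 1)"
        "(l t, l t', y (l t), y (l t'), y 1) \<in> sample_box (Bx + 1)"
        unfolding sample_box_def by (auto simp: abs_le_iff)
    qed
    have "\<bar>\<Phi> (l u, l v, y (l u), y (l v), y 1) - \<Phi> (u, v, x u, x v, x 1)\<bar> < e/2"
      if uv: "u \<in> {0..1}" "v \<in> {0..1}" for u v
      using near[OF uv(1)] near[OF uv(2)] near[of 1] l1
      by (intro box inbox uv) simp_all
    then have "\<bar>pair_sup \<Phi> x - pair_sup \<Phi> y\<bar> \<le> e/2"
      by (intro pair_sup_time_change[OF lim l1 _ \<Phi> Bx By])
    then show "\<bar>pair_sup \<Phi> x - pair_sup \<Phi> y\<bar> < e" using e by simp
  qed (use d in simp)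
qed

lemma cadlag01_rat_approx:
  assumes x: "x \<in> cadlag01" and u: "u \<in> {0..1}"
  obtains a where "\<And>k. a k \<in> \<rat> \<inter> {0..1}" "a \<longlonglongrightarrow> u" "(\<lambda>k. x (a k)) \<longlonglongrightarrow> x u"
proof (cases "u = 1")
  case True
  then show ?thesis using that[of "\<lambda>_. 1"] by auto
next
  case False
  then have u1: "u < 1" using u by auto
  have "\<exists>r\<in>\<rat>. u < r \<and> r < min (u + 1 / (real k + 1)) 1" for k
    using u1 by (intro Rats_dense_in_real) (auto simp: add_pos_pos)
  then obtain a where a: "\<And>k. a k \<in> \<rat> \<and> u < a k \<and> a k < min (u + 1 / (real k + 1)) 1" by metis
  have lim: "a \<longlonglongrightarrow> u"
  proof (rule tendsto_sandwich[where f="\<lambda>_. u" and h="\<lambda>k. u + 1 / (real k + 1)"])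
    show "\<forall>\<^sub>F k in sequentially. u \<le> a k"
      by (rule always_eventually) (use a in \<open>auto intro: less_imp_le\<close>)
    show "\<forall>\<^sub>F k in sequentially. a k \<le> u + 1 / (real k + 1)"
      by (rule always_eventually) (use a in \<open>auto intro: less_imp_le\<close>)
    have "(\<lambda>k. 1 / (real k + 1)) \<longlonglongrightarrow> 0"
      by (metis (lifting) ext LIMSEQ_inverse_real_of_nat add.commute inverse_eq_divide of_nat_Suc)
    then show "(\<lambda>k. u + 1 / (real k + 1)) \<longlonglongrightarrow> u" using tendsto_add[of "\<lambda>_. u" u sequentially] by fastforce
  qed simp
  have "filterlim a (at_right u) sequentially"
    using lim a by (intro tendsto_imp_filterlim_at_right) auto
  moreover have "(x \<longlongrightarrow> x u) (at_right u)" using x u u1 unfolding cadlag01_def by auto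
  ultimately have "(\<lambda>k. x (a k)) \<longlonglongrightarrow> x u" by (rule filterlim_compose[rotated])
  moreover have "a k \<in> \<rat> \<inter> {0..1}" for k using a[of k] u by auto
  ultimately show ?thesis using that lim by blast
qed

text \<open>By right-continuity the supremum may be taken over rational times, which gives measurability.\<close>

lemma pair_sup_rat:
  assumes \<Phi>: "continuous_on UNIV \<Phi>" and x: "x \<in> cadlag01"
  shows "pair_sup \<Phi> x = (SUP p\<in>(\<rat> \<inter> {0..1}) \<times> (\<rat> \<inter> {0..1}). \<Phi> (fst p, snd p, x (fst p), x (snd p), x 1))"
    (is "_ = ?S")
proof (rule antisym)
  obtain B where B: "\<forall>t\<in>{0..1}. \<bar>x t\<bar> \<le> B" using cadlag01_bounded[OF x] by blast
  have bdd: "bdd_above ((\<lambda>p. \<Phi> (fst p, snd p, x (fst p), x (snd p), x 1)) ` ((\<rat> \<inter> {0..1}) \<times> (\<rat> \<inter> {0..1})))"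
    by (rule bdd_above_mono[OF bdd_above_pair_sup[OF \<Phi> B]]) auto
  show "pair_sup \<Phi> x \<le> ?S"
  proof (rule pair_sup_least)
    fix u v :: real assume uv: "u \<in> {0..1}" "v \<in> {0..1}"
    obtain a where a: "\<And>k. a k \<in> \<rat> \<inter> {0..1}" "a \<longlonglongrightarrow> u" "(\<lambda>k. x (a k)) \<longlonglongrightarrow> x u"
      using cadlag01_rat_approx[OF x uv(1)] by blast
    obtain b where b: "\<And>k. b k \<in> \<rat> \<inter> {0..1}" "b \<longlonglongrightarrow> v" "(\<lambda>k. x (b k)) \<longlonglongrightarrow> x v"
      using cadlag01_rat_approx[OF x uv(2)] by blast
    have "isCont \<Phi> (u, v, x u, x v, x 1)" using \<Phi> by (simp add: continuous_on_eq_continuous_at)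
    then have "(\<lambda>k. \<Phi> (a k, b k, x (a k), x (b k), x 1)) \<longlonglongrightarrow> \<Phi> (u, v, x u, x v, x 1)"
      using a b by (intro isCont_tendsto_compose[of _ \<Phi>] tendsto_Pair tendsto_const) auto
    moreover have "\<Phi> (a k, b k, x (a k), x (b k), x 1) \<le> ?S" for k
      using cSUP_upper[OF _ bdd, of "(a k, b k)"] a(1) b(1) by auto
    ultimately show "\<Phi> (u, v, x u, x v, x 1) \<le> ?S" by (intro LIMSEQ_le_const2) auto
  qed
  show "?S \<le> pair_sup \<Phi> x"
    by (intro cSUP_least pair_sup_upper[OF \<Phi> B]) (auto intro: Rats_1)
qed

lemma borel_measurable_pair_sup:
  assumes \<Phi>: "continuous_on UNIV \<Phi>"
    and cad: "\<And>\<omega>. \<omega> \<in> space M \<Longrightarrow> X \<omega> \<in> cadlag01"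
    and meas: "\<And>t. t \<in> {0..1} \<Longrightarrow> (\<lambda>\<omega>. X \<omega> t) \<in> borel_measurable M"
  shows "(\<lambda>\<omega>. pair_sup \<Phi> (X \<omega>)) \<in> borel_measurable M"
proof (subst measurable_cong[OF pair_sup_rat[OF \<Phi> cad]], assumption, rule borel_measurable_cSUP)
  show "countable ((\<rat> \<inter> {0..1}) \<times> (\<rat> \<inter> {0..1}))"
    by (intro countable_SIGMA countable_Int1 countable_rat)
  have Pm: "\<Phi> \<in> borel_measurable borel" using \<Phi> by (rule borel_measurable_continuous_onI)
  fix p :: "real \<times> real" assume "p \<in> (\<rat> \<inter> {0..1}) \<times> (\<rat> \<inter> {0..1})"
  then show "(\<lambda>\<omega>. \<Phi> (fst p, snd p, X \<omega> (fst p), X \<omega> (snd p), X \<omega> 1)) \<in> borel_measurable M"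
    using meas[of "fst p"] meas[of "snd p"] meas[of 1]
    by (intro measurable_compose[OF _ Pm] borel_measurable_Pair) auto
next
  fix \<omega> assume \<omega>: "\<omega> \<in> space M"
  obtain B where B: "\<forall>t\<in>{0..1}. \<bar>X \<omega> t\<bar> \<le> B" using cadlag01_bounded[OF cad[OF \<omega>]] by blast
  show "bdd_above ((\<lambda>p. \<Phi> (fst p, snd p, X \<omega> (fst p), X \<omega> (snd p), X \<omega> 1)) ` ((\<rat> \<inter> {0..1}) \<times> (\<rat> \<inter> {0..1})))"
    by (rule bdd_above_mono[OF bdd_above_pair_sup[OF \<Phi> B]]) auto
qed

section \<open>A smoothed bridge functional\<close>

definition clamp01 :: "real \<Rightarrow> real" where
  "clamp01 z = max 0 (min 1 z)"

lemma continuous_on_clamp01 [continuous_intros]: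
  "continuous_on A f \<Longrightarrow> continuous_on A (\<lambda>x. clamp01 (f x))"
  unfolding clamp01_def by (intro continuous_intros)

lemma clamp01_bounds: "0 \<le> clamp01 z" "clamp01 z \<le> 1"
  unfolding clamp01_def by auto

lemma clamp01_eq_1: "z \<ge> 1 \<Longrightarrow> clamp01 z = 1"
  and clamp01_eq_0: "z \<le> 0 \<Longrightarrow> clamp01 z = 0"
  unfolding clamp01_def by auto

lemma clamp01_weights_le: "X \<ge> 0 \<Longrightarrow> clamp01 a * clamp01 b * X \<le> X"
  using clamp01_bounds[of a] clamp01_bounds[of b] by (simp add: mult_le_one mult_left_le_one_le)

definition window :: "real \<Rightarrow> real \<Rightarrow> real \<Rightarrow> real \<Rightarrow> real" where
  "window c \<delta> a v = clamp01 (a - \<bar>v - c\<bar> / \<delta>)"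

definition ramp :: "real \<Rightarrow> real \<Rightarrow> real" where
  "ramp \<delta> w = clamp01 (1 - w / \<delta>)"

abbreviation "time1 \<equiv> (\<lambda>p::real\<times>real\<times>real\<times>real\<times>real. fst p)"
abbreviation "time2 \<equiv> (\<lambda>p::real\<times>real\<times>real\<times>real\<times>real. fst (snd p))"
abbreviation "value1 \<equiv> (\<lambda>p::real\<times>real\<times>real\<times>real\<times>real. fst (snd (snd p)))"
abbreviation "value2 \<equiv> (\<lambda>p::real\<times>real\<times>real\<times>real\<times>real. fst (snd (snd (snd p))))"
abbreviation "value_end \<equiv> (\<lambda>p::real\<times>real\<times>real\<times>real\<times>real. snd (snd (snd (snd p))))"

text \<open>At p = (u, s, z u, z s, z 1), a continuous stand-in for \<bar>z u - u / s * z s\<bar> restricted to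
  u \<le> s and s near c: the supremum of the CUSUM bridge with split point s then becomes a functional
  of the form pair_sup, uniformly in s close to c.\<close>

definition bridge_integrand :: "real \<Rightarrow> real \<Rightarrow> real\<times>real\<times>real\<times>real\<times>real \<Rightarrow> real" where
  "bridge_integrand c \<delta> p = window c \<delta> 2 (time2 p) * ramp \<delta> (time1 p - time2 p) *
     \<bar>value1 p - time1 p / max (time2 p) (c/2) * value2 p\<bar>"

definition osc_integrand :: "real \<Rightarrow> real \<Rightarrow> real\<times>real\<times>real\<times>real\<times>real \<Rightarrow> real" where
  "osc_integrand c \<delta> p = window c \<delta> 4 (time1 p) * window c \<delta> 4 (time2 p) * \<bar>value1 p - value2 p\<bar>"

definition abs_integrand :: "real\<times>real\<times>real\<times>real\<times>real \<Rightarrow> real" where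
  "abs_integrand p = \<bar>value1 p\<bar>"

definition reverse_path :: "(real \<Rightarrow> real) \<Rightarrow> real \<Rightarrow> real" where
  "reverse_path x t = x 1 - x (1 - t)"

definition reversed_integrand ::
  "(real\<times>real\<times>real\<times>real\<times>real \<Rightarrow> real) \<Rightarrow> real\<times>real\<times>real\<times>real\<times>real \<Rightarrow> real" where
  "reversed_integrand \<Phi> p = \<Phi> (1 - time1 p, 1 - time2 p, value_end p - value1 p, value_end p - value2 p, 0)"

lemma continuous_bridge_integrand: "c > 0 \<Longrightarrow> \<delta> > 0 \<Longrightarrow> continuous_on UNIV (bridge_integrand c \<delta>)"
  unfolding bridge_integrand_def window_def ramp_def by (intro continuous_intros) auto

lemma continuous_osc_integrand: "\<delta> > 0 \<Longrightarrow> continuous_on UNIV (osc_integrand c \<delta>)"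
  unfolding osc_integrand_def window_def by (intro continuous_intros) auto

lemma continuous_abs_integrand: "continuous_on UNIV abs_integrand"
  unfolding abs_integrand_def by (intro continuous_intros)

lemma continuous_reversed_integrand:
  "continuous_on UNIV \<Phi> \<Longrightarrow> continuous_on UNIV (reversed_integrand \<Phi>)"
  unfolding reversed_integrand_def
  by (rule continuous_on_compose2[of UNIV \<Phi>]) (auto intro!: continuous_intros)

lemma pair_sup_reverse_path:
  assumes "\<And>a b p q r. \<Phi> (a, b, p, q, r) = \<Phi> (a, b, p, q, 0)"
  shows "pair_sup \<Phi> (reverse_path x) = pair_sup (reversed_integrand \<Phi>) x"
proof -
  let ?h = "\<lambda>p::real\<times>real. (1 - fst p, 1 - snd p)"
  have im: "?h ` ({0..1}\<times>{0..1}) = {0..1}\<times>{0..1}"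
  proof
    show "{0..1}\<times>{0..1} \<subseteq> ?h ` ({0..1}\<times>{0..1})"
    proof
      fix p :: "real\<times>real" assume "p \<in> {0..1}\<times>{0..1}"
      then show "p \<in> ?h ` ({0..1}\<times>{0..1})" by (intro image_eqI[of _ _ "?h p"]) auto
    qed
  qed auto
  have "pair_sup (reversed_integrand \<Phi>) x
      = (SUP p\<in>?h ` ({0..1}\<times>{0..1}). reversed_integrand \<Phi> (fst p, snd p, x (fst p), x (snd p), x 1))"
    unfolding pair_sup_def im ..
  also have "\<dots> = pair_sup \<Phi> (reverse_path x)"
    unfolding pair_sup_def reversed_integrand_def reverse_path_def image_image by (subst (2) assms) simp
  finally show ?thesis ..
qed

lemma bridge_integrand_eq:
  assumes "0 < \<delta>" "\<delta> \<le> c/8" "\<bar>s - c\<bar> \<le> \<delta>" "u \<in> {0..s}"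
  shows "bridge_integrand c \<delta> (u, s, z u, z s, z 1) = \<bar>z u - u / s * z s\<bar>"
proof -
  have "window c \<delta> 2 s = 1" unfolding window_def using assms by (intro clamp01_eq_1) (simp add: field_simps)
  moreover have "ramp \<delta> (u - s) = 1" unfolding ramp_def using assms by (intro clamp01_eq_1) (simp add: field_simps)
  moreover have "max s (c/2) = s" using assms by auto
  ultimately show ?thesis unfolding bridge_integrand_def by simp
qed

lemma bridge_term_move_split:
  fixes z :: "real \<Rightarrow> real"
  assumes u: "0 \<le> u" "u \<le> s" and sv: "c/2 \<le> s" "c/2 \<le> v" "\<bar>v - s\<bar> \<le> 3 * \<delta>" and c: "c > 0"
    and z: "\<bar>z s - z v\<bar> \<le> \<eta>" "\<bar>z v\<bar> \<le> B"
  shows "\<bar>z u - u / v * z v\<bar> \<le> \<bar>z u - u / s * z s\<bar> + \<eta> + 8 * \<delta> * B / c"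
proof -
  have sp: "s > 0" and vp: "v > 0" using sv c by auto
  have B: "B \<ge> 0" using z(2) by simp
  have us: "u / s \<le> 1" "0 \<le> u / s" using u sp by auto
  have "u / s * z s - u / v * z v = u / s * (z s - z v) + u / s * ((v - s) / v) * z v"
    using sp vp by (simp add: field_simps)
  also have "\<bar>\<dots>\<bar> \<le> \<bar>u / s * (z s - z v)\<bar> + \<bar>u / s * ((v - s) / v) * z v\<bar>"
    by (rule abs_triangle_ineq)
  also have "\<dots> = u / s * \<bar>z s - z v\<bar> + u / s * (\<bar>v - s\<bar> / v) * \<bar>z v\<bar>"
    using u(1) sp vp by (simp add: abs_mult abs_of_nonneg)
  also have "\<dots> \<le> 1 * \<eta> + 1 * (3 * \<delta> / (c/2)) * B"
    using us z sv vp c by (intro add_mono mult_mono frac_le) auto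
  also have "\<dots> \<le> \<eta> + 8 * \<delta> * B / c"
    using B c sv by (simp add: field_simps)
  finally have "\<bar>u / s * z s - u / v * z v\<bar> \<le> \<eta> + 8 * \<delta> * B / c" .
  moreover have "\<bar>z u - u / v * z v\<bar> \<le> \<bar>z u - u / s * z s\<bar> + \<bar>u / s * z s - u / v * z v\<bar>"
    by (rule order.trans[OF _ abs_triangle_ineq]) simp
  ultimately show ?thesis by (simp add: add.assoc)
qed

lemma bridge_term_near_split:
  fixes z :: "real \<Rightarrow> real"
  assumes v: "c/2 \<le> v" "\<bar>v - u\<bar> \<le> 4 * \<delta>" and c: "c > 0"
    and z: "\<bar>z u - z v\<bar> \<le> \<eta>" "\<bar>z v\<bar> \<le> B"
  shows "\<bar>z u - u / v * z v\<bar> \<le> \<eta> + 8 * \<delta> * B / c"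
proof -
  have vp: "v > 0" using v c by auto
  have "z u - u / v * z v = (z u - z v) + (v - u) / v * z v" using vp by (simp add: field_simps)
  also have "\<bar>\<dots>\<bar> \<le> \<bar>z u - z v\<bar> + \<bar>(v - u) / v * z v\<bar>"
    by (rule abs_triangle_ineq)
  also have "\<dots> = \<bar>z u - z v\<bar> + \<bar>v - u\<bar> / v * \<bar>z v\<bar>"
    using vp by (simp only: abs_mult abs_divide abs_of_pos)
  also have "\<dots> \<le> \<eta> + (4 * \<delta> / (c/2)) * B"
    using z v vp c by (intro add_mono mult_mono frac_le) auto
  also have "\<dots> = \<eta> + 8 * \<delta> * B / c" by simp
  finally show ?thesis .
qed

text \<open>The setting for one half of the statistic: the bridge of z split at s, with s within \<delta> of c.\<close>

locale bridge_window =
  fixes c \<delta> s B \<eta> :: real and z :: "real \<Rightarrow> real"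
  assumes c: "0 < c" and \<delta>: "0 < \<delta>" "\<delta> \<le> c/8"
    and bound: "\<forall>t\<in>{0..1}. \<bar>z t\<bar> \<le> B"
    and osc: "\<And>a b. a \<in> {0..1} \<Longrightarrow> b \<in> {0..1} \<Longrightarrow> \<bar>a - c\<bar> \<le> 3*\<delta> \<Longrightarrow> \<bar>b - c\<bar> \<le> 3*\<delta> \<Longrightarrow>
        \<bar>z a - z b\<bar> \<le> \<eta>"
    and \<eta>: "\<eta> \<ge> 0"
    and s: "s \<in> {0..1}" "\<bar>s - c\<bar> \<le> \<delta>"
begin

lemma B_nonneg: "B \<ge> 0"
  using bound[rule_format, of 0] by simp

lemma s_ge: "s \<ge> c/2" "s > 0"
  using s \<delta> c by auto

lemma bridge_integrand_le:
  assumes u: "u \<in> {0..1}" and v: "v \<in> {0..1}"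
  shows "bridge_integrand c \<delta> (u, v, z u, z v, z 1) \<le> \<bar>z (min u s) - min u s / s * z s\<bar> + \<eta> + 8 * \<delta> * B / c"
proof (cases "\<bar>v - c\<bar> < 2*\<delta> \<and> u - v < \<delta>")
  case False
  then have "window c \<delta> 2 v = 0 \<or> ramp \<delta> (u - v) = 0"
    unfolding window_def ramp_def using \<delta> by (auto intro!: clamp01_eq_0 simp: field_simps)
  then show ?thesis unfolding bridge_integrand_def using \<eta> B_nonneg c \<delta> by auto
next
  case True
  have "max v (c/2) = v" using True \<delta> by auto
  then have "bridge_integrand c \<delta> (u, v, z u, z v, z 1) \<le> \<bar>z u - u / v * z v\<bar>"
    unfolding bridge_integrand_def window_def ramp_def by (simp add: clamp01_weights_le)
  also have "\<dots> \<le> \<bar>z (min u s) - min u s / s * z s\<bar> + \<eta> + 8 * \<delta> * B / c"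
  proof (cases "u \<le> s")
    case True
    have "\<bar>v - s\<bar> \<le> 3 * \<delta>" "\<bar>v - c\<bar> \<le> 3 * \<delta>" "\<bar>s - c\<bar> \<le> 3 * \<delta>" "c/2 \<le> v"
      using \<open>\<bar>v - c\<bar> < 2*\<delta> \<and> _\<close> s(2) \<delta> by auto
    then have "\<bar>z u - u / v * z v\<bar> \<le> \<bar>z u - u / s * z s\<bar> + \<eta> + 8 * \<delta> * B / c"
      using u True s_ge c osc[OF s(1) v] bound v by (intro bridge_term_move_split) auto
    then show ?thesis using True by simp
  next
    case False
    have "\<bar>v - u\<bar> \<le> 4 * \<delta>" "\<bar>u - c\<bar> \<le> 3 * \<delta>" "\<bar>v - c\<bar> \<le> 3 * \<delta>" "c/2 \<le> v"
      using \<open>\<bar>v - c\<bar> < 2*\<delta> \<and> _\<close> False s(2) \<delta> by auto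
    then have "\<bar>z u - u / v * z v\<bar> \<le> \<eta> + 8 * \<delta> * B / c"
      using c osc[OF u v] bound v by (intro bridge_term_near_split) auto
    then show ?thesis using False by simp
  qed
  finally show ?thesis .
qed

lemma bridge_term_le_bound: "u \<in> {0..s} \<Longrightarrow> \<bar>z u - u / s * z s\<bar> \<le> 2 * B"
proof -
  assume u: "u \<in> {0..s}"
  have "\<bar>u / s * z s\<bar> = u / s * \<bar>z s\<bar>" using u s_ge by (simp add: abs_mult)
  then have "\<bar>z u - u / s * z s\<bar> \<le> \<bar>z u\<bar> + u / s * \<bar>z s\<bar>" using abs_triangle_ineq4 by metis
  also have "\<dots> \<le> B + 1 * B" using u s_ge bound s by (intro add_mono mult_mono) auto
  finally show ?thesis by simp
qed

lemma bridge_term_le_pair_sup: "u \<in> {0..s} \<Longrightarrow> \<bar>z u - u / s * z s\<bar> \<le> pair_sup (bridge_integrand c \<delta>) z"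
  using bridge_integrand_eq[OF \<delta> s(2), of u z] pair_sup_upper[OF continuous_bridge_integrand[OF c \<delta>(1)] bound, of u s] s
  by auto

lemma pair_sup_bridge_nonneg: "0 \<le> pair_sup (bridge_integrand c \<delta>) z"
  using bridge_term_le_pair_sup[of 0] s_ge by (auto intro: order.trans[rotated])

lemma grid_max_approx:
  fixes K :: "nat set" and p :: "nat \<Rightarrow> real"
  assumes K: "finite K" and p: "\<And>k. k \<in> K \<Longrightarrow> p k \<in> {0..s}"
    and cover: "\<And>u. u \<in> {0..s} \<Longrightarrow> \<exists>k\<in>K. z (p k) = z u \<and> \<bar>p k - u\<bar> \<le> h"
  shows "Max (insert 0 ((\<lambda>k. \<bar>z (p k) - p k / s * z s\<bar>) ` K)) \<le> pair_sup (bridge_integrand c \<delta>) z"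
    and "pair_sup (bridge_integrand c \<delta>) z
           \<le> Max (insert 0 ((\<lambda>k. \<bar>z (p k) - p k / s * z s\<bar>) ` K)) + \<eta> + 8 * \<delta> * B / c + 2 * h * B / c"
proof -
  let ?M = "Max (insert 0 ((\<lambda>k. \<bar>z (p k) - p k / s * z s\<bar>) ` K))"
  show "?M \<le> pair_sup (bridge_integrand c \<delta>) z"
    using K pair_sup_bridge_nonneg bridge_term_le_pair_sup p by (auto intro!: Max.boundedI)
  show "pair_sup (bridge_integrand c \<delta>) z \<le> ?M + \<eta> + 8 * \<delta> * B / c + 2 * h * B / c"
  proof (rule pair_sup_least)
    fix u v :: real assume u: "u \<in> {0..1}" and v: "v \<in> {0..1}"
    have "min u s \<in> {0..s}" using u s_ge by auto
    then obtain k where k: "k \<in> K" "z (p k) = z (min u s)" "\<bar>p k - min u s\<bar> \<le> h" using cover by blast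
    have "z (min u s) - min u s / s * z s = (z (p k) - p k / s * z s) + (p k - min u s) / s * z s"
      using k(2) s_ge by (simp add: field_simps)
    then have "\<bar>z (min u s) - min u s / s * z s\<bar> \<le> \<bar>z (p k) - p k / s * z s\<bar> + \<bar>(p k - min u s) / s * z s\<bar>"
      by (metis abs_triangle_ineq)
    also have "\<bar>(p k - min u s) / s * z s\<bar> = \<bar>p k - min u s\<bar> / s * \<bar>z s\<bar>"
      using s_ge by (simp add: abs_mult)
    also have "\<bar>p k - min u s\<bar> / s * \<bar>z s\<bar> \<le> h / (c/2) * B"
      using k(3) s_ge bound s c B_nonneg by (intro mult_mono frac_le) auto
    also have "\<bar>z (p k) - p k / s * z s\<bar> \<le> ?M" using K k(1) by (intro Max_ge) auto
    finally show "bridge_integrand c \<delta> (u, v, z u, z v, z 1) \<le> ?M + \<eta> + 8 * \<delta> * B / c + 2 * h * B / c"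
      using bridge_integrand_le[OF u v] by (simp add: field_simps)
  qed
qed

end

definition bridge_sup :: "(real \<Rightarrow> real) \<Rightarrow> real \<Rightarrow> real" where
  "bridge_sup z s = (SUP u\<in>{0..s}. \<bar>z u - u / s * z s\<bar>)"

lemma abs_sqrt_diff_le:
  assumes "c > 0" "s > 0"
  shows "\<bar>sqrt c - sqrt s\<bar> \<le> \<bar>c - s\<bar> / sqrt c"
proof -
  have "(sqrt c - sqrt s) * (sqrt c + sqrt s) = c - s"
    using assms by (simp add: algebra_simps)
  then have "\<bar>sqrt c - sqrt s\<bar> * (sqrt c + sqrt s) = \<bar>c - s\<bar>"
    using assms by (metis abs_mult abs_of_pos add_pos_pos real_sqrt_gt_zero)
  moreover have "\<bar>sqrt c - sqrt s\<bar> * sqrt c \<le> \<bar>sqrt c - sqrt s\<bar> * (sqrt c + sqrt s)"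
    using assms by (intro mult_left_mono) auto
  ultimately show ?thesis using assms by (simp add: field_simps)
qed

lemma sqrt_ge_self:
  assumes "0 \<le> c" "c \<le> 1"
  shows "c \<le> sqrt c"
proof -
  have "c = sqrt c * sqrt c" using assms by simp
  also have "\<dots> \<le> sqrt c * 1" using assms by (intro mult_left_mono) auto
  finally show ?thesis by simp
qed

lemma normalized_diff_le:
  fixes c s \<delta> U H R \<eta> B :: real
  assumes c: "0 < c" "c \<le> 1" and s: "\<bar>s - c\<bar> \<le> \<delta>" and \<delta>: "0 < \<delta>" "\<delta> \<le> c/8"
    and U: "0 \<le> U" "U \<le> 2 * B" and H: "U \<le> H" "H \<le> U + R"
    and R: "0 \<le> R" "R \<le> \<eta> + 10 * \<delta> * B / c" and \<eta>: "\<eta> \<ge> 0" and B: "B \<ge> 0"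
  shows "\<bar>U / sqrt s - H / sqrt c\<bar> \<le> 100 / c^4 * (\<eta> + \<delta> * B)"
proof -
  have sc: "s \<ge> c/2" using s \<delta> by auto
  then have spos: "s > 0" using c by simp
  have "c/2 \<le> sqrt (c/2)" using sqrt_ge_self[of "c/2"] c by auto
  moreover have "sqrt (c/2) \<le> sqrt s" using real_sqrt_le_mono[OF sc] .
  ultimately have sqs: "sqrt s \<ge> c/2" by linarith
  have sqc: "sqrt c \<ge> c" and sqcp: "sqrt c > 0" using sqrt_ge_self c by auto
  have "\<bar>c - s\<bar> / sqrt c \<le> \<delta> / sqrt c" using s sqcp by (intro divide_right_mono) (auto simp: abs_minus_commute)
  then have e1: "\<bar>sqrt c - sqrt s\<bar> \<le> \<delta> / sqrt c" using abs_sqrt_diff_le[OF c(1) spos] by linarith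
  have "\<bar>U / sqrt s - H / sqrt c\<bar> \<le> \<bar>U / sqrt s - U / sqrt c\<bar> + \<bar>U - H\<bar> / sqrt c"
  proof -
    have "U / sqrt s - H / sqrt c = (U / sqrt s - U / sqrt c) + (U - H) / sqrt c"
      by (simp add: diff_divide_distrib)
    then show ?thesis using sqcp by (metis abs_divide abs_of_pos abs_triangle_ineq)
  qed
  also have "\<bar>U / sqrt s - U / sqrt c\<bar> \<le> 4 * B * \<delta> / c^2"
  proof -
    have "U / sqrt s - U / sqrt c = U * (sqrt c - sqrt s) / (sqrt s * sqrt c)"
      using sqcp spos by (simp add: field_simps)
    then have "\<bar>U / sqrt s - U / sqrt c\<bar> = U * \<bar>sqrt c - sqrt s\<bar> / (sqrt s * sqrt c)"
      using sqcp spos U by (simp add: abs_mult abs_div)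
    also have "\<dots> \<le> (2 * B) * (\<delta> / sqrt c) / ((c/2) * sqrt c)"
      using U e1 sqs sqcp c \<delta> B spos by (intro frac_le mult_mono mult_right_mono) auto
    also have "\<dots> = 4 * B * \<delta> / c^2" using c by (simp add: field_simps power2_eq_square)
    finally show ?thesis .
  qed
  also have "\<bar>U - H\<bar> / sqrt c \<le> (\<eta> + 10 * \<delta> * B / c) / c"
    using H R sqc c by (intro frac_le) auto
  also have "4 * B * \<delta> / c^2 + (\<eta> + 10 * \<delta> * B / c) / c = \<eta> / c + 14 / c^2 * (\<delta> * B)"
    using c by (simp add: field_simps power2_eq_square)
  also have "\<dots> \<le> 100 / c^4 * \<eta> + 100 / c^4 * (\<delta> * B)"
  proof (rule add_mono)
    have "c^4 \<le> c" using power_decreasing[of 1 4 c] c by simp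
    then have "1 / c \<le> 100 / c^4" using c by (simp add: field_simps)
    then have "1 / c * \<eta> \<le> 100 / c^4 * \<eta>" using \<eta> by (rule mult_right_mono)
    then show "\<eta> / c \<le> 100 / c^4 * \<eta>" by simp
    have "c^4 \<le> c^2" using c by (simp add: power_decreasing)
    then have "100 / c^2 \<le> 100 / c^4" using c by (intro divide_left_mono) auto
    then have "14 / c^2 \<le> 100 / c^4" using c by (smt (verit) divide_right_mono zero_le_power2)
    then show "14 / c^2 * (\<delta> * B) \<le> 100 / c^4 * (\<delta> * B)" using \<delta> B by (intro mult_right_mono) auto
  qed
  finally show ?thesis by (simp add: distrib_left)
qed

context bridge_window
begin

lemma bdd_above_bridge_terms: "bdd_above ((\<lambda>u. \<bar>z u - u / s * z s\<bar>) ` {0..s})"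
  using bridge_term_le_bound by (intro bdd_aboveI2) auto

lemma bridge_sup_nonneg: "0 \<le> bridge_sup z s"
  using cSUP_upper[OF _ bdd_above_bridge_terms, of 0] s_ge unfolding bridge_sup_def
  by (auto intro: order.trans[rotated])

lemma bridge_sup_le_bound: "bridge_sup z s \<le> 2 * B"
  unfolding bridge_sup_def using s_ge bridge_term_le_bound by (intro cSUP_least) auto

lemma bridge_sup_le_pair_sup: "bridge_sup z s \<le> pair_sup (bridge_integrand c \<delta>) z"
  unfolding bridge_sup_def using s_ge bridge_term_le_pair_sup by (intro cSUP_least) auto

lemma pair_sup_le_bridge_sup: "pair_sup (bridge_integrand c \<delta>) z \<le> bridge_sup z s + \<eta> + 8 * \<delta> * B / c"
proof (rule pair_sup_least)
  fix u v :: real assume u: "u \<in> {0..1}" and v: "v \<in> {0..1}"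
  have "min u s \<in> {0..s}" using u s_ge by auto
  then have "\<bar>z (min u s) - min u s / s * z s\<bar> \<le> bridge_sup z s"
    unfolding bridge_sup_def by (rule cSUP_upper[OF _ bdd_above_bridge_terms])
  then show "bridge_integrand c \<delta> (u, v, z u, z v, z 1) \<le> bridge_sup z s + \<eta> + 8 * \<delta> * B / c"
    using bridge_integrand_le[OF u v] by linarith
qed

lemma bridge_sup_normalized_approx:
  assumes "c \<le> 1"
  shows "\<bar>bridge_sup z s / sqrt s - pair_sup (bridge_integrand c \<delta>) z / sqrt c\<bar> \<le> 100 / c^4 * (\<eta> + \<delta> * B)"
proof (rule normalized_diff_le[where R="\<eta> + 8 * \<delta> * B / c"])
  show "\<eta> + 8 * \<delta> * B / c \<le> \<eta> + 10 * \<delta> * B / c"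
    using B_nonneg \<delta> c by (intro add_left_mono divide_right_mono mult_right_mono) auto
qed (use bridge_sup_nonneg bridge_sup_le_bound bridge_sup_le_pair_sup pair_sup_le_bridge_sup
       B_nonneg \<eta> c \<delta> s assms in \<open>auto simp: add.assoc\<close>)

lemma grid_max_normalized_approx:
  fixes K :: "nat set" and p :: "nat \<Rightarrow> real"
  assumes "c \<le> 1" and K: "finite K" and p: "\<And>k. k \<in> K \<Longrightarrow> p k \<in> {0..s}"
    and cover: "\<And>u. u \<in> {0..s} \<Longrightarrow> \<exists>k\<in>K. z (p k) = z u \<and> \<bar>p k - u\<bar> \<le> h"
    and h: "0 \<le> h" "h \<le> \<delta>"
  shows "\<bar>Max (insert 0 ((\<lambda>k. \<bar>z (p k) - p k / s * z s\<bar>) ` K)) / sqrt s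
           - pair_sup (bridge_integrand c \<delta>) z / sqrt c\<bar> \<le> 100 / c^4 * (\<eta> + \<delta> * B)"
proof (rule normalized_diff_le[where R="\<eta> + 8 * \<delta> * B / c + 2 * h * B / c"])
  let ?M = "Max (insert 0 ((\<lambda>k. \<bar>z (p k) - p k / s * z s\<bar>) ` K))"
  show "0 \<le> ?M" using K by (intro Max_ge) auto
  show "?M \<le> 2 * B" using K bridge_term_le_bound p B_nonneg by (intro Max.boundedI) auto
  show "?M \<le> pair_sup (bridge_integrand c \<delta>) z" by (rule grid_max_approx(1)[OF K p cover])
  show "pair_sup (bridge_integrand c \<delta>) z \<le> ?M + (\<eta> + 8 * \<delta> * B / c + 2 * h * B / c)"
    using grid_max_approx(2)[OF K p cover] by simp
  have "h * B \<le> \<delta> * B" using h B_nonneg by (intro mult_right_mono) auto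
  then have "8 * \<delta> * B + 2 * h * B \<le> 10 * \<delta> * B" by linarith
  then have "(8 * \<delta> * B + 2 * h * B) / c \<le> 10 * \<delta> * B / c" using c by (intro divide_right_mono) auto
  then show "\<eta> + 8 * \<delta> * B / c + 2 * h * B / c \<le> \<eta> + 10 * \<delta> * B / c" by (simp add: add_divide_distrib)
qed (use \<eta> B_nonneg c \<delta> s h assms in auto)

end

definition sup_abs :: "(real \<Rightarrow> real) \<Rightarrow> real" where
  "sup_abs x = pair_sup abs_integrand x"

definition osc_near :: "real \<Rightarrow> real \<Rightarrow> (real \<Rightarrow> real) \<Rightarrow> real" where
  "osc_near \<theta> \<delta> x = pair_sup (osc_integrand \<theta> \<delta>) x"

definition smooth_left :: "real \<Rightarrow> real \<Rightarrow> (real \<Rightarrow> real) \<Rightarrow> real" where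
  "smooth_left \<theta> \<delta> x = pair_sup (bridge_integrand \<theta> \<delta>) x / sqrt \<theta>"

definition smooth_right :: "real \<Rightarrow> real \<Rightarrow> (real \<Rightarrow> real) \<Rightarrow> real" where
  "smooth_right \<theta> \<delta> x = pair_sup (reversed_integrand (bridge_integrand (1-\<theta>) \<delta>)) x / sqrt (1-\<theta>)"

definition approx_error :: "real \<Rightarrow> real \<Rightarrow> (real \<Rightarrow> real) \<Rightarrow> real" where
  "approx_error \<theta> \<delta> x = 200 / (min \<theta> (1-\<theta>))^4 * (osc_near \<theta> \<delta> x + \<delta> * sup_abs x)"

locale split_window =
  fixes \<theta> \<delta> :: real and x :: "real \<Rightarrow> real"
  assumes \<theta>: "0 < \<theta>" "\<theta> < 1" and \<delta>: "0 < \<delta>" "\<delta> \<le> \<theta>/8" "\<delta> \<le> (1-\<theta>)/8"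
    and x: "x \<in> cadlag01"
begin

lemma abs_le_sup_abs: "\<forall>t\<in>{0..1}. \<bar>x t\<bar> \<le> sup_abs x"
proof
  fix t :: real assume t: "t \<in> {0..1}"
  obtain B where B: "\<forall>t\<in>{0..1}. \<bar>x t\<bar> \<le> B" using cadlag01_bounded[OF x] by blast
  show "\<bar>x t\<bar> \<le> sup_abs x" unfolding sup_abs_def
    using pair_sup_upper[OF continuous_abs_integrand B t t] by (simp add: abs_integrand_def)
qed

lemma abs_diff_le_osc_near:
  assumes "a \<in> {0..1}" "b \<in> {0..1}" "\<bar>a - \<theta>\<bar> \<le> 3*\<delta>" "\<bar>b - \<theta>\<bar> \<le> 3*\<delta>"
  shows "\<bar>x a - x b\<bar> \<le> osc_near \<theta> \<delta> x"
proof -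
  obtain B where B: "\<forall>t\<in>{0..1}. \<bar>x t\<bar> \<le> B" using cadlag01_bounded[OF x] by blast
  have "window \<theta> \<delta> 4 a = 1" "window \<theta> \<delta> 4 b = 1"
    unfolding window_def using assms \<delta> by (auto intro!: clamp01_eq_1 simp: field_simps)
  then show ?thesis unfolding osc_near_def
    using pair_sup_upper[OF continuous_osc_integrand[OF \<delta>(1)] B assms(1,2), of \<theta>] by (simp add: osc_integrand_def)
qed

lemma osc_near_nonneg: "osc_near \<theta> \<delta> x \<ge> 0"
  using abs_diff_le_osc_near[of \<theta> \<theta>] \<theta> \<delta> by auto

lemma sup_abs_nonneg: "sup_abs x \<ge> 0"
  using abs_le_sup_abs by (meson abs_ge_zero atLeastAtMost_iff order.trans zero_le_one order_refl)

lemma bridge_window_left: "\<bar>s - \<theta>\<bar> \<le> \<delta> \<Longrightarrow> s \<in> {0..1} \<Longrightarrow> bridge_window \<theta> \<delta> s (sup_abs x) (osc_near \<theta> \<delta> x) x"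
  by unfold_locales (use \<theta> \<delta> abs_le_sup_abs abs_diff_le_osc_near osc_near_nonneg in auto)

lemma bridge_window_right:
  assumes "\<bar>s - (1 - \<theta>)\<bar> \<le> \<delta>" "s \<in> {0..1}"
  shows "bridge_window (1 - \<theta>) \<delta> s (2 * sup_abs x) (osc_near \<theta> \<delta> x) (reverse_path x)"
proof unfold_locales
  fix a b :: real
  assume "a \<in> {0..1}" "b \<in> {0..1}" "\<bar>a - (1 - \<theta>)\<bar> \<le> 3 * \<delta>" "\<bar>b - (1 - \<theta>)\<bar> \<le> 3 * \<delta>"
  then have "\<bar>x (1 - b) - x (1 - a)\<bar> \<le> osc_near \<theta> \<delta> x" by (intro abs_diff_le_osc_near) auto
  then show "\<bar>reverse_path x a - reverse_path x b\<bar> \<le> osc_near \<theta> \<delta> x" unfolding reverse_path_def by simp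
next
  show "\<forall>t\<in>{0..1}. \<bar>reverse_path x t\<bar> \<le> 2 * sup_abs x"
  proof
    fix t :: real assume t: "t \<in> {0..1}"
    have "\<bar>reverse_path x t\<bar> \<le> \<bar>x 1\<bar> + \<bar>x (1 - t)\<bar>" unfolding reverse_path_def by (rule abs_triangle_ineq4)
    also have "\<dots> \<le> sup_abs x + sup_abs x" using abs_le_sup_abs t by (intro add_mono) auto
    finally show "\<bar>reverse_path x t\<bar> \<le> 2 * sup_abs x" by simp
  qed
qed (use assms \<theta> \<delta> osc_near_nonneg in auto)

lemma pair_sup_reverse_bridge:
  "pair_sup (bridge_integrand (1-\<theta>) \<delta>) (reverse_path x) = pair_sup (reversed_integrand (bridge_integrand (1-\<theta>) \<delta>)) x"
  by (rule pair_sup_reverse_path) (simp add: bridge_integrand_def)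

lemma approx_error_ge:
  "100 / \<theta>^4 * (osc_near \<theta> \<delta> x + \<delta> * sup_abs x) \<le> approx_error \<theta> \<delta> x"
  "100 / (1-\<theta>)^4 * (osc_near \<theta> \<delta> x + \<delta> * (2 * sup_abs x)) \<le> approx_error \<theta> \<delta> x"
proof -
  have m: "0 < min \<theta> (1-\<theta>)" "min \<theta> (1-\<theta>) \<le> \<theta>" "min \<theta> (1-\<theta>) \<le> 1 - \<theta>" using \<theta> by auto
  have E: "0 \<le> osc_near \<theta> \<delta> x + \<delta> * sup_abs x" using osc_near_nonneg sup_abs_nonneg \<delta> by simp
  have le: "100 / \<theta>^4 \<le> 200 / (min \<theta> (1-\<theta>))^4" "200 / (1-\<theta>)^4 \<le> 200 / (min \<theta> (1-\<theta>))^4"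
    by (rule frac_le; use m in \<open>auto intro: power_mono\<close>)+
  show "100 / \<theta>^4 * (osc_near \<theta> \<delta> x + \<delta> * sup_abs x) \<le> approx_error \<theta> \<delta> x"
    unfolding approx_error_def using le(1) E by (rule mult_right_mono)
  have "100 / (1-\<theta>)^4 * (osc_near \<theta> \<delta> x + \<delta> * (2 * sup_abs x))
      \<le> 100 / (1-\<theta>)^4 * (2 * (osc_near \<theta> \<delta> x + \<delta> * sup_abs x))"
    using osc_near_nonneg \<theta> by (intro mult_left_mono) auto
  also have "\<dots> = 200 / (1-\<theta>)^4 * (osc_near \<theta> \<delta> x + \<delta> * sup_abs x)" by simp
  also have "\<dots> \<le> approx_error \<theta> \<delta> x"
    unfolding approx_error_def using le(2) E by (rule mult_right_mono)
  finally show "100 / (1-\<theta>)^4 * (osc_near \<theta> \<delta> x + \<delta> * (2 * sup_abs x)) \<le> approx_error \<theta> \<delta> x" .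
qed

lemma approx_error_nonneg: "approx_error \<theta> \<delta> x \<ge> 0"
  unfolding approx_error_def using osc_near_nonneg sup_abs_nonneg \<delta> \<theta> by auto

end

context split_window
begin

lemma smooth_left_approx:
  "\<bar>bridge_sup x \<theta> / sqrt \<theta> - smooth_left \<theta> \<delta> x\<bar> \<le> approx_error \<theta> \<delta> x"
proof -
  interpret bridge_window \<theta> \<delta> \<theta> "sup_abs x" "osc_near \<theta> \<delta> x" x
    using bridge_window_left[of \<theta>] \<theta> \<delta> by auto
  have "\<bar>bridge_sup x \<theta> / sqrt \<theta> - smooth_left \<theta> \<delta> x\<bar> \<le> 100 / \<theta>^4 * (osc_near \<theta> \<delta> x + \<delta> * sup_abs x)"
    unfolding smooth_left_def by (rule bridge_sup_normalized_approx) (use \<theta> in auto)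
  then show ?thesis using approx_error_ge(1) by linarith
qed

lemma smooth_right_approx:
  "\<bar>bridge_sup (reverse_path x) (1-\<theta>) / sqrt (1-\<theta>) - smooth_right \<theta> \<delta> x\<bar> \<le> approx_error \<theta> \<delta> x"
proof -
  interpret bridge_window "1-\<theta>" \<delta> "1-\<theta>" "2 * sup_abs x" "osc_near \<theta> \<delta> x" "reverse_path x"
    using bridge_window_right[of "1-\<theta>"] \<theta> \<delta> by auto
  have "\<bar>bridge_sup (reverse_path x) (1-\<theta>) / sqrt (1-\<theta>) - smooth_right \<theta> \<delta> x\<bar>
     \<le> 100 / (1-\<theta>)^4 * (osc_near \<theta> \<delta> x + \<delta> * (2 * sup_abs x))"
    unfolding smooth_right_def pair_sup_reverse_bridge[symmetric]
    by (rule bridge_sup_normalized_approx) (use \<theta> in auto)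
  then show ?thesis using approx_error_ge(2) by linarith
qed

end

section \<open>The CUSUM statistics as functionals of the partial-sum process\<close>

definition partial_sum_path :: "nat \<Rightarrow> (nat \<Rightarrow> real) \<Rightarrow> real \<Rightarrow> real" where
  "partial_sum_path n y t = (\<Sum>j\<in>{1..nat \<lfloor>real n * t\<rfloor>}. y j) / sqrt (real n)"

lemma partial_sum_path_grid:
  "n > 0 \<Longrightarrow> partial_sum_path n y (real k / real n) = (\<Sum>j=1..k. y j) / sqrt (real n)"
  unfolding partial_sum_path_def by simp

lemma partial_sum_path_floor:
  "n > 0 \<Longrightarrow> u \<ge> 0 \<Longrightarrow> partial_sum_path n y u = partial_sum_path n y (real (nat \<lfloor>real n * u\<rfloor>) / real n)"
  unfolding partial_sum_path_def by simp

lemma real_nat_floor_bounds: "t \<ge> 0 \<Longrightarrow> real (nat \<lfloor>t\<rfloor>) \<le> t \<and> t < real (nat \<lfloor>t\<rfloor>) + 1"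
  by linarith

lemma partial_sum_path_cadlag01: "partial_sum_path n y \<in> cadlag01"
  unfolding partial_sum_path_def by (rule floor_step_cadlag01) simp

definition cusum_left :: "(nat \<Rightarrow> real) \<Rightarrow> nat \<Rightarrow> real" where
  "cusum_left y kh = Max (insert 0 ((\<lambda>k. \<bar>(\<Sum>i=1..k. y i) - real k / real kh * (\<Sum>i=1..kh. y i)\<bar>) ` {1..kh}))
                   / sqrt (real kh)"

definition cusum_right :: "nat \<Rightarrow> (nat \<Rightarrow> real) \<Rightarrow> nat \<Rightarrow> real" where
  "cusum_right n y kh = Max (insert 0 ((\<lambda>k. \<bar>(\<Sum>i\<in>{kh<..k}. y i)
                          - real (k - kh) / real (n - kh) * (\<Sum>i\<in>{kh<..n}. y i)\<bar>) ` {kh<..n}))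
                   / sqrt (real (n - kh))"

lemma Max_insert_0_mult:
  fixes g :: "nat \<Rightarrow> real"
  assumes "finite K" "a \<ge> 0"
  shows "Max (insert 0 ((\<lambda>k. a * g k) ` K)) = a * Max (insert 0 (g ` K))"
proof -
  have "mono (\<lambda>t. a * t)" using assms(2) by (intro monoI mult_left_mono) auto
  then have "a * Max (insert 0 (g ` K)) = Max ((\<lambda>t. a * t) ` insert 0 (g ` K))"
    using assms(1) by (intro mono_Max_commute) auto
  then show ?thesis by (simp add: image_image)
qed

lemma abs_diff_div_common: "\<bar>a / c - b * (d / c)\<bar> = \<bar>a - b * d\<bar> / \<bar>c\<bar>" for a b c d :: real
  by (metis abs_divide diff_divide_distrib times_divide_eq_right)

lemma sum_greaterThanAtMost_eq_diff:
  fixes y :: "nat \<Rightarrow> real"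
  assumes "kh \<le> k"
  shows "(\<Sum>i\<in>{kh<..k}. y i) = (\<Sum>i=1..k. y i) - (\<Sum>i=1..kh. y i)"
proof -
  have "{1..k} = {1..kh} \<union> {kh<..k}" using assms by auto
  then have "(\<Sum>i=1..k. y i) = (\<Sum>i=1..kh. y i) + (\<Sum>i\<in>{kh<..k}. y i)"
    by (simp add: sum.union_disjoint ivl_disj_int)
  then show ?thesis by simp
qed

lemma cusum_left_eq_grid_max:
  fixes y :: "nat \<Rightarrow> real" and n kh :: nat
  assumes kh: "1 \<le> kh" "kh \<le> n"
  defines "x \<equiv> partial_sum_path n y" and "s \<equiv> real kh / real n"
  shows "cusum_left y kh = Max (insert 0 ((\<lambda>k. \<bar>x (real k / real n) - real k / real n / s * x s\<bar>) ` {0..kh})) / sqrt s"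
proof -
  define S where "S k = (\<Sum>i=1..k. y i)" for k
  define g where "g k = \<bar>x (real k / real n) - real k / real n / s * x s\<bar>" for k
  have n: "n > 0" using kh by simp
  have xk: "x (real k / real n) = S k / sqrt (real n)" for k
    unfolding x_def S_def using partial_sum_path_grid[OF n] .
  have "\<bar>S k - real k / real kh * S kh\<bar> = sqrt (real n) * g k" for k
  proof -
    have eq: "real k / real n / s = real k / real kh" unfolding s_def using n by simp
    have xs: "x s = S kh / sqrt (real n)" using xk[of kh] unfolding s_def .
    have "g k = \<bar>S k / sqrt (real n) - real k / real kh * (S kh / sqrt (real n))\<bar>"
      unfolding g_def xk xs eq ..
    also have "\<dots> = \<bar>S k - real k / real kh * S kh\<bar> / sqrt (real n)"
      unfolding abs_diff_div_common by simp
    finally show ?thesis using n by simp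
  qed
  then have "cusum_left y kh = Max (insert 0 ((\<lambda>k. sqrt (real n) * g k) ` {1..kh})) / sqrt (real kh)"
    unfolding cusum_left_def S_def[symmetric] by simp
  also have "\<dots> = sqrt (real n) * Max (insert 0 (g ` {1..kh})) / sqrt (real kh)"
    by (subst Max_insert_0_mult) auto
  also have "insert 0 (g ` {1..kh}) = insert 0 (g ` {0..kh})"
  proof -
    have "g 0 = 0" unfolding g_def x_def partial_sum_path_def by simp
    moreover have "{0..kh} = insert 0 {1..kh}" by auto
    ultimately show ?thesis by (simp add: insert_commute)
  qed
  also have "sqrt (real n) * Max (insert 0 (g ` {0..kh})) / sqrt (real kh) = Max (insert 0 (g ` {0..kh})) / sqrt s"
    unfolding s_def using n kh by (simp add: real_sqrt_divide field_simps)
  finally show ?thesis unfolding g_def .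
qed

lemma cusum_right_eq_grid_max:
  fixes y :: "nat \<Rightarrow> real" and n kh :: nat
  assumes kh: "kh < n"
  defines "z \<equiv> reverse_path (partial_sum_path n y)" and "s \<equiv> 1 - real kh / real n"
  shows "cusum_right n y kh
           = Max (insert 0 ((\<lambda>k. \<bar>z (1 - real k / real n) - (1 - real k / real n) / s * z s\<bar>) ` {kh..n})) / sqrt s"
proof -
  define S where "S k = (\<Sum>i=1..k. y i)" for k
  define g where "g k = \<bar>z (1 - real k / real n) - (1 - real k / real n) / s * z s\<bar>" for k
  have n: "n > 0" using kh by simp
  have spos: "s > 0" and sform: "s = real (n - kh) / real n"
    unfolding s_def using kh n by (simp_all add: field_simps of_nat_diff)
  have zk: "z (1 - real k / real n) = (S n - S k) / sqrt (real n)" for k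
    using partial_sum_path_grid[OF n, of y k] partial_sum_path_grid[OF n, of y n] n
    unfolding z_def reverse_path_def S_def by (simp add: diff_divide_distrib)
  have "\<bar>(\<Sum>i\<in>{kh<..k}. y i) - real (k - kh) / real (n - kh) * (\<Sum>i\<in>{kh<..n}. y i)\<bar> = sqrt (real n) * g k"
    if k: "k \<in> {kh<..n}" for k
  proof -
    have eq: "(1 - real k / real n) / s = real (n - k) / real (n - kh)"
      unfolding sform using n k kh by (simp add: field_simps of_nat_diff)
    have zs: "z s = (S n - S kh) / sqrt (real n)" using zk[of kh] unfolding s_def .
    have "g k = \<bar>(S n - S k) / sqrt (real n) - real (n - k) / real (n - kh) * ((S n - S kh) / sqrt (real n))\<bar>"
      unfolding g_def zk zs eq ..
    also have "\<dots> = \<bar>(S n - S k) - real (n - k) / real (n - kh) * (S n - S kh)\<bar> / sqrt (real n)"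
      unfolding abs_diff_div_common by simp
    also have "\<bar>(S n - S k) - real (n - k) / real (n - kh) * (S n - S kh)\<bar>
        = \<bar>(S k - S kh) - real (k - kh) / real (n - kh) * (S n - S kh)\<bar>"
    proof -
      have "(S n - S k) - real (n - k) / real (n - kh) * (S n - S kh)
          = - ((S k - S kh) - real (k - kh) / real (n - kh) * (S n - S kh))"
        using k kh by (simp add: field_simps of_nat_diff)
      then show ?thesis by (metis abs_minus_cancel)
    qed
    finally show ?thesis using k n unfolding S_def by (simp add: sum_greaterThanAtMost_eq_diff)
  qed
  then have "(\<lambda>k. \<bar>(\<Sum>i\<in>{kh<..k}. y i) - real (k - kh) / real (n - kh) * (\<Sum>i\<in>{kh<..n}. y i)\<bar>) ` {kh<..n}
      = (\<lambda>k. sqrt (real n) * g k) ` {kh<..n}"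
    by (rule image_cong[OF refl])
  then have "cusum_right n y kh = Max (insert 0 ((\<lambda>k. sqrt (real n) * g k) ` {kh<..n})) / sqrt (real (n - kh))"
    unfolding cusum_right_def by simp
  also have "\<dots> = sqrt (real n) * Max (insert 0 (g ` {kh<..n})) / sqrt (real (n - kh))"
    by (subst Max_insert_0_mult) auto
  also have "insert 0 (g ` {kh<..n}) = insert 0 (g ` {kh..n})"
  proof -
    have "g kh = 0" unfolding g_def s_def[symmetric] using spos by simp
    moreover have "{kh..n} = insert kh {kh<..n}" using kh by auto
    ultimately show ?thesis by (simp add: insert_commute)
  qed
  also have "sqrt (real n) * Max (insert 0 (g ` {kh..n})) / sqrt (real (n - kh)) = Max (insert 0 (g ` {kh..n})) / sqrt s"
    unfolding sform using n kh by (simp add: real_sqrt_divide field_simps)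
  finally show ?thesis unfolding g_def .
qed

lemma cusum_left_approx:
  assumes w: "split_window \<theta> \<delta> (partial_sum_path n y)"
    and kh: "1 \<le> kh" "kh \<le> n" and s: "\<bar>real kh / real n - \<theta>\<bar> \<le> \<delta>" and n: "1 / real n \<le> \<delta>"
  shows "\<bar>cusum_left y kh - smooth_left \<theta> \<delta> (partial_sum_path n y)\<bar> \<le> approx_error \<theta> \<delta> (partial_sum_path n y)"
proof -
  define x where "x = partial_sum_path n y"
  define s where "s = real kh / real n"
  interpret split_window \<theta> \<delta> x using w unfolding x_def .
  have n0: "n > 0" using kh by simp
  have s01: "s \<in> {0..1}" using kh unfolding s_def by auto
  interpret bridge_window \<theta> \<delta> s "sup_abs x" "osc_near \<theta> \<delta> x" x
    using bridge_window_left[OF _ s01] s unfolding s_def by auto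
  have "\<bar>Max (insert 0 ((\<lambda>k. \<bar>x (real k / real n) - real k / real n / s * x s\<bar>) ` {0..kh})) / sqrt s
          - pair_sup (bridge_integrand \<theta> \<delta>) x / sqrt \<theta>\<bar> \<le> 100 / \<theta>^4 * (osc_near \<theta> \<delta> x + \<delta> * sup_abs x)"
  proof (rule grid_max_normalized_approx[where h="1 / real n"])
    show "real k / real n \<in> {0..s}" if "k \<in> {0..kh}" for k
      using that n0 unfolding s_def by (auto intro: divide_right_mono)
    fix u assume u: "u \<in> {0..s}"
    let ?k = "nat \<lfloor>real n * u\<rfloor>"
    have b: "real ?k \<le> real n * u" "real n * u < real ?k + 1"
      using real_nat_floor_bounds[of "real n * u"] u by auto
    moreover have "real n * u \<le> real kh" using u n0 unfolding s_def by (simp add: field_simps)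
    ultimately have "?k \<le> kh" by linarith
    moreover have "x (real ?k / real n) = x u" unfolding x_def using partial_sum_path_floor[OF n0, of u] u by simp
    moreover have "\<bar>real ?k / real n - u\<bar> \<le> 1 / real n"
    proof -
      have "real ?k / real n \<le> u" "u < real ?k / real n + 1 / real n" using b n0 by (simp_all add: field_simps)
      then show ?thesis by simp
    qed
    ultimately show "\<exists>k\<in>{0..kh}. x (real k / real n) = x u \<and> \<bar>real k / real n - u\<bar> \<le> 1 / real n" by auto
  qed (use \<theta> n in auto)
  then show ?thesis
    using approx_error_ge(1) cusum_left_eq_grid_max[OF kh, of y] unfolding smooth_left_def x_def s_def
    by linarith
qed

lemma cusum_right_approx:
  assumes w: "split_window \<theta> \<delta> (partial_sum_path n y)"
    and kh: "1 \<le> kh" "kh \<le> n" and s: "\<bar>real kh / real n - \<theta>\<bar> \<le> \<delta>" and n: "1 / real n \<le> \<delta>"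
  shows "\<bar>cusum_right n y kh - smooth_right \<theta> \<delta> (partial_sum_path n y)\<bar> \<le> approx_error \<theta> \<delta> (partial_sum_path n y)"
proof -
  define x where "x = partial_sum_path n y"
  define z where "z = reverse_path x"
  define s where "s = 1 - real kh / real n"
  interpret split_window \<theta> \<delta> x using w unfolding x_def .
  have n0: "n > 0" using kh by simp
  have "real kh / real n < 1" using s \<theta> \<delta> by auto
  then have khn: "kh < n" using n0 by (simp add: field_simps)
  have s01: "s \<in> {0..1}" using kh khn unfolding s_def by (auto simp: field_simps)
  have s1: "\<bar>s - (1 - \<theta>)\<bar> \<le> \<delta>" using s unfolding s_def by (simp add: abs_minus_commute)
  interpret bridge_window "1-\<theta>" \<delta> s "2 * sup_abs x" "osc_near \<theta> \<delta> x" z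
    using bridge_window_right[OF s1 s01] unfolding z_def .
  have rev: "pair_sup (bridge_integrand (1-\<theta>) \<delta>) z = pair_sup (reversed_integrand (bridge_integrand (1-\<theta>) \<delta>)) x"
    unfolding z_def by (rule pair_sup_reverse_bridge)
  have "\<bar>Max (insert 0 ((\<lambda>k. \<bar>z (1 - real k / real n) - (1 - real k / real n) / s * z s\<bar>) ` {kh..n})) / sqrt s
          - pair_sup (bridge_integrand (1-\<theta>) \<delta>) z / sqrt (1-\<theta>)\<bar>
        \<le> 100 / (1-\<theta>)^4 * (osc_near \<theta> \<delta> x + \<delta> * (2 * sup_abs x))"
  proof (rule grid_max_normalized_approx[where h="1 / real n"])
    show "1 - real k / real n \<in> {0..s}" if "k \<in> {kh..n}" for k
      using that n0 unfolding s_def by (auto simp: field_simps)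
    fix u assume u: "u \<in> {0..s}"
    let ?k = "nat \<lfloor>real n * (1 - u)\<rfloor>"
    have u1: "1 - u \<ge> 0" using u s01 by auto
    have b: "real ?k \<le> real n * (1 - u)" "real n * (1 - u) < real ?k + 1"
      using real_nat_floor_bounds[of "real n * (1 - u)"] u1 by auto
    moreover have "real kh \<le> real n * (1 - u)" "real n * (1 - u) \<le> real n"
      using u n0 unfolding s_def by (simp_all add: field_simps)
    ultimately have "kh \<le> ?k" "?k \<le> n" by linarith+
    moreover have "z (1 - real ?k / real n) = z u"
      unfolding z_def reverse_path_def x_def using partial_sum_path_floor[OF n0 u1] by simp
    moreover have "\<bar>(1 - real ?k / real n) - u\<bar> \<le> 1 / real n"
    proof -
      have "real ?k / real n \<le> 1 - u" "1 - u < real ?k / real n + 1 / real n" using b n0 by (simp_all add: field_simps)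
      then show ?thesis by simp
    qed
    ultimately show "\<exists>k\<in>{kh..n}. z (1 - real k / real n) = z u \<and> \<bar>(1 - real k / real n) - u\<bar> \<le> 1 / real n"
      by auto
  qed (use \<theta> n in auto)
  from this[unfolded rev] show ?thesis
    using approx_error_ge(2) cusum_right_eq_grid_max[OF khn, of y]
    unfolding smooth_right_def z_def s_def x_def by linarith
qed

section \<open>Convergence in distribution by approximation\<close>

lemma abs_integral_diff_le_off_set:
  fixes g h :: "'a \<Rightarrow> real"
  assumes M: "prob_space M" and g: "g \<in> borel_measurable M" and h: "h \<in> borel_measurable M"
    and gB: "\<forall>\<omega>\<in>space M. \<bar>g \<omega>\<bar> \<le> B" and hB: "\<forall>\<omega>\<in>space M. \<bar>h \<omega>\<bar> \<le> B"
    and S: "S \<in> sets M" and close: "\<forall>\<omega>\<in>space M - S. \<bar>g \<omega> - h \<omega>\<bar> \<le> e" and e: "e \<ge> 0"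
  shows "\<bar>(\<integral>\<omega>. g \<omega> \<partial>M) - (\<integral>\<omega>. h \<omega> \<partial>M)\<bar> \<le> e + 2 * B * measure M S"
proof -
  interpret prob_space M by (rule M)
  have ig: "integrable M g" using gB g by (intro integrable_const_bound[where B=B]) auto
  have ih: "integrable M h" using hB h by (intro integrable_const_bound[where B=B]) auto
  have iS: "integrable M (indicator S :: 'a \<Rightarrow> real)"
    by (rule integrable_real_indicator[OF S]) (simp add: less_top[symmetric])
  have "\<bar>(\<integral>\<omega>. g \<omega> \<partial>M) - (\<integral>\<omega>. h \<omega> \<partial>M)\<bar> \<le> (\<integral>\<omega>. \<bar>g \<omega> - h \<omega>\<bar> \<partial>M)"
    using ig ih by (simp add: integral_abs_bound flip: Bochner_Integration.integral_diff)
  also have "\<dots> \<le> (\<integral>\<omega>. e + 2 * B * indicator S \<omega> \<partial>M)"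
  proof (rule integral_mono)
    fix \<omega> assume \<omega>: "\<omega> \<in> space M"
    show "\<bar>g \<omega> - h \<omega>\<bar> \<le> e + 2 * B * indicator S \<omega>"
    proof (cases "\<omega> \<in> S")
      case True
      have "\<bar>g \<omega> - h \<omega>\<bar> \<le> \<bar>g \<omega>\<bar> + \<bar>h \<omega>\<bar>" by (rule abs_triangle_ineq4)
      then show ?thesis using True e gB hB \<omega> by fastforce
    qed (use close \<omega> in auto)
  qed (use ig ih iS in auto)
  also have "\<dots> = e + 2 * B * measure M S"
    using iS S by (simp add: prob_space)
  finally show ?thesis .
qed

lemma measure_le_integral:
  fixes g :: "'a \<Rightarrow> real"
  assumes M: "prob_space M" and g: "g \<in> borel_measurable M" and S: "S \<in> sets M"
    and g01: "\<forall>\<omega>\<in>space M. 0 \<le> g \<omega> \<and> g \<omega> \<le> 1" and gS: "\<forall>\<omega>\<in>S. g \<omega> \<ge> 1"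
  shows "measure M S \<le> (\<integral>\<omega>. g \<omega> \<partial>M)"
proof -
  interpret prob_space M by (rule M)
  have ig: "integrable M g" using g01 g by (intro integrable_const_bound[where B=1]) auto
  have iS: "integrable M (indicator S :: 'a \<Rightarrow> real)"
    by (rule integrable_real_indicator[OF S]) (simp add: less_top[symmetric])
  have "(\<integral>\<omega>. indicator S \<omega> \<partial>M) \<le> (\<integral>\<omega>. g \<omega> \<partial>M)"
    using g01 gS by (intro integral_mono[OF iS ig]) (auto simp: indicator_def)
  then show ?thesis using S by simp
qed

lemma integral_le_measure:
  fixes g :: "'a \<Rightarrow> real"
  assumes M: "prob_space M" and g: "g \<in> borel_measurable M" and S: "S \<in> sets M"
    and g01: "\<forall>\<omega>\<in>space M. 0 \<le> g \<omega> \<and> g \<omega> \<le> 1" and gS: "\<forall>\<omega>\<in>space M - S. g \<omega> = 0"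
  shows "(\<integral>\<omega>. g \<omega> \<partial>M) \<le> measure M S"
proof -
  interpret prob_space M by (rule M)
  have ig: "integrable M g" using g01 g by (intro integrable_const_bound[where B=1]) auto
  have iS: "integrable M (indicator S :: 'a \<Rightarrow> real)"
    by (rule integrable_real_indicator[OF S]) (simp add: less_top[symmetric])
  have "(\<integral>\<omega>. g \<omega> \<partial>M) \<le> (\<integral>\<omega>. indicator S \<omega> \<partial>M)"
    using g01 gS by (intro integral_mono[OF ig iS]) (auto simp: indicator_def)
  then show ?thesis using S by simp
qed

lemma exists_measure_norm_ge_le:
  fixes V :: "'b \<Rightarrow> 'c::real_normed_vector"
  assumes N: "prob_space N" and V: "V \<in> borel_measurable N" and e: "e > 0"
  shows "\<exists>R>0. measure N {\<omega>\<in>space N. norm (V \<omega>) \<ge> R} \<le> e"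
proof -
  interpret prob_space N by (rule N)
  let ?A = "\<lambda>i::nat. {\<omega>\<in>space N. norm (V \<omega>) \<ge> real i}"
  have "(\<lambda>i. measure N (?A i)) \<longlonglongrightarrow> measure N (\<Inter> (range ?A))"
    using V by (intro finite_Lim_measure_decseq) (auto simp: monotone_on_def)
  moreover have "\<Inter> (range ?A) = {}"
  proof safe
    fix \<omega> assume "\<omega> \<in> \<Inter> (range ?A)"
    then have "norm (V \<omega>) \<ge> real (nat \<lceil>norm (V \<omega>)\<rceil> + 1)" by blast
    then show "\<omega> \<in> {}" by linarith
  qed
  ultimately have "eventually (\<lambda>i. measure N (?A i) < e) sequentially"
    using e by (intro order_tendstoD) auto
  then obtain i where "\<forall>j\<ge>i. measure N (?A j) < e" unfolding eventually_sequentially by blast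
  then have "measure N (?A (Suc i)) < e" by (meson le_Suc_eq order_refl)
  then show ?thesis by (intro exI[of _ "real (Suc i)"]) auto
qed

text \<open>Tightness passes from the limit to the sequence, through a continuous cut-off of the norm.\<close>

lemma eventually_measure_norm_ge_less:
  fixes An :: "nat \<Rightarrow> 'a \<Rightarrow> 'c::real_normed_vector" and A :: "'b \<Rightarrow> 'c"
  assumes M: "prob_space M" and N: "prob_space N"
    and An[measurable]: "\<And>n. An n \<in> borel_measurable M" and A[measurable]: "A \<in> borel_measurable N"
    and conv: "\<And>g::'c \<Rightarrow> real. continuous_on UNIV g \<Longrightarrow> bounded (range g) \<Longrightarrow>
          (\<lambda>n. \<integral>\<omega>. g (An n \<omega>) \<partial>M) \<longlonglongrightarrow> (\<integral>\<omega>. g (A \<omega>) \<partial>N)"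
    and R: "R < R'" and small: "measure N {\<omega>\<in>space N. R < norm (A \<omega>)} < e"
  shows "eventually (\<lambda>n. measure M {\<omega>\<in>space M. R' \<le> norm (An n \<omega>)} < e) sequentially"
proof -
  define \<psi> where "\<psi> p = clamp01 ((norm p - R) / (R' - R))" for p :: 'c
  have \<psi>c: "continuous_on UNIV \<psi>" unfolding \<psi>_def using R by (intro continuous_intros) auto
  have \<psi>m[measurable]: "\<psi> \<in> borel_measurable borel" using \<psi>c by (rule borel_measurable_continuous_onI)
  have \<psi>01: "0 \<le> \<psi> p \<and> \<psi> p \<le> 1" for p unfolding \<psi>_def using clamp01_bounds by auto
  have \<psi>0: "\<psi> p = 0" if "norm p \<le> R" for p
    unfolding \<psi>_def using that R by (intro clamp01_eq_0) (simp add: divide_nonpos_pos)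
  have \<psi>1: "\<psi> p = 1" if "R' \<le> norm p" for p
    unfolding \<psi>_def using that R by (intro clamp01_eq_1) simp
  have "(\<integral>\<omega>. \<psi> (A \<omega>) \<partial>N) \<le> measure N {\<omega>\<in>space N. R < norm (A \<omega>)}"
  proof (rule integral_le_measure[OF N])
    show "(\<lambda>\<omega>. \<psi> (A \<omega>)) \<in> borel_measurable N" "{\<omega>\<in>space N. R < norm (A \<omega>)} \<in> sets N" by measurable
  qed (use \<psi>01 \<psi>0 in \<open>auto simp: not_less\<close>)
  moreover have "bounded (range \<psi>)" unfolding bounded_iff using \<psi>01 by (intro exI[of _ 1]) auto
  ultimately have ev: "eventually (\<lambda>n. (\<integral>\<omega>. \<psi> (An n \<omega>) \<partial>M) < e) sequentially"
    using small by (intro order_tendstoD(2)[OF conv[OF \<psi>c]]) auto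
  have le: "measure M {\<omega>\<in>space M. R' \<le> norm (An n \<omega>)} \<le> (\<integral>\<omega>. \<psi> (An n \<omega>) \<partial>M)" for n
  proof (rule measure_le_integral[OF M])
    show "(\<lambda>\<omega>. \<psi> (An n \<omega>)) \<in> borel_measurable M" "{\<omega>\<in>space M. R' \<le> norm (An n \<omega>)} \<in> sets M"
      by measurable
  qed (use \<psi>01 \<psi>1 in auto)
  show ?thesis by (rule eventually_mono[OF ev]) (rule le_less_trans[OF le])
qed

lemma abs_integral_diff_le_close:
  fixes X Y :: "'a \<Rightarrow> real \<times> real" and f :: "real \<times> real \<Rightarrow> real"
  assumes M: "prob_space M" and X[measurable]: "X \<in> borel_measurable M" and Y[measurable]: "Y \<in> borel_measurable M"
    and f[measurable]: "f \<in> borel_measurable borel" and B: "\<And>p. \<bar>f p\<bar> \<le> B"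
    and close: "\<And>p q. norm p < R \<Longrightarrow> dist p q \<le> \<epsilon> \<Longrightarrow> \<bar>f p - f q\<bar> \<le> \<epsilon>0" and \<epsilon>0: "\<epsilon>0 \<ge> 0"
  shows "\<bar>(\<integral>\<omega>. f (X \<omega>) \<partial>M) - (\<integral>\<omega>. f (Y \<omega>) \<partial>M)\<bar>
           \<le> \<epsilon>0 + 2 * B * (measure M {\<omega>\<in>space M. R \<le> norm (X \<omega>)} + measure M {\<omega>\<in>space M. \<epsilon> < dist (X \<omega>) (Y \<omega>)})"
proof -
  define S where "S = {\<omega>\<in>space M. R \<le> norm (X \<omega>)} \<union> {\<omega>\<in>space M. \<epsilon> < dist (X \<omega>) (Y \<omega>)}"
  have S[measurable]: "S \<in> sets M" unfolding S_def by measurable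
  have "\<forall>\<omega>\<in>space M - S. \<bar>f (X \<omega>) - f (Y \<omega>)\<bar> \<le> \<epsilon>0"
  proof
    fix \<omega> assume "\<omega> \<in> space M - S"
    then have "norm (X \<omega>) < R" "dist (X \<omega>) (Y \<omega>) \<le> \<epsilon>" unfolding S_def by auto
    then show "\<bar>f (X \<omega>) - f (Y \<omega>)\<bar> \<le> \<epsilon>0" by (rule close)
  qed
  then have "\<bar>(\<integral>\<omega>. f (X \<omega>) \<partial>M) - (\<integral>\<omega>. f (Y \<omega>) \<partial>M)\<bar> \<le> \<epsilon>0 + 2 * B * measure M S"
    using B \<epsilon>0 by (intro abs_integral_diff_le_off_set[OF M _ _ _ _ S]) auto
  also have "measure M S \<le> measure M {\<omega>\<in>space M. R \<le> norm (X \<omega>)} + measure M {\<omega>\<in>space M. \<epsilon> < dist (X \<omega>) (Y \<omega>)}"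
    unfolding S_def by (intro measure_Un_le) measurable
  finally show ?thesis using B[of 0] by (smt (verit, best) mult_left_mono)
qed

lemma measure_norm_gt_le_close:
  fixes V A :: "'a \<Rightarrow> real \<times> real"
  assumes M: "prob_space M" and V[measurable]: "V \<in> borel_measurable M" and A[measurable]: "A \<in> borel_measurable M"
    and \<epsilon>: "\<epsilon> \<le> 1"
  shows "measure M {\<omega>\<in>space M. R + 1 < norm (A \<omega>)}
           \<le> measure M {\<omega>\<in>space M. R \<le> norm (V \<omega>)} + measure M {\<omega>\<in>space M. \<epsilon> < dist (V \<omega>) (A \<omega>)}"
proof -
  interpret prob_space M by (rule M)
  have "{\<omega>\<in>space M. R + 1 < norm (A \<omega>)} \<subseteq> {\<omega>\<in>space M. R \<le> norm (V \<omega>)} \<union> {\<omega>\<in>space M. \<epsilon> < dist (V \<omega>) (A \<omega>)}"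
  proof safe
    fix \<omega> assume "\<omega> \<in> space M" "R + 1 < norm (A \<omega>)" "\<not> \<epsilon> < dist (V \<omega>) (A \<omega>)"
    moreover have "norm (A \<omega>) \<le> norm (V \<omega>) + dist (V \<omega>) (A \<omega>)"
      by (metis dist_norm norm_minus_commute norm_triangle_sub add.commute)
    ultimately show "R \<le> norm (V \<omega>)" using \<epsilon> by linarith
  qed
  then have "measure M {\<omega>\<in>space M. R + 1 < norm (A \<omega>)}
      \<le> measure M ({\<omega>\<in>space M. R \<le> norm (V \<omega>)} \<union> {\<omega>\<in>space M. \<epsilon> < dist (V \<omega>) (A \<omega>)})"
    by (intro finite_measure_mono) measurable
  also have "\<dots> \<le> measure M {\<omega>\<in>space M. R \<le> norm (V \<omega>)} + measure M {\<omega>\<in>space M. \<epsilon> < dist (V \<omega>) (A \<omega>)}"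
    by (intro measure_Un_le) measurable
  finally show ?thesis .
qed

text \<open>The converging-together principle, with approximations that are uniform in n.\<close>

lemma tendsto_integral_by_approximation:
  fixes U :: "nat \<Rightarrow> 'a \<Rightarrow> real \<times> real" and V :: "'b \<Rightarrow> real \<times> real" and f :: "real \<times> real \<Rightarrow> real"
  assumes M: "prob_space M" and N: "prob_space N"
    and U[measurable]: "\<And>n. U n \<in> borel_measurable M" and V[measurable]: "V \<in> borel_measurable N"
    and approx: "\<And>\<epsilon>. \<epsilon> > 0 \<Longrightarrow> \<exists>An A. (\<forall>n. An n \<in> borel_measurable M) \<and> A \<in> borel_measurable N \<and>
      (\<forall>g::real\<times>real \<Rightarrow> real. continuous_on UNIV g \<longrightarrow> bounded (range g) \<longrightarrow>
          (\<lambda>n. \<integral>\<omega>. g (An n \<omega>) \<partial>M) \<longlonglongrightarrow> (\<integral>\<omega>. g (A \<omega>) \<partial>N)) \<and>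
      eventually (\<lambda>n. measure M {\<omega>\<in>space M. dist (U n \<omega>) (An n \<omega>) > \<epsilon>} \<le> \<epsilon>) sequentially \<and>
      measure N {\<omega>\<in>space N. dist (V \<omega>) (A \<omega>) > \<epsilon>} \<le> \<epsilon>"
    and f: "continuous_on UNIV f" "bounded (range f)"
  shows "(\<lambda>n. \<integral>\<omega>. f (U n \<omega>) \<partial>M) \<longlonglongrightarrow> (\<integral>\<omega>. f (V \<omega>) \<partial>N)"
proof (rule tendstoI)
  fix r :: real assume r: "r > 0"
  interpret PM: prob_space M by (rule M)
  interpret PN: prob_space N by (rule N)
  have fm[measurable]: "f \<in> borel_measurable borel" using f(1) by (rule borel_measurable_continuous_onI)
  obtain B where B: "\<And>p. \<bar>f p\<bar> \<le> B" using f(2) unfolding bounded_iff by auto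
  then have B0: "B \<ge> 0" by (meson abs_ge_zero order_trans)
  define \<epsilon>0 where "\<epsilon>0 = r / (4 + 12 * B)"
  have e0: "\<epsilon>0 > 0" "(3 + 12 * B) * \<epsilon>0 < r" unfolding \<epsilon>0_def using r B0 by (auto simp: field_simps)
  obtain R where R: "measure N {\<omega>\<in>space N. norm (V \<omega>) \<ge> R} \<le> \<epsilon>0"
    using exists_measure_norm_ge_le[OF N V e0(1)] by blast
  have "uniformly_continuous_on (cball 0 (R+3)) f"
    using f(1) by (intro compact_uniformly_continuous) (auto intro: continuous_on_subset)
  then obtain \<eta> where \<eta>: "\<eta> > 0"
    "\<And>p q. p \<in> cball 0 (R+3) \<Longrightarrow> q \<in> cball 0 (R+3) \<Longrightarrow> dist q p < \<eta> \<Longrightarrow> dist (f q) (f p) < \<epsilon>0"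
    unfolding uniformly_continuous_on_def using e0 by metis
  define \<epsilon> where "\<epsilon> = min (\<eta>/2) (min \<epsilon>0 (1/2))"
  have eps: "\<epsilon> > 0" "\<epsilon> < \<eta>" "\<epsilon> \<le> \<epsilon>0" "\<epsilon> < 1" unfolding \<epsilon>_def using \<eta> e0 by auto
  have fclose: "\<bar>f p - f q\<bar> \<le> \<epsilon>0" if "norm p < R'" "R' \<le> R + 2" "dist p q \<le> \<epsilon>" for p q R'
  proof -
    have "norm q \<le> norm p + dist p q" by (metis dist_norm norm_triangle_sub add.commute norm_minus_commute)
    then show ?thesis using \<eta>(2)[of p q] that eps by (simp add: dist_real_def dist_commute)
  qed
  obtain An A where An[measurable]: "\<And>n. An n \<in> borel_measurable M" and A[measurable]: "A \<in> borel_measurable N"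
    and conv: "\<And>g::real\<times>real \<Rightarrow> real. continuous_on UNIV g \<Longrightarrow> bounded (range g) \<Longrightarrow>
          (\<lambda>n. \<integral>\<omega>. g (An n \<omega>) \<partial>M) \<longlonglongrightarrow> (\<integral>\<omega>. g (A \<omega>) \<partial>N)"
    and evU: "eventually (\<lambda>n. measure M {\<omega>\<in>space M. dist (U n \<omega>) (An n \<omega>) > \<epsilon>} \<le> \<epsilon>) sequentially"
    and VA: "measure N {\<omega>\<in>space N. dist (V \<omega>) (A \<omega>) > \<epsilon>} \<le> \<epsilon>"
    using approx[OF eps(1)] by blast
  have "\<bar>(\<integral>\<omega>. f (V \<omega>) \<partial>N) - (\<integral>\<omega>. f (A \<omega>) \<partial>N)\<bar>
      \<le> \<epsilon>0 + 2 * B * (measure N {\<omega>\<in>space N. R \<le> norm (V \<omega>)} + measure N {\<omega>\<in>space N. \<epsilon> < dist (V \<omega>) (A \<omega>)})"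
    using fclose[of _ R] e0 by (intro abs_integral_diff_le_close[OF N V A fm B]) auto
  also have "\<dots> \<le> \<epsilon>0 + 2 * B * (2 * \<epsilon>0)"
    using R VA eps B0 by (intro add_left_mono mult_left_mono) auto
  finally have limit: "\<bar>(\<integral>\<omega>. f (V \<omega>) \<partial>N) - (\<integral>\<omega>. f (A \<omega>) \<partial>N)\<bar> \<le> \<epsilon>0 + 2 * B * (2 * \<epsilon>0)" .
  have "measure N {\<omega>\<in>space N. R + 1 < norm (A \<omega>)}
      \<le> measure N {\<omega>\<in>space N. R \<le> norm (V \<omega>)} + measure N {\<omega>\<in>space N. \<epsilon> < dist (V \<omega>) (A \<omega>)}"
    using eps by (intro measure_norm_gt_le_close[OF N V A]) auto
  also have "\<dots> \<le> 2 * \<epsilon>0" using R VA eps by simp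
  finally have tight: "eventually (\<lambda>n. measure M {\<omega>\<in>space M. R + 2 \<le> norm (An n \<omega>)} < 3 * \<epsilon>0) sequentially"
    using e0 by (intro eventually_measure_norm_ge_less[OF M N An A conv, of "R + 1"]) auto
  have ev: "eventually (\<lambda>n. dist (\<integral>\<omega>. f (An n \<omega>) \<partial>M) (\<integral>\<omega>. f (A \<omega>) \<partial>N) < \<epsilon>0) sequentially"
    using conv[OF f] e0(1) by (rule tendstoD)
  show "eventually (\<lambda>n. dist (\<integral>\<omega>. f (U n \<omega>) \<partial>M) (\<integral>\<omega>. f (V \<omega>) \<partial>N) < r) sequentially"
    using tight ev evU
  proof eventually_elim
    case (elim n)
    have sym: "{\<omega>\<in>space M. \<epsilon> < dist (An n \<omega>) (U n \<omega>)} = {\<omega>\<in>space M. dist (U n \<omega>) (An n \<omega>) > \<epsilon>}"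
      by (auto simp: dist_commute)
    have "\<bar>(\<integral>\<omega>. f (An n \<omega>) \<partial>M) - (\<integral>\<omega>. f (U n \<omega>) \<partial>M)\<bar>
        \<le> \<epsilon>0 + 2 * B * (measure M {\<omega>\<in>space M. R + 2 \<le> norm (An n \<omega>)} + measure M {\<omega>\<in>space M. \<epsilon> < dist (An n \<omega>) (U n \<omega>)})"
      using fclose[of _ "R + 2"] e0 by (intro abs_integral_diff_le_close[OF M An U fm B]) auto
    also have "\<dots> = \<epsilon>0 + 2 * B * (measure M {\<omega>\<in>space M. R + 2 \<le> norm (An n \<omega>)} + measure M {\<omega>\<in>space M. dist (U n \<omega>) (An n \<omega>) > \<epsilon>})"
      unfolding sym ..
    also have "\<dots> \<le> \<epsilon>0 + 2 * B * (3 * \<epsilon>0 + \<epsilon>0)"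
      using elim(1,3) eps B0 by (intro add_left_mono mult_left_mono) auto
    finally show ?case using limit elim(2) e0(2) unfolding dist_real_def by (simp add: algebra_simps)
  qed
qed

section \<open>Applying the functional limit theorem\<close>

definition skorokhod_continuous :: "((real \<Rightarrow> real) \<Rightarrow> real) \<Rightarrow> bool" where
  "skorokhod_continuous H \<longleftrightarrow>
     (\<forall>x\<in>cadlag01. \<forall>e>0. \<exists>d>0. \<forall>y\<in>cadlag01. skorokhod_dist x y < d \<longrightarrow> \<bar>H x - H y\<bar> < e)"

lemma skorokhod_continuous_pair_sup: "continuous_on UNIV \<Phi> \<Longrightarrow> skorokhod_continuous (pair_sup \<Phi>)"
  unfolding skorokhod_continuous_def using pair_sup_skorokhod_continuous by blast

lemma skorokhod_continuous_compose2:
  fixes g :: "real \<times> real \<Rightarrow> real"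
  assumes H1: "skorokhod_continuous H1" and H2: "skorokhod_continuous H2" and g: "continuous_on UNIV g"
  shows "skorokhod_continuous (\<lambda>x. g (H1 x, H2 x))"
  unfolding skorokhod_continuous_def
proof (intro ballI allI impI)
  fix x :: "real \<Rightarrow> real" and e :: real assume x: "x \<in> cadlag01" and e: "e > 0"
  obtain \<eta> where \<eta>: "\<eta> > 0" "\<And>q. dist q (H1 x, H2 x) < \<eta> \<Longrightarrow> dist (g q) (g (H1 x, H2 x)) < e"
    using g e unfolding continuous_on_iff by (metis UNIV_I)
  obtain d1 where d1: "d1 > 0" "\<And>y. y \<in> cadlag01 \<Longrightarrow> skorokhod_dist x y < d1 \<Longrightarrow> \<bar>H1 x - H1 y\<bar> < \<eta>/2"
    using H1 x \<eta>(1) unfolding skorokhod_continuous_def by (meson half_gt_zero)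
  obtain d2 where d2: "d2 > 0" "\<And>y. y \<in> cadlag01 \<Longrightarrow> skorokhod_dist x y < d2 \<Longrightarrow> \<bar>H2 x - H2 y\<bar> < \<eta>/2"
    using H2 x \<eta>(1) unfolding skorokhod_continuous_def by (meson half_gt_zero)
  show "\<exists>d>0. \<forall>y\<in>cadlag01. skorokhod_dist x y < d \<longrightarrow> \<bar>g (H1 x, H2 x) - g (H1 y, H2 y)\<bar> < e"
  proof (intro exI[of _ "min d1 d2"] conjI ballI impI)
    fix y assume y: "y \<in> cadlag01" "skorokhod_dist x y < min d1 d2"
    have "dist (H1 y, H2 y) (H1 x, H2 x) \<le> dist (H1 y) (H1 x) + dist (H2 y) (H2 x)" by (rule dist_Pair_le)
    also have "\<dots> < \<eta>/2 + \<eta>/2" using d1(2)[OF y(1)] d2(2)[OF y(1)] y(2)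
      by (intro add_strict_mono) (auto simp: dist_real_def abs_minus_commute)
    finally have "dist (g (H1 y, H2 y)) (g (H1 x, H2 x)) < e" using \<eta>(2) by simp
    then show "\<bar>g (H1 x, H2 x) - g (H1 y, H2 y)\<bar> < e" by (simp add: dist_real_def abs_minus_commute)
  qed (use d1 d2 in simp)
qed

lemma tendsto_integral_compose2_conv_distr:
  fixes g :: "real \<times> real \<Rightarrow> real"
  assumes F: "conv_distr_wrt skorokhod_dist cadlag01 M Xs N X"
    and H: "skorokhod_continuous H1" "skorokhod_continuous H2" and g: "continuous_on UNIV g" "bounded (range g)"
    and m1: "\<And>n. (\<lambda>\<omega>. H1 (Xs n \<omega>)) \<in> borel_measurable M" "\<And>n. (\<lambda>\<omega>. H2 (Xs n \<omega>)) \<in> borel_measurable M"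
    and m2: "(\<lambda>\<omega>. H1 (X \<omega>)) \<in> borel_measurable N" "(\<lambda>\<omega>. H2 (X \<omega>)) \<in> borel_measurable N"
  shows "(\<lambda>n. \<integral>\<omega>. g (H1 (Xs n \<omega>), H2 (Xs n \<omega>)) \<partial>M) \<longlonglongrightarrow> (\<integral>\<omega>. g (H1 (X \<omega>), H2 (X \<omega>)) \<partial>N)"
proof -
  have gm: "g \<in> borel_measurable borel" using g(1) by (rule borel_measurable_continuous_onI)
  obtain B where "\<forall>p\<in>range g. norm p \<le> B" using g(2) unfolding bounded_iff by blast
  then have "bounded_continuous_wrt skorokhod_dist cadlag01 (\<lambda>x. g (H1 x, H2 x))"
    using skorokhod_continuous_compose2[OF H g(1)]
    unfolding bounded_continuous_wrt_def skorokhod_continuous_def by auto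
  moreover have "(\<lambda>\<omega>. g (H1 (Xs n \<omega>), H2 (Xs n \<omega>))) \<in> borel_measurable M" for n
    using m1 by (intro measurable_compose[OF _ gm] borel_measurable_Pair) auto
  moreover have "(\<lambda>\<omega>. g (H1 (X \<omega>), H2 (X \<omega>))) \<in> borel_measurable N"
    using m2 by (intro measurable_compose[OF _ gm] borel_measurable_Pair) auto
  ultimately show ?thesis using F unfolding conv_distr_wrt_def by blast
qed

lemma osc_near_le:
  assumes \<delta>: "\<delta> > 0" and mod: "\<And>u v. u \<in> {0..1} \<Longrightarrow> v \<in> {0..1} \<Longrightarrow> \<bar>u - v\<bar> < 8 * \<delta> \<Longrightarrow> \<bar>x u - x v\<bar> < e"
    and e: "e > 0"
  shows "osc_near \<theta> \<delta> x \<le> e"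
  unfolding osc_near_def
proof (rule pair_sup_least)
  fix u v :: real assume u: "u \<in> {0..1}" and v: "v \<in> {0..1}"
  show "osc_integrand \<theta> \<delta> (u, v, x u, x v, x 1) \<le> e"
  proof (cases "\<bar>u - \<theta>\<bar> < 4 * \<delta> \<and> \<bar>v - \<theta>\<bar> < 4 * \<delta>")
    case True
    then have "\<bar>x u - x v\<bar> < e" using mod[OF u v] by linarith
    moreover have "osc_integrand \<theta> \<delta> (u, v, x u, x v, x 1) \<le> \<bar>x u - x v\<bar>"
      unfolding osc_integrand_def window_def by (simp add: clamp01_weights_le)
    ultimately show ?thesis by simp
  next
    case False
    then have "window \<theta> \<delta> 4 u = 0 \<or> window \<theta> \<delta> 4 v = 0"
      unfolding window_def using \<delta> by (auto intro!: clamp01_eq_0 simp: field_simps)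
    then show ?thesis unfolding osc_integrand_def using e by auto
  qed
qed

text \<open>For a continuous path the error term vanishes with \<delta>, by uniform continuity.\<close>

lemma approx_error_small:
  assumes \<theta>: "0 < \<theta>" "\<theta> < 1" and x: "continuous_on {0..1} x" and e: "e > 0"
  shows "\<exists>\<delta>1>0. \<forall>\<delta>. 0 < \<delta> \<and> \<delta> \<le> \<delta>1 \<longrightarrow> approx_error \<theta> \<delta> x \<le> e"
proof -
  define m where "m = min \<theta> (1-\<theta>)"
  have m: "m > 0" unfolding m_def using \<theta> by simp
  define e' where "e' = e * m^4 / 400"
  have e': "e' > 0" unfolding e'_def using e m by simp
  have "uniformly_continuous_on {0..1} x" using x by (intro compact_uniformly_continuous) auto
  then obtain \<eta> where \<eta>: "\<eta> > 0" "\<And>u v. u \<in> {0..1} \<Longrightarrow> v \<in> {0..1} \<Longrightarrow> dist v u < \<eta> \<Longrightarrow> dist (x v) (x u) < e'"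
    unfolding uniformly_continuous_on_def using e' by metis
  define \<delta>1 where "\<delta>1 = min (\<eta>/8) (e' / (\<bar>sup_abs x\<bar> + 1))"
  have "\<delta>1 > 0" unfolding \<delta>1_def using \<eta> e' by (simp add: add_pos_nonneg)
  moreover have "approx_error \<theta> \<delta> x \<le> e" if \<delta>: "0 < \<delta>" "\<delta> \<le> \<delta>1" for \<delta>
  proof -
    have "osc_near \<theta> \<delta> x \<le> e'"
      using \<eta>(2) \<delta> e' unfolding \<delta>1_def by (intro osc_near_le) (auto simp: dist_real_def abs_minus_commute)
    moreover have "\<delta> * sup_abs x \<le> e'"
    proof -
      have "\<delta> * sup_abs x \<le> \<delta> * (\<bar>sup_abs x\<bar> + 1)" using \<delta> by (intro mult_left_mono) auto
      also have "\<dots> \<le> e' / (\<bar>sup_abs x\<bar> + 1) * (\<bar>sup_abs x\<bar> + 1)"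
        using \<delta> unfolding \<delta>1_def by (intro mult_right_mono) auto
      finally show ?thesis by (simp add: add_pos_nonneg)
    qed
    ultimately have "approx_error \<theta> \<delta> x \<le> 200 / m^4 * (e' + e')"
      unfolding approx_error_def m_def[symmetric] using m by (intro mult_left_mono) auto
    also have "\<dots> = e" unfolding e'_def using m by (simp add: field_simps)
    finally show ?thesis .
  qed
  ultimately show ?thesis by blast
qed

lemma eventually_inverse_real_le:
  assumes "\<delta> > 0"
  shows "eventually (\<lambda>n. n \<ge> 1 \<and> 1 / real n \<le> \<delta>) sequentially"
proof -
  obtain n0 :: nat where n0: "1 / \<delta> < real n0" using reals_Archimedean2 by blast
  have "1 / real n \<le> \<delta>" if "Suc n0 \<le> n" for n
  proof -
    have "1 / \<delta> < real n" using n0 that by linarith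
    then show ?thesis using assms that by (simp add: field_simps)
  qed
  then show ?thesis unfolding eventually_sequentially by (intro exI[of _ "Suc n0"]) auto
qed

lemma borel_measurable_Max_insert:
  fixes g :: "nat \<Rightarrow> 'a \<Rightarrow> real"
  assumes "finite K" "\<And>k. k \<in> K \<Longrightarrow> g k \<in> borel_measurable M"
  shows "(\<lambda>\<omega>. Max (insert c ((\<lambda>k. g k \<omega>) ` K))) \<in> borel_measurable M"
  using assms
proof (induction K rule: finite_induct)
  case (insert a K)
  have "Max (insert c ((\<lambda>k. g k \<omega>) ` insert a K)) = max (g a \<omega>) (Max (insert c ((\<lambda>k. g k \<omega>) ` K)))" for \<omega>
  proof -
    have "insert c ((\<lambda>k. g k \<omega>) ` insert a K) = insert (g a \<omega>) (insert c ((\<lambda>k. g k \<omega>) ` K))" by auto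
    then show ?thesis using insert.hyps by (subst Max_insert[symmetric]) auto
  qed
  then show ?case using insert by (simp add: borel_measurable_max)
qed simp

lemma khat_bounds:
  assumes "n \<ge> 1"
  shows "1 \<le> khat n x \<and> khat n x \<le> n"
proof -
  have "Max (cusum n x ` {1..n}) \<in> cusum n x ` {1..n}" using assms by (intro Max_in) auto
  then have "\<exists>k. 1 \<le> k \<and> k \<le> n \<and> cusum n x k = Max (cusum n x ` {1..n})" by auto
  then show ?thesis unfolding khat_def by (rule LeastI2_ex) auto
qed

lemma measurable_khat:
  fixes X :: "'a \<Rightarrow> nat \<Rightarrow> real"
  assumes X: "\<And>j. (\<lambda>\<omega>. X \<omega> j) \<in> borel_measurable M"
  shows "(\<lambda>\<omega>. khat n (X \<omega>)) \<in> measurable M (count_space UNIV)"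
proof -
  have cm[measurable]: "(\<lambda>\<omega>. cusum n (X \<omega>) k) \<in> borel_measurable M" for k
    unfolding cusum_def using X by measurable
  have [measurable]: "(\<lambda>\<omega>. Max (cusum n (X \<omega>) ` {1..n})) \<in> borel_measurable M"
    using cm by (cases "n = 0") (auto intro: borel_measurable_Max[of "{1..n}" "\<lambda>k \<omega>. cusum n (X \<omega>) k", simplified])
  show ?thesis unfolding khat_def by (rule measurable_Least) measurable
qed

lemma borel_measurable_cusum_pair:
  fixes Y :: "nat \<Rightarrow> 'a \<Rightarrow> real" and X :: "'a \<Rightarrow> nat \<Rightarrow> real"
  assumes Y[measurable]: "\<And>j. Y j \<in> borel_measurable M" and X: "\<And>j. (\<lambda>\<omega>. X \<omega> j) \<in> borel_measurable M"
  shows "(\<lambda>\<omega>. (cusum_left (\<lambda>i. Y i \<omega>) (khat n (X \<omega>)), cusum_right n (\<lambda>i. Y i \<omega>) (khat n (X \<omega>))))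
           \<in> borel_measurable M"
proof (rule measurable_compose_countable'[where I=UNIV and g="\<lambda>\<omega>. khat n (X \<omega>)"])
  fix kh :: nat
  show "(\<lambda>\<omega>. (cusum_left (\<lambda>i. Y i \<omega>) kh, cusum_right n (\<lambda>i. Y i \<omega>) kh)) \<in> borel_measurable M"
    unfolding cusum_left_def cusum_right_def
    by (intro borel_measurable_Pair borel_measurable_divide borel_measurable_Max_insert borel_measurable_const)
      measurable
qed (use measurable_khat[OF X] in auto)

lemma borel_measurable_partial_sum_path:
  assumes "\<And>j. Y j \<in> borel_measurable M"
  shows "(\<lambda>\<omega>. partial_sum_path n (\<lambda>j. Y j \<omega>) t) \<in> borel_measurable M"
  unfolding partial_sum_path_def using assms by measurable

section \<open>Convergence to the bridge functionals of the Wiener process\<close>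

locale change_point_setting =
  fixes M :: "'a measure" and Y :: "nat \<Rightarrow> 'a \<Rightarrow> real"
    and N :: "'b measure" and W :: "real \<Rightarrow> 'b \<Rightarrow> real"
    and \<sigma> \<mu> \<theta> :: real and \<Delta> :: "nat \<Rightarrow> real"
  assumes M: "prob_space M"
    and Y_rv: "\<And>i. Y i \<in> borel_measurable M"
    and \<sigma>_pos: "\<sigma> > 0"
    and W: "wiener_process N W"
    and FCLT: "conv_distr_wrt skorokhod_dist cadlag01 M
                 (\<lambda>n \<omega> t. (\<Sum>j\<in>{1..nat \<lfloor>real n * t\<rfloor>}. Y j \<omega>) / sqrt (real n))
                 N (\<lambda>\<omega> t. \<sigma> * W t \<omega>)"
    and \<theta>: "0 < \<theta>" "\<theta> < 1"
    and consistent: "\<And>\<epsilon>. \<epsilon> > 0 \<Longrightarrow>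
          (\<lambda>n. measure M {\<omega>\<in>space M.
             \<bar>real (khat n (\<lambda>i. \<mu> + (if i \<le> nat \<lfloor>real n * \<theta>\<rfloor> then 0 else \<Delta> n) + Y i \<omega>))
                / real n - \<theta>\<bar> > \<epsilon>}) \<longlonglongrightarrow> 0"
begin

definition "sum_path n \<omega> = partial_sum_path n (\<lambda>j. Y j \<omega>)"
definition "limit_path \<omega> = (\<lambda>t. \<sigma> * W t \<omega>)"
definition "khat_obs n \<omega> = khat n (\<lambda>i. \<mu> + (if i \<le> nat \<lfloor>real n * \<theta>\<rfloor> then 0 else \<Delta> n) + Y i \<omega>)"
definition "stat n \<omega> = (cusum_left (\<lambda>i. Y i \<omega>) (khat_obs n \<omega>), cusum_right n (\<lambda>i. Y i \<omega>) (khat_obs n \<omega>))"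
definition "limit_stat \<omega> = (bridge_sup (limit_path \<omega>) \<theta> / sqrt \<theta>,
                             bridge_sup (reverse_path (limit_path \<omega>)) (1-\<theta>) / sqrt (1-\<theta>))"
definition "smooth_stat \<delta> x = (smooth_left \<theta> \<delta> x, smooth_right \<theta> \<delta> x)"
definition "\<delta>max = min (\<theta>/8) ((1-\<theta>)/8)"

lemma \<delta>max_pos: "\<delta>max > 0"
  unfolding \<delta>max_def using \<theta> by simp

lemma borel_measurable_observations:
  "(\<lambda>\<omega>. \<mu> + (if i \<le> nat \<lfloor>real n * \<theta>\<rfloor> then 0 else \<Delta> n) + Y i \<omega>) \<in> borel_measurable M"
  using Y_rv by (intro borel_measurable_add borel_measurable_const)

lemma N: "prob_space N"
  using W unfolding wiener_process_def by auto

lemma FCLT_paths: "conv_distr_wrt skorokhod_dist cadlag01 M sum_path N limit_path"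
proof -
  have "(\<lambda>n \<omega> t. (\<Sum>j\<in>{1..nat \<lfloor>real n * t\<rfloor>}. Y j \<omega>) / sqrt (real n)) = sum_path"
    unfolding sum_path_def partial_sum_path_def by (intro ext) simp
  moreover have "(\<lambda>\<omega> t. \<sigma> * W t \<omega>) = limit_path" unfolding limit_path_def by (intro ext) simp
  ultimately show ?thesis using FCLT by simp
qed

lemma continuous_limit_path: "\<omega> \<in> space N \<Longrightarrow> continuous_on {0..1} (limit_path \<omega>)"
  using W unfolding wiener_process_def limit_path_def by (auto intro: continuous_intros)

lemma split_window_sum_path: "0 < \<delta> \<Longrightarrow> \<delta> \<le> \<delta>max \<Longrightarrow> split_window \<theta> \<delta> (sum_path n \<omega>)"
  unfolding \<delta>max_def sum_path_def by unfold_locales (use \<theta> partial_sum_path_cadlag01 in auto)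

lemma split_window_limit_path: "0 < \<delta> \<Longrightarrow> \<delta> \<le> \<delta>max \<Longrightarrow> \<omega> \<in> space N \<Longrightarrow> split_window \<theta> \<delta> (limit_path \<omega>)"
  unfolding \<delta>max_def
  by unfold_locales (use \<theta> continuous_on_cadlag01[OF continuous_limit_path] in auto)

lemma borel_measurable_pair_sup_paths:
  assumes "continuous_on UNIV \<Phi>"
  shows "(\<lambda>\<omega>. pair_sup \<Phi> (limit_path \<omega>)) \<in> borel_measurable N"
    and "(\<lambda>\<omega>. pair_sup \<Phi> (sum_path n \<omega>)) \<in> borel_measurable M"
proof -
  have "(\<lambda>\<omega>. limit_path \<omega> t) \<in> borel_measurable N" if "t \<in> {0..1}" for t
    using W that unfolding wiener_process_def limit_path_def by (auto intro: borel_measurable_times)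
  then show "(\<lambda>\<omega>. pair_sup \<Phi> (limit_path \<omega>)) \<in> borel_measurable N"
    using assms continuous_on_cadlag01[OF continuous_limit_path] by (intro borel_measurable_pair_sup)
  show "(\<lambda>\<omega>. pair_sup \<Phi> (sum_path n \<omega>)) \<in> borel_measurable M"
    using assms partial_sum_path_cadlag01 borel_measurable_partial_sum_path[OF Y_rv]
    unfolding sum_path_def by (intro borel_measurable_pair_sup)
qed

lemma continuous_integrands:
  assumes "\<delta> > 0"
  shows "continuous_on UNIV (bridge_integrand \<theta> \<delta>)"
    "continuous_on UNIV (reversed_integrand (bridge_integrand (1-\<theta>) \<delta>))"
    "continuous_on UNIV (osc_integrand \<theta> \<delta>)" "continuous_on UNIV abs_integrand"
  using assms \<theta> by (auto intro!: continuous_bridge_integrand continuous_reversed_integrand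
      continuous_osc_integrand continuous_abs_integrand)

lemma borel_measurable_smooth:
  assumes "\<delta> > 0"
  shows "(\<lambda>\<omega>. smooth_left \<theta> \<delta> (limit_path \<omega>)) \<in> borel_measurable N"
    "(\<lambda>\<omega>. smooth_right \<theta> \<delta> (limit_path \<omega>)) \<in> borel_measurable N"
    "(\<lambda>\<omega>. approx_error \<theta> \<delta> (limit_path \<omega>)) \<in> borel_measurable N"
    "(\<lambda>\<omega>. smooth_left \<theta> \<delta> (sum_path n \<omega>)) \<in> borel_measurable M"
    "(\<lambda>\<omega>. smooth_right \<theta> \<delta> (sum_path n \<omega>)) \<in> borel_measurable M"
    "(\<lambda>\<omega>. approx_error \<theta> \<delta> (sum_path n \<omega>)) \<in> borel_measurable M"
  unfolding smooth_left_def smooth_right_def approx_error_def osc_near_def sup_abs_def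
  using borel_measurable_pair_sup_paths[OF continuous_integrands(1)[OF assms]]
    borel_measurable_pair_sup_paths[OF continuous_integrands(2)[OF assms]]
    borel_measurable_pair_sup_paths[OF continuous_integrands(3)[OF assms]]
    borel_measurable_pair_sup_paths[OF continuous_integrands(4)[OF assms]]
  by (auto intro!: borel_measurable_Pair borel_measurable_divide borel_measurable_times borel_measurable_add)

lemma skorokhod_continuous_smooth:
  assumes "\<delta> > 0"
  shows "skorokhod_continuous (smooth_left \<theta> \<delta>)" "skorokhod_continuous (smooth_right \<theta> \<delta>)"
    "skorokhod_continuous (approx_error \<theta> \<delta>)"
proof -
  note pc = continuous_integrands[OF assms, THEN skorokhod_continuous_pair_sup]
  have "continuous_on UNIV (\<lambda>p::real \<times> real. fst p / sqrt \<theta>)"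
    "continuous_on UNIV (\<lambda>p::real \<times> real. fst p / sqrt (1-\<theta>))"
    "continuous_on UNIV (\<lambda>p::real \<times> real. 200 / (min \<theta> (1-\<theta>))^4 * (fst p + \<delta> * snd p))"
    using \<theta> by (auto intro!: continuous_intros)
  from skorokhod_continuous_compose2[OF pc(1) pc(1) this(1)] skorokhod_continuous_compose2[OF pc(2) pc(2) this(2)]
    skorokhod_continuous_compose2[OF pc(3) pc(4) this(3)]
  show "skorokhod_continuous (smooth_left \<theta> \<delta>)" "skorokhod_continuous (smooth_right \<theta> \<delta>)"
    "skorokhod_continuous (approx_error \<theta> \<delta>)"
    unfolding smooth_left_def smooth_right_def approx_error_def osc_near_def sup_abs_def by simp_all
qed

lemma dist_limit_stat_smooth:
  assumes "0 < \<delta>" "\<delta> \<le> \<delta>max" "\<omega> \<in> space N"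
  shows "dist (limit_stat \<omega>) (smooth_stat \<delta> (limit_path \<omega>)) \<le> 2 * approx_error \<theta> \<delta> (limit_path \<omega>)"
proof -
  interpret split_window \<theta> \<delta> "limit_path \<omega>" using split_window_limit_path[OF assms] .
  have "dist (limit_stat \<omega>) (smooth_stat \<delta> (limit_path \<omega>))
      \<le> dist (bridge_sup (limit_path \<omega>) \<theta> / sqrt \<theta>) (smooth_left \<theta> \<delta> (limit_path \<omega>))
        + dist (bridge_sup (reverse_path (limit_path \<omega>)) (1-\<theta>) / sqrt (1-\<theta>)) (smooth_right \<theta> \<delta> (limit_path \<omega>))"
    unfolding limit_stat_def smooth_stat_def by (rule dist_Pair_le)
  then show ?thesis using smooth_left_approx smooth_right_approx by (simp add: dist_real_def)
qed

lemma dist_stat_smooth: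
  assumes \<delta>: "0 < \<delta>" "\<delta> \<le> \<delta>max" and n: "n \<ge> 1" "1 / real n \<le> \<delta>"
    and k: "\<bar>real (khat_obs n \<omega>) / real n - \<theta>\<bar> \<le> \<delta>"
  shows "dist (stat n \<omega>) (smooth_stat \<delta> (sum_path n \<omega>)) \<le> 2 * approx_error \<theta> \<delta> (sum_path n \<omega>)"
proof -
  have kr: "1 \<le> khat_obs n \<omega>" "khat_obs n \<omega> \<le> n" using khat_bounds[OF n(1)] unfolding khat_obs_def by auto
  note w = split_window_sum_path[OF \<delta>, of n \<omega>, unfolded sum_path_def]
  have "dist (stat n \<omega>) (smooth_stat \<delta> (sum_path n \<omega>))
      \<le> dist (cusum_left (\<lambda>i. Y i \<omega>) (khat_obs n \<omega>)) (smooth_left \<theta> \<delta> (sum_path n \<omega>))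
        + dist (cusum_right n (\<lambda>i. Y i \<omega>) (khat_obs n \<omega>)) (smooth_right \<theta> \<delta> (sum_path n \<omega>))"
    unfolding stat_def smooth_stat_def by (rule dist_Pair_le)
  then show ?thesis
    using cusum_left_approx[OF w kr k n(2)] cusum_right_approx[OF w kr k n(2)]
    unfolding sum_path_def by (simp add: dist_real_def)
qed

end

context change_point_setting
begin

lemma approx_error_limit_path_tendsto:
  assumes \<omega>: "\<omega> \<in> space N"
  shows "(\<lambda>i. approx_error \<theta> (\<delta>max / (real i + 1)) (limit_path \<omega>)) \<longlonglongrightarrow> 0"
proof (rule tendstoI)
  fix e :: real assume e: "e > 0"
  obtain \<delta>1 where \<delta>1: "\<delta>1 > 0" "\<And>\<delta>. 0 < \<delta> \<and> \<delta> \<le> \<delta>1 \<Longrightarrow> approx_error \<theta> \<delta> (limit_path \<omega>) \<le> e/2"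
    using approx_error_small[OF \<theta> continuous_limit_path[OF \<omega>], of "e/2"] e by auto
  obtain i0 :: nat where i0: "\<delta>max / \<delta>1 < real i0" using reals_Archimedean2 by blast
  have "dist (approx_error \<theta> (\<delta>max / (real i + 1)) (limit_path \<omega>)) 0 < e" if i: "i \<ge> i0" for i
  proof -
    have pos: "0 < \<delta>max / (real i + 1)" "\<delta>max / (real i + 1) \<le> \<delta>max"
      using \<delta>max_pos by (auto simp: field_simps)
    have "\<delta>max < \<delta>1 * real i0" using i0 \<delta>1 by (simp add: field_simps)
    also have "\<dots> \<le> \<delta>1 * (real i + 1)" using i \<delta>1 by (intro mult_left_mono) auto
    finally have "\<delta>max / (real i + 1) \<le> \<delta>1" by (simp add: field_simps)
    then have "approx_error \<theta> (\<delta>max / (real i + 1)) (limit_path \<omega>) \<le> e/2" using \<delta>1(2) pos by blast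
    moreover have "approx_error \<theta> (\<delta>max / (real i + 1)) (limit_path \<omega>) \<ge> 0"
      using split_window.approx_error_nonneg[OF split_window_limit_path[OF pos \<omega>]] .
    ultimately show ?thesis using e by simp
  qed
  then show "eventually (\<lambda>i. dist (approx_error \<theta> (\<delta>max / (real i + 1)) (limit_path \<omega>)) 0 < e) sequentially"
    unfolding eventually_sequentially by blast
qed

lemma approx_error_limit_path_small:
  assumes c: "c > 0" and e: "e > 0"
  obtains \<delta> where "0 < \<delta>" "\<delta> \<le> \<delta>max" "measure N {\<omega>\<in>space N. approx_error \<theta> \<delta> (limit_path \<omega>) > c} \<le> e"
proof -
  interpret PN: prob_space N by (rule N)
  define d where "d i = \<delta>max / (real i + 1)" for i :: nat
  have dpos: "0 < d i" "d i \<le> \<delta>max" for i unfolding d_def using \<delta>max_pos by (auto simp: field_simps)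
  define S where "S i = {\<omega>\<in>space N. approx_error \<theta> (d i) (limit_path \<omega>) > c}" for i
  have Sm: "S i \<in> sets N" for i unfolding S_def using borel_measurable_smooth(3)[OF dpos(1)] by measurable
  have "(\<lambda>i. \<integral>\<omega>. indicator (S i) \<omega> \<partial>N) \<longlonglongrightarrow> (\<integral>\<omega>. (0::real) \<partial>N)"
  proof (rule integral_dominated_convergence[where w="\<lambda>_. 1"])
    show "AE \<omega> in N. (\<lambda>i. indicator (S i) \<omega> :: real) \<longlonglongrightarrow> 0"
    proof (rule AE_I2)
      fix \<omega> assume \<omega>: "\<omega> \<in> space N"
      have "eventually (\<lambda>i. approx_error \<theta> (d i) (limit_path \<omega>) < c) sequentially"
        using approx_error_limit_path_tendsto[OF \<omega>] c unfolding d_def by (intro order_tendstoD(2)) auto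
      then have "eventually (\<lambda>i. indicator (S i) \<omega> = (0::real)) sequentially"
        by eventually_elim (auto simp: S_def)
      then show "(\<lambda>i. indicator (S i) \<omega> :: real) \<longlonglongrightarrow> 0" by (rule tendsto_eventually)
    qed
  qed (use Sm in \<open>auto simp: indicator_def\<close>)
  then have "(\<lambda>i. measure N (S i)) \<longlonglongrightarrow> 0" using Sm by simp
  then have "eventually (\<lambda>i. measure N (S i) < e) sequentially" using e by (intro order_tendstoD(2)) auto
  then obtain i where "\<forall>j\<ge>i. measure N (S j) < e" unfolding eventually_sequentially by blast
  then have "measure N (S i) < e" by simp
  then show ?thesis unfolding S_def by (intro that[OF dpos(1,2)] less_imp_le)
qed

lemma borel_measurable_limit_stat: "limit_stat \<in> borel_measurable N"
proof (rule borel_measurable_LIMSEQ_metric[where f="\<lambda>i \<omega>. smooth_stat (\<delta>max / (real i + 1)) (limit_path \<omega>)"])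
  show "(\<lambda>\<omega>. smooth_stat (\<delta>max / (real i + 1)) (limit_path \<omega>)) \<in> borel_measurable N" for i
    unfolding smooth_stat_def using \<delta>max_pos by (intro borel_measurable_Pair borel_measurable_smooth) simp_all
next
  fix \<omega> assume \<omega>: "\<omega> \<in> space N"
  show "(\<lambda>i. smooth_stat (\<delta>max / (real i + 1)) (limit_path \<omega>)) \<longlonglongrightarrow> limit_stat \<omega>"
  proof (rule tendsto_dist_iff[THEN iffD2], rule tendsto_sandwich[OF _ _ tendsto_const])
    have "dist (smooth_stat (\<delta>max / (real i + 1)) (limit_path \<omega>)) (limit_stat \<omega>)
        \<le> 2 * approx_error \<theta> (\<delta>max / (real i + 1)) (limit_path \<omega>)" for i
      using dist_limit_stat_smooth[of "\<delta>max / (real i + 1)" \<omega>] \<omega> \<delta>max_pos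
      by (simp add: dist_commute field_simps)
    then show "eventually (\<lambda>i. dist (smooth_stat (\<delta>max / (real i + 1)) (limit_path \<omega>)) (limit_stat \<omega>)
        \<le> 2 * approx_error \<theta> (\<delta>max / (real i + 1)) (limit_path \<omega>)) sequentially"
      by simp
    show "(\<lambda>i. 2 * approx_error \<theta> (\<delta>max / (real i + 1)) (limit_path \<omega>)) \<longlonglongrightarrow> 0"
      using tendsto_mult_right_zero[OF approx_error_limit_path_tendsto[OF \<omega>], of 2] by (simp add: mult.commute)
  qed simp
qed

lemma borel_measurable_stat: "stat n \<in> borel_measurable M"
  unfolding stat_def khat_obs_def by (intro borel_measurable_cusum_pair Y_rv borel_measurable_observations)

lemma limit_stat_close_in_prob:
  assumes \<delta>: "0 < \<delta>" "\<delta> \<le> \<delta>max" and \<epsilon>: "\<epsilon> > 0"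
    and small: "measure N {\<omega>\<in>space N. approx_error \<theta> \<delta> (limit_path \<omega>) > \<epsilon>/8} \<le> \<epsilon>/4"
  shows "measure N {\<omega>\<in>space N. dist (limit_stat \<omega>) (smooth_stat \<delta> (limit_path \<omega>)) > \<epsilon>} \<le> \<epsilon>"
proof -
  interpret PN: prob_space N by (rule N)
  have "measure N {\<omega>\<in>space N. dist (limit_stat \<omega>) (smooth_stat \<delta> (limit_path \<omega>)) > \<epsilon>}
      \<le> measure N {\<omega>\<in>space N. approx_error \<theta> \<delta> (limit_path \<omega>) > \<epsilon>/8}"
  proof (rule PN.finite_measure_mono)
    show "{\<omega>\<in>space N. approx_error \<theta> \<delta> (limit_path \<omega>) > \<epsilon>/8} \<in> sets N"
      using borel_measurable_smooth(3)[OF \<delta>(1)] by measurable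
  qed (use dist_limit_stat_smooth[OF \<delta>] \<epsilon> in force)
  then show ?thesis using small \<epsilon> by linarith
qed

lemma tendsto_integral_approx_error:
  fixes g :: "real \<Rightarrow> real"
  assumes "\<delta> > 0" "continuous_on UNIV g" "bounded (range g)"
  shows "(\<lambda>n. \<integral>\<omega>. g (approx_error \<theta> \<delta> (sum_path n \<omega>)) \<partial>M)
           \<longlonglongrightarrow> (\<integral>\<omega>. g (approx_error \<theta> \<delta> (limit_path \<omega>)) \<partial>N)"
proof -
  have "continuous_on UNIV (\<lambda>p::real \<times> real. g (fst p))" "bounded (range (\<lambda>p::real \<times> real. g (fst p)))"
    using assms(2,3) by (auto intro!: continuous_intros intro: continuous_on_compose2 bounded_subset)
  from tendsto_integral_compose2_conv_distr[OF FCLT_paths skorokhod_continuous_smooth(3)[OF assms(1)]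
      skorokhod_continuous_smooth(3)[OF assms(1)] this] borel_measurable_smooth(3,6)[OF assms(1)]
  show ?thesis by simp
qed

lemma stat_close_in_prob:
  assumes \<delta>: "0 < \<delta>" "\<delta> \<le> \<delta>max" and \<epsilon>: "\<epsilon> > 0"
    and small: "measure N {\<omega>\<in>space N. approx_error \<theta> \<delta> (limit_path \<omega>) > \<epsilon>/8} \<le> \<epsilon>/4"
  shows "eventually (\<lambda>n. measure M {\<omega>\<in>space M. dist (stat n \<omega>) (smooth_stat \<delta> (sum_path n \<omega>)) > \<epsilon>} \<le> \<epsilon>)
           sequentially"
proof -
  interpret PM: prob_space M by (rule M)
  note Em = borel_measurable_smooth(3,6)[OF \<delta>(1)]
  have "{\<omega>\<in>space N. \<epsilon>/8 < norm (approx_error \<theta> \<delta> (limit_path \<omega>))}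
      = {\<omega>\<in>space N. approx_error \<theta> \<delta> (limit_path \<omega>) > \<epsilon>/8}"
    using split_window.approx_error_nonneg[OF split_window_limit_path[OF \<delta>]] by auto
  then have "measure N {\<omega>\<in>space N. \<epsilon>/8 < norm (approx_error \<theta> \<delta> (limit_path \<omega>))} < \<epsilon>/2"
    using small \<epsilon> by simp
  then have ev1: "eventually (\<lambda>n. measure M {\<omega>\<in>space M. \<epsilon>/4 \<le> norm (approx_error \<theta> \<delta> (sum_path n \<omega>))} < \<epsilon>/2)
      sequentially"
    using \<epsilon> Em
    by (intro eventually_measure_norm_ge_less[OF M N _ _ tendsto_integral_approx_error[OF \<delta>(1)],
          where R="\<epsilon>/8" and R'="\<epsilon>/4"]) auto
  have ev2: "eventually (\<lambda>n. measure M {\<omega>\<in>space M. \<bar>real (khat_obs n \<omega>) / real n - \<theta>\<bar> > \<delta>} < \<epsilon>/2) sequentially"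
    using consistent[OF \<delta>(1)] \<epsilon> unfolding khat_obs_def by (intro order_tendstoD(2)) auto
  note ev3 = eventually_inverse_real_le[OF \<delta>(1)]
  show ?thesis
    using ev1 ev2 ev3
  proof eventually_elim
    case (elim n)
    define S1 where "S1 = {\<omega>\<in>space M. \<bar>real (khat_obs n \<omega>) / real n - \<theta>\<bar> > \<delta>}"
    define S2 where "S2 = {\<omega>\<in>space M. \<epsilon>/4 \<le> norm (approx_error \<theta> \<delta> (sum_path n \<omega>))}"
    have S1m: "S1 \<in> sets M" unfolding S1_def khat_obs_def
      using measurable_khat[OF borel_measurable_observations] by measurable
    have S2m: "S2 \<in> sets M" unfolding S2_def using Em by measurable
    have "{\<omega>\<in>space M. dist (stat n \<omega>) (smooth_stat \<delta> (sum_path n \<omega>)) > \<epsilon>} \<subseteq> S1 \<union> S2"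
    proof
      fix \<omega> assume \<omega>: "\<omega> \<in> {\<omega>\<in>space M. dist (stat n \<omega>) (smooth_stat \<delta> (sum_path n \<omega>)) > \<epsilon>}"
      show "\<omega> \<in> S1 \<union> S2"
      proof (cases "\<omega> \<in> S1")
        case False
        then have "\<epsilon> < 2 * approx_error \<theta> \<delta> (sum_path n \<omega>)"
          using \<omega> dist_stat_smooth[OF \<delta>, of n \<omega>] elim(3) unfolding S1_def by fastforce
        then show ?thesis using \<omega> \<epsilon> unfolding S2_def by auto
      qed simp
    qed
    then have "measure M {\<omega>\<in>space M. dist (stat n \<omega>) (smooth_stat \<delta> (sum_path n \<omega>)) > \<epsilon>} \<le> measure M (S1 \<union> S2)"
      using S1m S2m by (intro PM.finite_measure_mono) auto
    also have "\<dots> \<le> measure M S1 + measure M S2" using S1m S2m by (rule measure_Un_le)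
    finally show ?case using elim(1,2) unfolding S1_def S2_def by linarith
  qed
qed

lemma tendsto_integral_stat:
  fixes f :: "real \<times> real \<Rightarrow> real"
  assumes f: "continuous_on UNIV f" "bounded (range f)"
  shows "(\<lambda>n. \<integral>\<omega>. f (stat n \<omega>) \<partial>M) \<longlonglongrightarrow> (\<integral>\<omega>. f (limit_stat \<omega>) \<partial>N)"
proof (rule tendsto_integral_by_approximation[OF M N borel_measurable_stat borel_measurable_limit_stat _ f])
  fix \<epsilon> :: real assume \<epsilon>: "\<epsilon> > 0"
  obtain \<delta> where \<delta>: "0 < \<delta>" "\<delta> \<le> \<delta>max"
    and small: "measure N {\<omega>\<in>space N. approx_error \<theta> \<delta> (limit_path \<omega>) > \<epsilon>/8} \<le> \<epsilon>/4"
    using approx_error_limit_path_small[of "\<epsilon>/8" "\<epsilon>/4"] \<epsilon> by auto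
  note Hm = borel_measurable_smooth[OF \<delta>(1)] and Hj = skorokhod_continuous_smooth[OF \<delta>(1)]
  have "(\<lambda>n. \<integral>\<omega>. g (smooth_stat \<delta> (sum_path n \<omega>)) \<partial>M) \<longlonglongrightarrow> (\<integral>\<omega>. g (smooth_stat \<delta> (limit_path \<omega>)) \<partial>N)"
    if "continuous_on UNIV g" "bounded (range g)" for g :: "real \<times> real \<Rightarrow> real"
    using tendsto_integral_compose2_conv_distr[OF FCLT_paths Hj(1,2) that] by (simp add: smooth_stat_def Hm)
  then show "\<exists>An A. (\<forall>n. An n \<in> borel_measurable M) \<and> A \<in> borel_measurable N \<and>
      (\<forall>g::real\<times>real \<Rightarrow> real. continuous_on UNIV g \<longrightarrow> bounded (range g) \<longrightarrow>
          (\<lambda>n. \<integral>\<omega>. g (An n \<omega>) \<partial>M) \<longlonglongrightarrow> (\<integral>\<omega>. g (A \<omega>) \<partial>N)) \<and>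
      eventually (\<lambda>n. measure M {\<omega>\<in>space M. dist (stat n \<omega>) (An n \<omega>) > \<epsilon>} \<le> \<epsilon>) sequentially \<and>
      measure N {\<omega>\<in>space N. dist (limit_stat \<omega>) (A \<omega>) > \<epsilon>} \<le> \<epsilon>"
    using Hm stat_close_in_prob[OF \<delta> \<epsilon> small] limit_stat_close_in_prob[OF \<delta> \<epsilon> small]
    by (intro exI[of _ "\<lambda>n \<omega>. smooth_stat \<delta> (sum_path n \<omega>)"] exI[of _ "\<lambda>\<omega>. smooth_stat \<delta> (limit_path \<omega>)"])
      (auto simp: smooth_stat_def intro!: borel_measurable_Pair)
qed

end

section \<open>The law of the limit\<close>

definition segment_bridge :: "(real \<Rightarrow> real) \<Rightarrow> real \<Rightarrow> real \<Rightarrow> real \<Rightarrow> real" where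
  "segment_bridge w a L t = (w (a + L * t) - w a) - t * (w (a + L) - w a)"

lemma bridge_sup_eq_SUP_segment_bridge:
  assumes s: "s > 0" and z: "z 0 = 0"
  shows "bridge_sup z s = (SUP t\<in>{0..1}. \<bar>segment_bridge z 0 s t\<bar>)"
proof -
  have im: "{0..s} = (\<lambda>t. s * t) ` {0..1}"
  proof
    show "{0..s} \<subseteq> (\<lambda>t. s * t) ` {0..1}"
    proof
      fix u assume "u \<in> {0..s}"
      then show "u \<in> (\<lambda>t. s * t) ` {0..1}" using s by (intro image_eqI[of _ _ "u / s"]) (auto simp: field_simps)
    qed
  qed (use s in \<open>auto simp: mult_le_cancel_left1\<close>)
  show ?thesis unfolding bridge_sup_def segment_bridge_def im image_image
    using s z by (intro SUP_cong) auto
qed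

lemma bridge_sup_reverse_path:
  assumes a: "a < 1"
  shows "bridge_sup (reverse_path z) (1 - a) = (SUP t\<in>{0..1}. \<bar>segment_bridge z a (1 - a) t\<bar>)"
proof -
  have "\<bar>segment_bridge (reverse_path z) 0 (1 - a) t\<bar> = \<bar>segment_bridge z a (1 - a) (1 - t)\<bar>" for t
  proof -
    have "segment_bridge (reverse_path z) 0 (1 - a) t = - segment_bridge z a (1 - a) (1 - t)"
      unfolding segment_bridge_def reverse_path_def by (simp add: algebra_simps)
    then show ?thesis by simp
  qed
  moreover have "(\<lambda>t. 1 - t) ` {0..1::real} = {0..1}"
    by (auto intro!: image_eqI[of _ "\<lambda>t. 1 - t", where x="1 - _"])
  ultimately have "(SUP t\<in>{0..1}. \<bar>segment_bridge (reverse_path z) 0 (1 - a) t\<bar>)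
      = (SUP t\<in>{0..1}. \<bar>segment_bridge z a (1 - a) t\<bar>)"
    by (metis (no_types, lifting) SUP_cong image_image)
  then show ?thesis using a by (subst bridge_sup_eq_SUP_segment_bridge) (auto simp: reverse_path_def)
qed

lemma grid_max_tendsto_SUP:
  fixes g :: "real \<Rightarrow> real"
  assumes g: "continuous_on {0..1} g"
  shows "(\<lambda>m. Max ((\<lambda>j. g (real j / real (Suc m))) ` {0..Suc m})) \<longlonglongrightarrow> (SUP t\<in>{0..1}. g t)"
proof (rule tendstoI)
  fix e :: real assume e: "e > 0"
  have "compact (g ` {0..1})" using g by (intro compact_continuous_image) auto
  then have bdd: "bdd_above (g ` {0..1})" by (intro bounded_imp_bdd_above compact_imp_bounded)
  have "uniformly_continuous_on {0..1} g" using g by (intro compact_uniformly_continuous) auto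
  then obtain \<eta> where \<eta>: "\<eta> > 0" "\<And>u v. u \<in> {0..1} \<Longrightarrow> v \<in> {0..1} \<Longrightarrow> dist v u < \<eta> \<Longrightarrow> dist (g v) (g u) < e/2"
    unfolding uniformly_continuous_on_def using e by (metis half_gt_zero)
  obtain m0 :: nat where m0: "1 / \<eta> < real m0" using reals_Archimedean2 by blast
  have "dist (Max ((\<lambda>j. g (real j / real (Suc m))) ` {0..Suc m})) (SUP t\<in>{0..1}. g t) < e" if m: "m \<ge> m0" for m
  proof -
    let ?a = "Max ((\<lambda>j. g (real j / real (Suc m))) ` {0..Suc m})"
    have pts: "real j / real (Suc m) \<in> {0..1}" if "j \<in> {0..Suc m}" for j using that by auto
    have "?a \<le> (SUP t\<in>{0..1}. g t)"
      using pts by (intro Max.boundedI) (auto intro!: cSUP_upper[OF _ bdd])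
    moreover have "(SUP t\<in>{0..1}. g t) \<le> ?a + e/2"
    proof (rule cSUP_least)
      fix t :: real assume t: "t \<in> {0..1}"
      let ?j = "nat \<lfloor>t * real (Suc m)\<rfloor>"
      have jb: "real ?j \<le> t * real (Suc m)" "t * real (Suc m) < real ?j + 1"
        using real_nat_floor_bounds[of "t * real (Suc m)"] t by auto
      have "real ?j \<le> real (Suc m)"
        by (rule order.trans[OF jb(1)]) (use t in \<open>auto intro: mult_left_le_one_le\<close>)
      then have jin: "?j \<in> {0..Suc m}" by simp
      have "1 / real (Suc m) < \<eta>"
      proof -
        have "1 / \<eta> < real (Suc m)" using m0 m by linarith
        then show ?thesis using \<eta>(1) by (simp add: field_simps)
      qed
      moreover have "real ?j / real (Suc m) \<le> t" "t < real ?j / real (Suc m) + 1 / real (Suc m)"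
        using jb by (simp_all add: field_simps)
      ultimately have "dist t (real ?j / real (Suc m)) < \<eta>" by (simp add: dist_real_def)
      then have "\<bar>g t - g (real ?j / real (Suc m))\<bar> < e/2"
        using \<eta>(2)[OF pts[OF jin] t] by (simp add: dist_real_def dist_commute)
      moreover have "g (real ?j / real (Suc m)) \<le> ?a" using jin by (intro Max_ge) auto
      ultimately show "g t \<le> ?a + e/2" by linarith
    qed simp
    ultimately show ?thesis using e by (simp add: dist_real_def)
  qed
  then show "eventually (\<lambda>m. dist (Max ((\<lambda>j. g (real j / real (Suc m))) ` {0..Suc m})) (SUP t\<in>{0..1}. g t) < e)
      sequentially"
    unfolding eventually_sequentially by blast
qed

text \<open>The m normalized increments of B over [a, a + L]; for a Wiener process they are i.i.d.
  centred normal with variance 1/m.\<close>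

definition scaled_increments :: "(real \<Rightarrow> 'c \<Rightarrow> real) \<Rightarrow> real \<Rightarrow> real \<Rightarrow> nat \<Rightarrow> 'c \<Rightarrow> nat \<Rightarrow> real" where
  "scaled_increments B a L m \<omega> =
     (\<lambda>i\<in>{..<m}. (B (a + L * real (Suc i) / real m) \<omega> - B (a + L * real i / real m) \<omega>) / sqrt L)"

definition grid_bridge_max :: "nat \<Rightarrow> (nat \<Rightarrow> real) \<Rightarrow> real" where
  "grid_bridge_max m p = Max ((\<lambda>j. \<bar>(\<Sum>i<j. p i) - real j / real m * (\<Sum>i<m. p i)\<bar>) ` {0..m})"

lemma borel_measurable_grid_bridge_max: "grid_bridge_max m \<in> borel_measurable (PiM {..<m} (\<lambda>_. borel))"
proof -
  have sums: "(\<lambda>p::nat \<Rightarrow> real. \<Sum>i<j. p i) \<in> borel_measurable (PiM {..<m} (\<lambda>_. borel))" if "j \<le> m" for j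
    using that by (intro borel_measurable_sum measurable_component_singleton) auto
  have "(\<lambda>p. Max ((\<lambda>j. (\<lambda>j p. \<bar>(\<Sum>i<j. p i) - real j / real m * (\<Sum>i<m. p i)\<bar>) j p) ` {0..m}))
      \<in> borel_measurable (PiM {..<m} (\<lambda>_. borel))"
  proof (rule borel_measurable_Max)
    fix j assume "j \<in> {0..m}"
    then have jm: "j \<le> m" by simp
    show "(\<lambda>p. \<bar>(\<Sum>i<j. p i) - real j / real m * (\<Sum>i<m. p i)\<bar>) \<in> borel_measurable (PiM {..<m} (\<lambda>_. borel))"
      using sums[OF jm] sums[OF order_refl] by measurable
  qed simp
  then show ?thesis unfolding grid_bridge_max_def by simp
qed

lemma Max_image_mult_left:
  fixes g :: "nat \<Rightarrow> real"
  assumes "finite K" "K \<noteq> {}" "c \<ge> 0"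
  shows "Max ((\<lambda>k. c * g k) ` K) = c * Max (g ` K)"
proof -
  have "mono (\<lambda>t. c * t)" using assms(3) by (intro monoI mult_left_mono) auto
  then have "c * Max (g ` K) = Max ((\<lambda>t. c * t) ` g ` K)"
    using assms by (intro mono_Max_commute) auto
  then show ?thesis by (simp add: image_image)
qed

lemma grid_bridge_max_scaled_increments:
  assumes m: "m > 0" and L: "L > 0" and c: "c \<ge> 0"
  shows "c * grid_bridge_max m (scaled_increments B a L m \<omega>)
    = Max ((\<lambda>j. \<bar>segment_bridge (\<lambda>t. c * B t \<omega>) a L (real j / real m)\<bar>) ` {0..m}) / sqrt L"
proof -
  have sums: "(\<Sum>i<j. scaled_increments B a L m \<omega> i) = (B (a + L * real j / real m) \<omega> - B a \<omega>) / sqrt L"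
    if "j \<le> m" for j
  proof -
    have "(\<Sum>i<j. scaled_increments B a L m \<omega> i)
        = (\<Sum>i<j. B (a + L * real (Suc i) / real m) \<omega> - B (a + L * real i / real m) \<omega>) / sqrt L"
      using that by (simp add: scaled_increments_def sum_divide_distrib)
    also have "\<dots> = (B (a + L * real j / real m) \<omega> - B a \<omega>) / sqrt L"
      by (subst sum_lessThan_telescope[where f="\<lambda>i. B (a + L * real i / real m) \<omega>"]) simp
    finally show ?thesis .
  qed
  have "c * \<bar>(\<Sum>i<j. scaled_increments B a L m \<omega> i) - real j / real m * (\<Sum>i<m. scaled_increments B a L m \<omega> i)\<bar>
      = \<bar>segment_bridge (\<lambda>t. c * B t \<omega>) a L (real j / real m)\<bar> / sqrt L" if "j \<in> {0..m}" for j
  proof -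
    let ?D = "\<lambda>k. B (a + L * real k / real m) \<omega> - B a \<omega>"
    have "?D m = B (a + L) \<omega> - B a \<omega>" using m by simp
    then have "segment_bridge (\<lambda>t. c * B t \<omega>) a L (real j / real m) = c * (?D j - real j / real m * ?D m)"
      unfolding segment_bridge_def by (simp add: algebra_simps)
    moreover have "c * \<bar>?D j / sqrt L - real j / real m * (?D m / sqrt L)\<bar> = \<bar>c * (?D j - real j / real m * ?D m)\<bar> / sqrt L"
      unfolding abs_diff_div_common using c L by (simp add: abs_mult)
    ultimately show ?thesis using that sums[of j] sums[of m] by simp
  qed
  then have im: "(\<lambda>j. c * \<bar>(\<Sum>i<j. scaled_increments B a L m \<omega> i) - real j / real m * (\<Sum>i<m. scaled_increments B a L m \<omega> i)\<bar>)
      ` {0..m} = (\<lambda>j. (1 / sqrt L) * \<bar>segment_bridge (\<lambda>t. c * B t \<omega>) a L (real j / real m)\<bar>) ` {0..m}"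
    by (auto intro!: image_cong)
  have "c * grid_bridge_max m (scaled_increments B a L m \<omega>)
      = Max ((\<lambda>j. c * \<bar>(\<Sum>i<j. scaled_increments B a L m \<omega> i) - real j / real m * (\<Sum>i<m. scaled_increments B a L m \<omega> i)\<bar>) ` {0..m})"
    unfolding grid_bridge_max_def by (rule Max_image_mult_left[symmetric]) (use c in auto)
  also have "\<dots> = (1 / sqrt L) * Max ((\<lambda>j. \<bar>segment_bridge (\<lambda>t. c * B t \<omega>) a L (real j / real m)\<bar>) ` {0..m})"
    unfolding im by (rule Max_image_mult_left) (use L in auto)
  finally show ?thesis by simp
qed

lemma tendsto_grid_bridge_max:
  assumes cont: "continuous_on {0..1} (\<lambda>t. B t \<omega>)" and aL: "0 \<le> a" "0 < L" "a + L \<le> 1" and c: "c \<ge> 0"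
  shows "(\<lambda>m. c * grid_bridge_max (Suc m) (scaled_increments B a L (Suc m) \<omega>))
           \<longlonglongrightarrow> (SUP t\<in>{0..1}. \<bar>segment_bridge (\<lambda>t. c * B t \<omega>) a L t\<bar>) / sqrt L"
proof -
  have "(\<lambda>t. a + L * t) ` {0..1} \<subseteq> {0..1}"
  proof (rule image_subsetI)
    fix t :: real assume "t \<in> {0..1}"
    then have "0 \<le> L * t" "L * t \<le> L" using aL by (simp_all add: mult_left_le)
    then show "a + L * t \<in> {0..1}" using aL unfolding atLeastAtMost_iff by linarith
  qed
  then have "continuous_on {0..1} (\<lambda>t. B (a + L * t) \<omega>)"
    by (intro continuous_on_compose2[OF cont] continuous_intros) auto
  then have "continuous_on {0..1} (\<lambda>t. \<bar>segment_bridge (\<lambda>t. c * B t \<omega>) a L t\<bar>)"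
    unfolding segment_bridge_def by (intro continuous_intros)
  from tendsto_divide[OF grid_max_tendsto_SUP[OF this] tendsto_const] aL show ?thesis
    by (subst grid_bridge_max_scaled_increments) (auto simp: c)
qed

definition normal_increment_law :: "nat \<Rightarrow> real measure" where
  "normal_increment_law m = density lborel (\<lambda>x. ennreal (normal_density 0 (sqrt (1 / real m)) x))"

lemma distributed_scaled_increment:
  fixes P :: "'c measure" and B :: "real \<Rightarrow> 'c \<Rightarrow> real"
  assumes W: "wiener_process P B" and a: "0 \<le> a" and L: "0 < L" and aL: "a + L \<le> 1" and i: "i < m"
  shows "distributed P lborel (\<lambda>\<omega>. scaled_increments B a L m \<omega> i)
           (\<lambda>x. ennreal (normal_density 0 (sqrt (1 / real m)) x))"
proof -
  interpret prob_space P using W unfolding wiener_process_def by auto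
  define s where "s k = a + L * real k / real m" for k
  have m: "real m > 0" using i by simp
  have "L * real (Suc i) \<le> L * real m" using i L by (intro mult_left_mono) auto
  then have "L * real (Suc i) / real m \<le> L" using m by (simp add: field_simps)
  then have "s (Suc i) \<le> 1" unfolding s_def using aL by linarith
  moreover have "0 \<le> s i" "s i < s (Suc i)" unfolding s_def using a L m by (simp_all add: divide_strict_right_mono)
  moreover have "s (Suc i) - s i = L / real m" unfolding s_def using m by (simp add: field_simps)
  ultimately have s: "0 \<le> s i" "s i < s (Suc i)" "s (Suc i) \<le> 1" "s (Suc i) - s i = L / real m" by auto
  then have "distributed P lborel (\<lambda>\<omega>. B (s (Suc i)) \<omega> - B (s i) \<omega>)
      (\<lambda>x. ennreal (normal_density 0 (sqrt (s (Suc i) - s i)) x))"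
    using W unfolding wiener_process_def by blast
  then have "distributed P lborel (\<lambda>\<omega>. 0 + (1 / sqrt L) * (B (s (Suc i)) \<omega> - B (s i) \<omega>))
      (\<lambda>x. ennreal (normal_density (0 + (1 / sqrt L) * 0) (\<bar>1 / sqrt L\<bar> * sqrt (s (Suc i) - s i)) x))"
    by (rule normal_density_affine) (use s L in auto)
  moreover have "\<bar>1 / sqrt L\<bar> * sqrt (s (Suc i) - s i) = sqrt (1 / real m)"
    unfolding s(4) using L m by (simp add: real_sqrt_divide)
  ultimately show ?thesis using i unfolding scaled_increments_def s_def by simp
qed

lemma distr_scaled_increments:
  fixes P :: "'c measure" and B :: "real \<Rightarrow> 'c \<Rightarrow> real"
  assumes W: "wiener_process P B" and a: "0 \<le> a" and L: "0 < L" and aL: "a + L \<le> 1" and m: "m > 0"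
  shows "distr P (PiM {..<m} (\<lambda>_. borel)) (scaled_increments B a L m) = PiM {..<m} (\<lambda>_. normal_increment_law m)"
proof -
  interpret prob_space P using W unfolding wiener_process_def by auto
  define s where "s k = a + L * real k / real m" for k
  have "0 \<le> s 0" "s m \<le> 1" "\<forall>i<m. s i \<le> s (Suc i)"
    unfolding s_def using a aL L m by (auto intro!: divide_right_mono)
  then have "indep_vars (\<lambda>_. borel) (\<lambda>i \<omega>. B (s (Suc i)) \<omega> - B (s i) \<omega>) {..<m}"
    using W unfolding wiener_process_def by blast
  then have ind: "indep_vars (\<lambda>_. borel) (\<lambda>i \<omega>. (B (s (Suc i)) \<omega> - B (s i) \<omega>) / sqrt L) {..<m}"
    by (rule indep_vars_compose2) auto
  have X: "scaled_increments B a L m \<omega> i = (B (s (Suc i)) \<omega> - B (s i) \<omega>) / sqrt L" if "i < m" for i \<omega>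
    using that unfolding scaled_increments_def s_def by simp
  have dist: "distributed P lborel (\<lambda>\<omega>. (B (s (Suc i)) \<omega> - B (s i) \<omega>) / sqrt L)
      (\<lambda>x. ennreal (normal_density 0 (sqrt (1 / real m)) x))" if "i < m" for i
    using distributed_scaled_increment[OF W a L aL that] X[OF that] by simp
  have "distr P (PiM {..<m} (\<lambda>_. borel)) (\<lambda>\<omega>. \<lambda>i\<in>{..<m}. (B (s (Suc i)) \<omega> - B (s i) \<omega>) / sqrt L)
      = PiM {..<m} (\<lambda>i. distr P borel (\<lambda>\<omega>. (B (s (Suc i)) \<omega> - B (s i) \<omega>) / sqrt L))"
    using ind dist m unfolding distributed_def
    by (subst indep_vars_iff_distr_eq_PiM'[symmetric]) (auto simp: measurable_lborel1)
  also have "\<dots> = PiM {..<m} (\<lambda>_. normal_increment_law m)"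
  proof (rule PiM_cong)
    fix i assume "i \<in> {..<m}"
    then have "distr P lborel (\<lambda>\<omega>. (B (s (Suc i)) \<omega> - B (s i) \<omega>) / sqrt L) = normal_increment_law m"
      using dist unfolding distributed_def normal_increment_law_def by auto
    moreover have "distr P borel (\<lambda>\<omega>. (B (s (Suc i)) \<omega> - B (s i) \<omega>) / sqrt L)
        = distr P lborel (\<lambda>\<omega>. (B (s (Suc i)) \<omega> - B (s i) \<omega>) / sqrt L)"
      by (rule distr_cong) auto
    ultimately show "distr P borel (\<lambda>\<omega>. (B (s (Suc i)) \<omega> - B (s i) \<omega>) / sqrt L) = normal_increment_law m"
      by simp
  qed simp
  finally show ?thesis unfolding scaled_increments_def s_def .
qed

lemma measurable_scaled_increments:
  fixes P :: "'c measure" and B :: "real \<Rightarrow> 'c \<Rightarrow> real"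
  assumes W: "wiener_process P B" and aL: "0 \<le> a" "0 < L" "a + L \<le> 1"
  shows "scaled_increments B a L m \<in> measurable P (PiM {..<m} (\<lambda>_. borel))"
proof -
  have Bm: "B t \<in> borel_measurable P" if "t \<in> {0..1}" for t using W that unfolding wiener_process_def by auto
  have pt: "a + L * real k / real m \<in> {0..1}" if "k \<le> m" for k
  proof -
    have "L * real k / real m \<le> L"
      using that aL by (cases "m = 0") (auto simp: field_simps intro: mult_left_mono)
    then show ?thesis using aL by auto
  qed
  have "a + L * real (Suc i) / real m \<in> {0..1}" "a + L * real i / real m \<in> {0..1}" if "i \<in> {..<m}" for i
    using pt[of "Suc i"] pt[of i] that by auto
  then show ?thesis unfolding scaled_increments_def
    by (intro measurable_restrict borel_measurable_divide borel_measurable_diff Bm borel_measurable_const)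
qed

text \<open>Increments over [0,\<theta>] and over [\<theta>,1] are disjoint blocks of one family of independent increments.\<close>

lemma indep_scaled_increments_blocks:
  fixes P :: "'c measure" and B :: "real \<Rightarrow> 'c \<Rightarrow> real"
  assumes W: "wiener_process P B" and \<theta>: "0 < \<theta>" "\<theta> < 1" and m: "m > 0"
  shows "prob_space.indep_var P (PiM {..<m} (\<lambda>_. borel)) (scaled_increments B 0 \<theta> m)
           (PiM {..<m} (\<lambda>_. borel)) (scaled_increments B \<theta> (1-\<theta>) m)"
proof -
  interpret prob_space P using W unfolding wiener_process_def by auto
  define s where "s i = (if i \<le> m then \<theta> * real i / real m else \<theta> + (1-\<theta>) * real (i - m) / real m)" for i
  have "s i \<le> s (Suc i)" for i
  proof -
    consider "Suc i \<le> m" | "i = m" | "i > m" by linarith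
    then show ?thesis
      by cases (use \<theta> m in \<open>auto intro!: divide_right_mono mult_left_mono simp: s_def of_nat_diff\<close>)
  qed
  moreover have "0 \<le> s 0" "s (2*m) \<le> 1" unfolding s_def using m by (auto simp: of_nat_diff)
  ultimately have "indep_vars (\<lambda>_. borel) (\<lambda>i \<omega>. B (s (Suc i)) \<omega> - B (s i) \<omega>) {..<2*m}"
    using W unfolding wiener_process_def by blast
  then have "indep_var (PiM {..<m} (\<lambda>_. borel)) (\<lambda>\<omega>. \<lambda>i\<in>{..<m}. B (s (Suc i)) \<omega> - B (s i) \<omega>)
                      (PiM {m..<2*m} (\<lambda>_. borel)) (\<lambda>\<omega>. \<lambda>i\<in>{m..<2*m}. B (s (Suc i)) \<omega> - B (s i) \<omega>)"
    by (rule indep_var_restrict) auto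
  then have "indep_var (PiM {..<m} (\<lambda>_. borel)) ((\<lambda>p. \<lambda>i\<in>{..<m}. p i / sqrt \<theta>) \<circ> (\<lambda>\<omega>. \<lambda>i\<in>{..<m}. B (s (Suc i)) \<omega> - B (s i) \<omega>))
                  (PiM {..<m} (\<lambda>_. borel)) ((\<lambda>p. \<lambda>i\<in>{..<m}. p (m + i) / sqrt (1-\<theta>)) \<circ> (\<lambda>\<omega>. \<lambda>i\<in>{m..<2*m}. B (s (Suc i)) \<omega> - B (s i) \<omega>))"
    by (rule indep_var_compose)
      (auto intro!: measurable_restrict borel_measurable_divide measurable_component_singleton)
  moreover have "(\<lambda>p. \<lambda>i\<in>{..<m}. p i / sqrt \<theta>) \<circ> (\<lambda>\<omega>. \<lambda>i\<in>{..<m}. B (s (Suc i)) \<omega> - B (s i) \<omega>)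
      = scaled_increments B 0 \<theta> m"
    by (auto simp: scaled_increments_def s_def fun_eq_iff)
  moreover have "(\<lambda>p. \<lambda>i\<in>{..<m}. p (m + i) / sqrt (1-\<theta>)) \<circ> (\<lambda>\<omega>. \<lambda>i\<in>{m..<2*m}. B (s (Suc i)) \<omega> - B (s i) \<omega>)
      = scaled_increments B \<theta> (1-\<theta>) m"
    using m by (auto simp: scaled_increments_def s_def fun_eq_iff field_simps)
  ultimately show ?thesis by simp
qed

lemma indep_scaled_increments_paths:
  fixes P :: "'c measure" and W1 W2 :: "real \<Rightarrow> 'c \<Rightarrow> real"
  assumes P: "prob_space P"
    and ind: "prob_space.indep_var P
             (Pi\<^sub>M {0..1} (\<lambda>_. borel)) (\<lambda>\<omega>. restrict (\<lambda>t. W1 t \<omega>) {0..1})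
             (Pi\<^sub>M {0..1} (\<lambda>_. borel)) (\<lambda>\<omega>. restrict (\<lambda>t. W2 t \<omega>) {0..1})"
    and m: "m > 0"
  shows "prob_space.indep_var P (PiM {..<m} (\<lambda>_. borel)) (scaled_increments W1 0 1 m)
           (PiM {..<m} (\<lambda>_. borel)) (scaled_increments W2 0 1 m)"
proof -
  interpret prob_space P by (rule P)
  define g where "g p = (\<lambda>i\<in>{..<m}. (p (0 + 1 * real (Suc i) / real m) - p (0 + 1 * real i / real m)) / sqrt 1)"
    for p :: "real \<Rightarrow> real"
  have pts: "0 + 1 * real (Suc i) / real m \<in> {0..1}" "0 + 1 * real i / real m \<in> {0..1}" if "i \<in> {..<m}" for i
    using that m by auto
  have "g \<in> measurable (PiM {0..1} (\<lambda>_. borel)) (PiM {..<m} (\<lambda>_. borel))"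
    unfolding g_def
    by (intro measurable_restrict borel_measurable_divide borel_measurable_diff measurable_component_singleton
        borel_measurable_const pts) auto
  then have "indep_var (PiM {..<m} (\<lambda>_. borel)) (g \<circ> (\<lambda>\<omega>. restrict (\<lambda>t. W1 t \<omega>) {0..1}))
                  (PiM {..<m} (\<lambda>_. borel)) (g \<circ> (\<lambda>\<omega>. restrict (\<lambda>t. W2 t \<omega>) {0..1}))"
    by (intro indep_var_compose[OF ind])
  moreover have "g \<circ> (\<lambda>\<omega>. restrict (\<lambda>t. W t \<omega>) {0..1}) = scaled_increments W 0 1 m" for W :: "real \<Rightarrow> 'c \<Rightarrow> real"
    unfolding g_def scaled_increments_def comp_def by (intro ext restrict_ext) (use pts in auto)
  ultimately show ?thesis by simp
qed

text \<open>For every grid, the grid approximations of the two limit functionals have the same joint law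
  as those of two independent Brownian bridges: both are images of a pair of independent
  vectors of i.i.d. normal increments.\<close>

lemma integral_grid_bridge_max_eq:
  fixes N :: "'b measure" and W :: "real \<Rightarrow> 'b \<Rightarrow> real"
    and N' :: "'c measure" and W1 W2 :: "real \<Rightarrow> 'c \<Rightarrow> real" and f :: "real \<times> real \<Rightarrow> real"
  assumes W: "wiener_process N W" and \<theta>: "0 < \<theta>" "\<theta> < 1"
    and W1: "wiener_process N' W1" and W2: "wiener_process N' W2"
    and ind: "prob_space.indep_var N'
             (Pi\<^sub>M {0..1} (\<lambda>_. borel)) (\<lambda>\<omega>. restrict (\<lambda>t. W1 t \<omega>) {0..1})
             (Pi\<^sub>M {0..1} (\<lambda>_. borel)) (\<lambda>\<omega>. restrict (\<lambda>t. W2 t \<omega>) {0..1})"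
    and fm: "f \<in> borel_measurable borel" and m: "m > 0"
  shows "(\<integral>\<omega>. f (\<sigma> * grid_bridge_max m (scaled_increments W 0 \<theta> m \<omega>),
                 \<sigma> * grid_bridge_max m (scaled_increments W \<theta> (1-\<theta>) m \<omega>)) \<partial>N)
       = (\<integral>\<omega>. f (\<sigma> * grid_bridge_max m (scaled_increments W1 0 1 m \<omega>),
                 \<sigma> * grid_bridge_max m (scaled_increments W2 0 1 m \<omega>)) \<partial>N')"
proof -
  define S where "S = PiM {..<m} (\<lambda>_. borel :: real measure)"
  define Q where "Q = PiM {..<m} (\<lambda>_. normal_increment_law m)"
  define h where "h pq = f (\<sigma> * grid_bridge_max m (fst pq), \<sigma> * grid_bridge_max m (snd pq))" for pq
  have Gm: "grid_bridge_max m \<in> borel_measurable S" unfolding S_def by (rule borel_measurable_grid_bridge_max)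
  have hm: "h \<in> borel_measurable (S \<Otimes>\<^sub>M S)" unfolding h_def
    by (rule measurable_compose[OF _ fm], intro borel_measurable_Pair borel_measurable_times borel_measurable_const
        measurable_compose[OF measurable_fst Gm] measurable_compose[OF measurable_snd Gm])
  have N: "prob_space N" and N': "prob_space N'" using W W1 unfolding wiener_process_def by auto
  have law: "distr P (T \<Otimes>\<^sub>M T) (\<lambda>\<omega>. (X \<omega>, Y \<omega>)) = R \<Otimes>\<^sub>M R"
    if P: "prob_space P" and XY: "prob_space.indep_var P T X T Y" "distr P T X = R" "distr P T Y = R"
    for P :: "'d measure" and T R :: "(nat \<Rightarrow> real) measure" and X Y
  proof -
    interpret prob_space P by (rule P)
    show ?thesis using XY(1) unfolding indep_var_distribution_eq XY(2,3) by simp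
  qed
  have lawN: "distr N (S \<Otimes>\<^sub>M S) (\<lambda>\<omega>. (scaled_increments W 0 \<theta> m \<omega>, scaled_increments W \<theta> (1-\<theta>) m \<omega>)) = Q \<Otimes>\<^sub>M Q"
    unfolding S_def Q_def using \<theta> m
    by (intro law[OF N indep_scaled_increments_blocks[OF W \<theta> m]] distr_scaled_increments[OF W]) auto
  have lawN': "distr N' (S \<Otimes>\<^sub>M S) (\<lambda>\<omega>. (scaled_increments W1 0 1 m \<omega>, scaled_increments W2 0 1 m \<omega>)) = Q \<Otimes>\<^sub>M Q"
    unfolding S_def Q_def using m
    by (intro law[OF N' indep_scaled_increments_paths[OF N' ind m]] distr_scaled_increments[OF W1]
        distr_scaled_increments[OF W2]) auto
  have Xm: "scaled_increments W 0 \<theta> m \<in> measurable N S" "scaled_increments W \<theta> (1-\<theta>) m \<in> measurable N S"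
    "scaled_increments W1 0 1 m \<in> measurable N' S" "scaled_increments W2 0 1 m \<in> measurable N' S"
    unfolding S_def using \<theta> by (auto intro!: measurable_scaled_increments[OF W] measurable_scaled_increments[OF W1]
        measurable_scaled_increments[OF W2])
  have "(\<integral>\<omega>. f (\<sigma> * grid_bridge_max m (scaled_increments W 0 \<theta> m \<omega>),
                 \<sigma> * grid_bridge_max m (scaled_increments W \<theta> (1-\<theta>) m \<omega>)) \<partial>N)
      = integral\<^sup>L (distr N (S \<Otimes>\<^sub>M S) (\<lambda>\<omega>. (scaled_increments W 0 \<theta> m \<omega>, scaled_increments W \<theta> (1-\<theta>) m \<omega>))) h"
    by (subst integral_distr[OF measurable_Pair[OF Xm(1,2)] hm]) (simp add: h_def)
  also have "\<dots> = integral\<^sup>L (distr N' (S \<Otimes>\<^sub>M S) (\<lambda>\<omega>. (scaled_increments W1 0 1 m \<omega>, scaled_increments W2 0 1 m \<omega>))) h"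
    unfolding lawN lawN' ..
  also have "\<dots> = (\<integral>\<omega>. f (\<sigma> * grid_bridge_max m (scaled_increments W1 0 1 m \<omega>),
                 \<sigma> * grid_bridge_max m (scaled_increments W2 0 1 m \<omega>)) \<partial>N')"
    by (subst integral_distr[OF measurable_Pair[OF Xm(3,4)] hm]) (simp add: h_def)
  finally show ?thesis .
qed

lemma tendsto_integral_pointwise:
  fixes Xm :: "nat \<Rightarrow> 'a \<Rightarrow> real \<times> real" and f :: "real \<times> real \<Rightarrow> real"
  assumes P: "prob_space P" and Xm: "\<And>m. Xm m \<in> borel_measurable P"
    and lim: "\<And>\<omega>. \<omega> \<in> space P \<Longrightarrow> (\<lambda>m. Xm m \<omega>) \<longlonglongrightarrow> X \<omega>"
    and f: "continuous_on UNIV f" "bounded (range f)"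
  shows "(\<lambda>m. \<integral>\<omega>. f (Xm m \<omega>) \<partial>P) \<longlonglongrightarrow> (\<integral>\<omega>. f (X \<omega>) \<partial>P)"
proof -
  interpret prob_space P by (rule P)
  obtain B where B: "\<And>p. norm (f p) \<le> B" using f(2) unfolding bounded_iff by auto
  have fm: "f \<in> borel_measurable borel" using f(1) by (rule borel_measurable_continuous_onI)
  have fc: "isCont f p" for p using f(1) continuous_on_eq_continuous_at by blast
  show ?thesis
  proof (rule integral_dominated_convergence[where w="\<lambda>_. B"])
    have "X \<in> borel_measurable P" using Xm lim by (rule borel_measurable_LIMSEQ_metric)
    then show "(\<lambda>\<omega>. f (X \<omega>)) \<in> borel_measurable P" using fm by measurable
    show "(\<lambda>\<omega>. f (Xm m \<omega>)) \<in> borel_measurable P" for m using Xm fm by measurable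
    show "AE \<omega> in P. (\<lambda>m. f (Xm m \<omega>)) \<longlonglongrightarrow> f (X \<omega>)"
      by (intro AE_I2 isCont_tendsto_compose[OF fc] lim)
  qed (use B in auto)
qed

context change_point_setting
begin

lemma tendsto_grid_limit_stat:
  assumes \<omega>: "\<omega> \<in> space N"
  shows "(\<lambda>m. (\<sigma> * grid_bridge_max (Suc m) (scaled_increments W 0 \<theta> (Suc m) \<omega>),
               \<sigma> * grid_bridge_max (Suc m) (scaled_increments W \<theta> (1-\<theta>) (Suc m) \<omega>))) \<longlonglongrightarrow> limit_stat \<omega>"
proof -
  have W: "limit_path \<omega> 0 = 0" "continuous_on {0..1} (\<lambda>t. W t \<omega>)"
    using W \<omega> unfolding wiener_process_def limit_path_def by auto
  have "limit_stat \<omega> = ((SUP t\<in>{0..1}. \<bar>segment_bridge (limit_path \<omega>) 0 \<theta> t\<bar>) / sqrt \<theta>,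
                         (SUP t\<in>{0..1}. \<bar>segment_bridge (limit_path \<omega>) \<theta> (1-\<theta>) t\<bar>) / sqrt (1-\<theta>))"
    unfolding limit_stat_def using \<theta> W(1)
    by (simp add: bridge_sup_eq_SUP_segment_bridge bridge_sup_reverse_path[symmetric])
  then show ?thesis
    unfolding limit_path_def using \<theta> \<sigma>_pos
    by (simp only:) (intro tendsto_Pair tendsto_grid_bridge_max W(2); simp)
qed

lemma tendsto_grid_bridge:
  fixes N' :: "'c measure" and W' :: "real \<Rightarrow> 'c \<Rightarrow> real"
  assumes W': "wiener_process N' W'" and \<omega>: "\<omega> \<in> space N'"
  shows "(\<lambda>m. \<sigma> * grid_bridge_max (Suc m) (scaled_increments W' 0 1 (Suc m) \<omega>))
           \<longlonglongrightarrow> \<sigma> * (SUP t\<in>{0..1}. \<bar>bbridge W' t \<omega>\<bar>)"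
proof -
  have W0: "W' 0 \<omega> = 0" and Wc: "continuous_on {0..1} (\<lambda>t. W' t \<omega>)"
    using W' \<omega> unfolding wiener_process_def by auto
  have "segment_bridge (\<lambda>t. 1 * W' t \<omega>) 0 1 t = bbridge W' t \<omega>" for t
    unfolding segment_bridge_def bbridge_def using W0 by simp
  then show ?thesis
    using tendsto_mult_left[OF tendsto_grid_bridge_max[where B=W' and \<omega>=\<omega> and a=0 and L=1 and c=1, OF Wc], of \<sigma>]
    by simp
qed

lemma integral_limit_stat:
  fixes N' :: "'c measure" and W1 W2 :: "real \<Rightarrow> 'c \<Rightarrow> real" and f :: "real \<times> real \<Rightarrow> real"
  assumes W1: "wiener_process N' W1" and W2: "wiener_process N' W2"
    and ind: "prob_space.indep_var N'
             (Pi\<^sub>M {0..1} (\<lambda>_. borel)) (\<lambda>\<omega>. restrict (\<lambda>t. W1 t \<omega>) {0..1})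
             (Pi\<^sub>M {0..1} (\<lambda>_. borel)) (\<lambda>\<omega>. restrict (\<lambda>t. W2 t \<omega>) {0..1})"
    and f: "continuous_on UNIV f" "bounded (range f)"
  shows "(\<integral>\<omega>. f (limit_stat \<omega>) \<partial>N) = (\<integral>\<omega>. f (\<sigma> * (SUP t\<in>{0..1}. \<bar>bbridge W1 t \<omega>\<bar>),
                  \<sigma> * (SUP t\<in>{0..1}. \<bar>bbridge W2 t \<omega>\<bar>)) \<partial>N')"
proof -
  have N': "prob_space N'" using W1 unfolding wiener_process_def by auto
  have fm: "f \<in> borel_measurable borel" using f(1) by (rule borel_measurable_continuous_onI)
  have Gm: "grid_bridge_max (Suc m) \<in> borel_measurable (PiM {..<Suc m} (\<lambda>_. borel))" for m
    by (rule borel_measurable_grid_bridge_max)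
  have "(\<lambda>m. \<integral>\<omega>. f (\<sigma> * grid_bridge_max (Suc m) (scaled_increments W 0 \<theta> (Suc m) \<omega>),
             \<sigma> * grid_bridge_max (Suc m) (scaled_increments W \<theta> (1-\<theta>) (Suc m) \<omega>)) \<partial>N)
      \<longlonglongrightarrow> (\<integral>\<omega>. f (limit_stat \<omega>) \<partial>N)" (is "?A \<longlonglongrightarrow> _")
    using \<theta> by (intro tendsto_integral_pointwise[OF N _ tendsto_grid_limit_stat f] borel_measurable_Pair
        borel_measurable_times borel_measurable_const measurable_compose[OF measurable_scaled_increments[OF W] Gm]) auto
  moreover have "(\<lambda>m. \<integral>\<omega>. f (\<sigma> * grid_bridge_max (Suc m) (scaled_increments W1 0 1 (Suc m) \<omega>),
             \<sigma> * grid_bridge_max (Suc m) (scaled_increments W2 0 1 (Suc m) \<omega>)) \<partial>N')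
      \<longlonglongrightarrow> (\<integral>\<omega>. f (\<sigma> * (SUP t\<in>{0..1}. \<bar>bbridge W1 t \<omega>\<bar>), \<sigma> * (SUP t\<in>{0..1}. \<bar>bbridge W2 t \<omega>\<bar>)) \<partial>N')"
      (is "?B \<longlonglongrightarrow> _")
    by (intro tendsto_integral_pointwise[OF N' _ _ f] borel_measurable_Pair borel_measurable_times
        borel_measurable_const measurable_compose[OF measurable_scaled_increments[OF W1] Gm]
        measurable_compose[OF measurable_scaled_increments[OF W2] Gm] tendsto_Pair
        tendsto_grid_bridge[OF W1] tendsto_grid_bridge[OF W2]) auto
  moreover have "?A = ?B"
    using integral_grid_bridge_max_eq[OF W \<theta> W1 W2 ind fm, where \<sigma>=\<sigma>] by simp
  ultimately show ?thesis using LIMSEQ_unique by auto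
qed

end

theorem lemmaB2:
  fixes M :: "'a measure" and Y :: "nat \<Rightarrow> 'a \<Rightarrow> real"
    and N :: "'b measure" and W :: "real \<Rightarrow> 'b \<Rightarrow> real"
    and \<sigma> \<mu> \<theta> :: real and \<Delta> :: "nat \<Rightarrow> real"
  assumes "prob_space M"
    and Y_rv: "\<And>i. Y i \<in> borel_measurable M"
    and Y_int: "\<And>i. integrable M (Y i)"
    and Y_mean: "\<And>i. (\<integral>\<omega>. Y i \<omega> \<partial>M) = 0"
    and \<sigma>_pos: "\<sigma> > 0"
    and W: "wiener_process N W"
    and FCLT: "conv_distr_wrt skorokhod_dist cadlag01 M
                 (\<lambda>n \<omega> t. (\<Sum>j\<in>{1..nat \<lfloor>real n * t\<rfloor>}. Y j \<omega>) / sqrt (real n))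
                 N (\<lambda>\<omega> t. \<sigma> * W t \<omega>)"
    and \<theta>: "0 < \<theta>" "\<theta> < 1"
    and consistent: "\<And>\<epsilon>. \<epsilon> > 0 \<Longrightarrow>
          (\<lambda>n. measure M {\<omega>\<in>space M.
             \<bar>real (khat n (\<lambda>i. \<mu> + (if i \<le> nat \<lfloor>real n * \<theta>\<rfloor> then 0 else \<Delta> n) + Y i \<omega>))
                / real n - \<theta>\<bar> > \<epsilon>}) \<longlonglongrightarrow> 0"
  shows "\<forall>(N' :: 'c measure) W1 W2. wiener_process N' W1 \<longrightarrow> wiener_process N' W2 \<longrightarrow>
           prob_space.indep_var N'
             (Pi\<^sub>M {0..1} (\<lambda>_. borel)) (\<lambda>\<omega>. restrict (\<lambda>t. W1 t \<omega>) {0..1})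
             (Pi\<^sub>M {0..1} (\<lambda>_. borel)) (\<lambda>\<omega>. restrict (\<lambda>t. W2 t \<omega>) {0..1}) \<longrightarrow>
         conv_distr_R2 M
           (\<lambda>n \<omega>. let kh = khat n (\<lambda>i. \<mu> + (if i \<le> nat \<lfloor>real n * \<theta>\<rfloor> then 0 else \<Delta> n) + Y i \<omega>)
             in ( Max (insert 0 ((\<lambda>k. \<bar>(\<Sum>i=1..k. Y i \<omega>)
                          - real k / real kh * (\<Sum>i=1..kh. Y i \<omega>)\<bar>) ` {1..kh}))
                   / sqrt (real kh),
                  Max (insert 0 ((\<lambda>k. \<bar>(\<Sum>i\<in>{kh<..k}. Y i \<omega>)
                          - real (k - kh) / real (n - kh) * (\<Sum>i\<in>{kh<..n}. Y i \<omega>)\<bar>) ` {kh<..n}))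
                   / sqrt (real (n - kh))))
           N'
           (\<lambda>\<omega>. (\<sigma> * (SUP t\<in>{0..1}. \<bar>bbridge W1 t \<omega>\<bar>),
                  \<sigma> * (SUP t\<in>{0..1}. \<bar>bbridge W2 t \<omega>\<bar>)))"
proof -
  interpret change_point_setting M Y N W \<sigma> \<mu> \<theta> \<Delta>
    by (rule change_point_setting.intro) fact+
  have "conv_distr_R2 M stat N' (\<lambda>\<omega>. (\<sigma> * (SUP t\<in>{0..1}. \<bar>bbridge W1 t \<omega>\<bar>), \<sigma> * (SUP t\<in>{0..1}. \<bar>bbridge W2 t \<omega>\<bar>)))"
    if "wiener_process N' W1" "wiener_process N' W2"
      "prob_space.indep_var N' (Pi\<^sub>M {0..1} (\<lambda>_. borel)) (\<lambda>\<omega>. restrict (\<lambda>t. W1 t \<omega>) {0..1})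
         (Pi\<^sub>M {0..1} (\<lambda>_. borel)) (\<lambda>\<omega>. restrict (\<lambda>t. W2 t \<omega>) {0..1})"
    for N' :: "'c measure" and W1 W2
    unfolding conv_distr_R2_def using tendsto_integral_stat integral_limit_stat[OF that] by simp
  then show ?thesis
    unfolding stat_def[abs_def] khat_obs_def cusum_left_def cusum_right_def Let_def by blast
qed

end
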